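(* Let $Z$ be a fat point scheme in $\mathbb{P}^1\times\mathbb{P}^1$, $m=|\alpha_Z|$, $m'=|\beta_Z|$, and define $B_C=(H_Z(m-1,0),H_Z(m-1,1),\dots,H_Z(m-1,m'-1))$ and $B_R=(H_Z(0,m'-1),H_Z(1,m'-1),\dots,H_Z(m-1,m'-1))$. Then $\Delta B_C=\alpha_Z^*$ and $\Delta B_R=\beta_Z^*$ (where the conjugate partitions are padded with zeros to the lengths $m'$ and $m$ respectively).
   Context: $\mathbf{k}$ algebraically closed, $R=\mathbf{k}[x_0,x_1,y_0,y_1]$ bigraded with $\deg x_i=(1,0)$, $\deg y_i=(0,1)$; a fat point scheme $Z=\{(P_1;m_1),\dots,(P_s;m_s)\}$ has ideal $I_Z=\bigcap\wp_{P_i}^{m_i}$ (where $[a_0:a_1]\times[b_0:b_1]$ has ideal $(a_1x_0-a_0x_1,b_1y_0-b_0y_1)$) and Hilbert function $H_Z(i,j)=\dim_{\mathbf{k}}(R/I_Z)_{(i,j)}$. With $\pi_1(\mathrm{Supp}\,Z)=\{R_1,\dots,R_r\}$, $\pi_2(\mathrm{Supp}\,Z)=\{Q_1,\dots,Q_t\}$ and $m_{ij}$ the multiplicity of $R_i\times Q_j$ ($0$ if absent): $l_i=\max_j m_{ij}$, $a_{i,k}=\sum_j(m_{ij}-k)_+$ ($0\le k\le l_i-1$), $\alpha_Z$ = all $a_{i,k}$ in non-increasing order; $l'_j=\max_i m_{ij}$, $b_{j,k}=\sum_i(m_{ij}-k)_+$ ($0\le k\le l'_j-1$), $\beta_Z$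 = all $b_{j,k}$ in non-increasing order; $(n)_+=\max\{0,n\}$. For a tuple $p=(p_1,\dots,p_k)$, $\Delta p=(p_1,p_2-p_1,\dots,p_k-p_{k-1})$. For a partition $\lambda=(\lambda_1\ge\dots\ge\lambda_n)$ of positive integers, its conjugate is $\lambda^*=(\lambda^*_1,\dots,\lambda^*_{\lambda_1})$ with $\lambda^*_i=\#\{j:\lambda_j\ge i\}$. *)

theory Defs
  imports "HOL-Library.Poly_Mapping" "HOL-Library.Multiset"
          "HOL-Computational_Algebra.Polynomial"
begin

text \<open>Polynomials in variables indexed by nat (monomials are finitely supported
  exponent vectors); R is the subring of polynomials in the variables 0,1,2,3,
  where x0 = var 0, x1 = var 1, y0 = var 2, y1 = var 3.\<close>

type_synonym 'k mpol = "(nat \<Rightarrow>\<^sub>0 nat) \<Rightarrow>\<^sub>0 'k"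

definition cst :: "'k::comm_ring_1 \<Rightarrow> 'k mpol" where
  "cst c = Poly_Mapping.single 0 c"

definition var :: "nat \<Rightarrow> 'k::comm_ring_1 mpol" where
  "var i = Poly_Mapping.single (Poly_Mapping.single i 1) 1"

definition ringR :: "'k::comm_ring_1 mpol set" where
  "ringR = {F. \<forall>\<mu>\<in>Poly_Mapping.keys F. Poly_Mapping.keys \<mu> \<subseteq> {0,1,2,3}}"

definition bihom :: "nat \<Rightarrow> nat \<Rightarrow> 'k::comm_ring_1 mpol set" where
  "bihom i j = {F. \<forall>\<mu>\<in>Poly_Mapping.keys F. Poly_Mapping.keys \<mu> \<subseteq> {0,1,2,3}
       \<and> Poly_Mapping.lookup \<mu> 0 + Poly_Mapping.lookup \<mu> 1 = i \<and> Poly_Mapping.lookup \<mu> 2 + Poly_Mapping.lookup \<mu> 3 = j}"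

definition kscale :: "'k::field \<Rightarrow> 'k mpol \<Rightarrow> 'k mpol" where
  "kscale c F = cst c * F"

definition kdim :: "'k::field mpol set \<Rightarrow> nat" where
  "kdim V = vector_space.dim kscale V"

text \<open>A point of P1 is represented by a nonzero pair (a0,a1) of homogeneous coordinates.\<close>
definition proj_eq :: "'k::field \<times> 'k \<Rightarrow> 'k \<times> 'k \<Rightarrow> bool" where
  "proj_eq a c \<longleftrightarrow> fst a * snd c = snd a * fst c"

definition proj_class :: "'k::field \<times> 'k \<Rightarrow> ('k \<times> 'k) set" where
  "proj_class a = {c. c \<noteq> (0,0) \<and> proj_eq c a}"

text \<open>A fat point scheme Z = {(P_1;m_1),...,(P_s;m_s)} is a list of entries
  ((a,b),m): P = [a0:a1] x [b0:b1], multiplicity m \<ge> 1, points pairwise distinct.\<close>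
type_synonym 'k fatpts = "((('k \<times> 'k) \<times> ('k \<times> 'k)) \<times> nat) list"

definition fat_point_scheme :: "'k::field fatpts \<Rightarrow> bool" where
  "fat_point_scheme Z \<longleftrightarrow>
     (\<forall>((a,b),m)\<in>set Z. a \<noteq> (0,0) \<and> b \<noteq> (0,0) \<and> 1 \<le> m) \<and>
     (\<forall>i<length Z. \<forall>j<length Z. i \<noteq> j \<longrightarrow>
        \<not> (proj_eq (fst (fst (Z!i))) (fst (fst (Z!j))) \<and>
           proj_eq (snd (fst (Z!i))) (snd (fst (Z!j)))))"

text \<open>The ideal wp_P^m = (a1 x0 - a0 x1, b1 y0 - b0 y1)^m of R, i.e. the ideal of R
  generated by the products L1^k L2^(m-k), k = 0..m.\<close>
definition lin1 :: "('k::field \<times> 'k) \<Rightarrow> 'k mpol" where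
  "lin1 a = cst (snd a) * var 0 - cst (fst a) * var 1"

definition lin2 :: "('k::field \<times> 'k) \<Rightarrow> 'k mpol" where
  "lin2 b = cst (snd b) * var 2 - cst (fst b) * var 3"

definition pt_ideal_pow :: "('k::field \<times> 'k) \<times> ('k \<times> 'k) \<Rightarrow> nat \<Rightarrow> 'k mpol set" where
  "pt_ideal_pow P m = {F. \<exists>g. (\<forall>k\<le>m. g k \<in> ringR) \<and>
       F = (\<Sum>k\<le>m. g k * lin1 (fst P) ^ k * lin2 (snd P) ^ (m - k))}"

definition fat_ideal :: "'k::field fatpts \<Rightarrow> 'k mpol set" where
  "fat_ideal Z = ringR \<inter> (\<Inter>(P,m)\<in>set Z. pt_ideal_pow P m)"

text \<open>Hilbert function H_Z(i,j) = dim_k (R/I_Z)_(i,j) = dim_k R_(i,j) - dim_k (I_Z)_(i,j)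
  (I_Z is bihomogeneous, so (R/I_Z)_(i,j) = R_(i,j) / (I_Z \<inter> R_(i,j))).\<close>
definition hilb :: "'k::field fatpts \<Rightarrow> nat \<Rightarrow> nat \<Rightarrow> nat" where
  "hilb Z i j = kdim (bihom i j :: 'k mpol set) - kdim (fat_ideal Z \<inter> bihom i j)"

definition rows :: "'k::field fatpts \<Rightarrow> ('k \<times> 'k) set set" where
  "rows Z = (\<lambda>((a,b),m). proj_class a) ` set Z"

definition cols :: "'k::field fatpts \<Rightarrow> ('k \<times> 'k) set set" where
  "cols Z = (\<lambda>((a,b),m). proj_class b) ` set Z"

definition mult :: "'k::field fatpts \<Rightarrow> ('k \<times> 'k) set \<Rightarrow> ('k \<times> 'k) set \<Rightarrow> nat" where
  "mult Z C D = sum_list (map snd (filter (\<lambda>((a,b),m). proj_class a = C \<and> proj_class b = D) Z))"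

definition desc_list :: "nat multiset \<Rightarrow> nat list" where
  "desc_list M = rev (sorted_list_of_multiset M)"

definition alphaZ :: "'k::field fatpts \<Rightarrow> nat list" where
  "alphaZ Z = desc_list (\<Sum>C\<in>rows Z.
      mset (map (\<lambda>k. \<Sum>D\<in>cols Z. mult Z C D - k) [0..<Max ((mult Z C) ` cols Z)]))"

definition betaZ :: "'k::field fatpts \<Rightarrow> nat list" where
  "betaZ Z = desc_list (\<Sum>D\<in>cols Z.
      mset (map (\<lambda>k. \<Sum>C\<in>rows Z. mult Z C D - k) [0..<Max ((\<lambda>C. mult Z C D) ` rows Z)]))"

definition conjugate :: "nat list \<Rightarrow> nat list" where
  "conjugate lam = map (\<lambda>i. length (filter (\<lambda>x. i \<le> x) lam)) [1..<Suc (foldr max lam 0)]"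

definition pad0 :: "nat list \<Rightarrow> nat \<Rightarrow> nat list" where
  "pad0 xs n = xs @ replicate (n - length xs) 0"

definition Delta :: "int list \<Rightarrow> int list" where
  "Delta p = map (\<lambda>(u,v). u - v) (zip p (0 # p))"

end

theory Submission
  imports Defs
begin

(* Group the points of Z into rows: the points R_i x Q_j with a fixed first coordinate R_i,
  on all of which the linear form L_i of R_i in x0, x1 vanishes.
  After a linear change of the x-coordinates making L_i = x0, a bihomogeneous form
  F = sum_u x0^u x1^(i-u) G_u(y) vanishes to order m at R_i x Q if and only if G_u is
  divisible by M_Q^(m-u) for every u < m, where M_Q is the linear form of Q. Since the
  forms M_Q of distinct Q are coprime, the forms of bidegree (i,j) in the ideal of the row
  have codimension sum_u min(a_(i,u), j+1).
  In x-degree i >= m - 1 = (sum_i l_i) - 1 the rows do not interact: the multiples of the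
  L_i^(l_i), which lie in the ideals of the respective rows, together span all of R_(i,j),
  so the codimensions of the rows add up (a Chinese remainder argument). Hence
  H_Z(m-1, j) = sum_(a in alpha_Z) min(a, j+1), whose first differences in j count the
  entries a >= j+1, that is, they form the conjugate partition. The statement for
  beta_Z follows by exchanging the two factors of P1 x P1.
  Nothing here uses that k is algebraically closed; the argument works over any field. *)

lemma poly_mapping_eq_sum_single: "(F::('a \<Rightarrow>\<^sub>0 'b::comm_monoid_add))
    = (\<Sum>\<nu>\<in>Poly_Mapping.keys F. Poly_Mapping.single \<nu> (Poly_Mapping.lookup F \<nu>))"
proof (rule poly_mapping_eqI)
  fix k
  show "Poly_Mapping.lookup F k
      = Poly_Mapping.lookup (\<Sum>\<nu>\<in>Poly_Mapping.keys F. Poly_Mapping.single \<nu> (Poly_Mapping.lookup F \<nu>)) k"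
    by (simp add: lookup_sum lookup_single when_def in_keys_iff)
qed

lemma cst_add: "cst (a + b) = cst a + (cst b :: 'k::comm_ring_1 mpol)"
  by (simp add: cst_def single_add)
lemma cst_mult: "cst (a * b) = cst a * (cst b :: 'k::comm_ring_1 mpol)"
  by (simp add: cst_def mult_single)
lemma cst_0[simp]: "cst 0 = (0 :: 'k::comm_ring_1 mpol)"
  by (simp add: cst_def)
lemma cst_1[simp]: "cst 1 = (1 :: 'k::comm_ring_1 mpol)"
  by (simp add: cst_def)
lemma cst_uminus: "cst (- a) = - (cst a :: 'k::comm_ring_1 mpol)"
  by (simp add: cst_def single_uminus)
lemma cst_diff: "cst (a - b) = cst a - (cst b :: 'k::comm_ring_1 mpol)"
  by (simp add: cst_def single_diff)
lemma cst_power: "cst (a ^ n) = (cst a :: 'k::comm_ring_1 mpol) ^ n"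
  by (induction n) (auto simp: cst_mult)
lemma cst_eq_iff[simp]: "cst a = (cst b :: 'k::comm_ring_1 mpol) \<longleftrightarrow> a = b"
  using inj_single[of 0] unfolding cst_def inj_def by metis
lemma cst_eq_0_iff[simp]: "cst a = (0 :: 'k::comm_ring_1 mpol) \<longleftrightarrow> a = 0"
  using cst_eq_iff[of a 0] by simp
lemma cst_single: "cst c * Poly_Mapping.single \<nu> d = Poly_Mapping.single \<nu> (c * d)"
  by (simp add: cst_def mult_single)

definition mon_subst :: "(nat \<Rightarrow> 'k::comm_ring_1 mpol) \<Rightarrow> (nat \<Rightarrow>\<^sub>0 nat) \<Rightarrow> 'k mpol" where
  "mon_subst f \<nu> = (\<Prod>v\<in>Poly_Mapping.keys \<nu>. f v ^ Poly_Mapping.lookup \<nu> v)"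

definition poly_subst :: "(nat \<Rightarrow> 'k::comm_ring_1 mpol) \<Rightarrow> 'k mpol \<Rightarrow> 'k mpol" where
  "poly_subst f F = (\<Sum>\<nu>\<in>Poly_Mapping.keys F. cst (Poly_Mapping.lookup F \<nu>) * mon_subst f \<nu>)"

lemma mon_subst_alt:
  assumes "finite T" "Poly_Mapping.keys \<nu> \<subseteq> T"
  shows "mon_subst f \<nu> = (\<Prod>v\<in>T. f v ^ Poly_Mapping.lookup \<nu> v)"
  unfolding mon_subst_def
  by (rule prod.mono_neutral_left) (use assms in \<open>auto simp: in_keys_iff\<close>)

lemma mon_subst_add: "mon_subst f (\<mu> + \<nu>) = mon_subst f \<mu> * mon_subst f \<nu>"
proof -
  let ?T = "Poly_Mapping.keys \<mu> \<union> Poly_Mapping.keys \<nu>"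
  have k: "Poly_Mapping.keys (\<mu> + \<nu>) \<subseteq> ?T" by (rule keys_add)
  show ?thesis
    by (simp add: mon_subst_alt[OF _ k] mon_subst_alt[of ?T \<mu>] mon_subst_alt[of ?T \<nu>] lookup_add power_add prod.distrib)
qed

lemma mon_subst_0[simp]: "mon_subst f 0 = 1"
  by (simp add: mon_subst_def)

lemma mon_subst_single: "mon_subst f (Poly_Mapping.single v n) = f v ^ n"
  by (cases "n = 0") (auto simp: mon_subst_def)

lemma poly_subst_alt:
  assumes "finite S" "Poly_Mapping.keys F \<subseteq> S"
  shows "poly_subst f F = (\<Sum>\<nu>\<in>S. cst (Poly_Mapping.lookup F \<nu>) * mon_subst f \<nu>)"
  unfolding poly_subst_def
  by (rule sum.mono_neutral_left) (use assms in \<open>auto simp: in_keys_iff\<close>)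

lemma poly_subst_add: "poly_subst f (F + G) = poly_subst f F + poly_subst f G"
proof -
  let ?S = "Poly_Mapping.keys F \<union> Poly_Mapping.keys G"
  have k: "Poly_Mapping.keys (F + G) \<subseteq> ?S" by (rule keys_add)
  show ?thesis
    by (simp add: poly_subst_alt[OF _ k] poly_subst_alt[of ?S F] poly_subst_alt[of ?S G] lookup_add cst_add
        distrib_right sum.distrib)
qed

lemma poly_subst_0[simp]: "poly_subst f 0 = 0"
  by (simp add: poly_subst_def)

lemma poly_subst_uminus: "poly_subst f (- F) = - poly_subst f F"
  by (simp add: poly_subst_def cst_uminus sum_negf)

lemma poly_subst_diff: "poly_subst f (F - G) = poly_subst f F - poly_subst f G"
  using poly_subst_add[of f F "- G"] by (simp add: poly_subst_uminus)

lemma poly_subst_sum: "poly_subst f (\<Sum>x\<in>A. g x) = (\<Sum>x\<in>A. poly_subst f (g x))"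
  by (induction A rule: infinite_finite_induct) (auto simp: poly_subst_add)

lemma poly_subst_single: "poly_subst f (Poly_Mapping.single \<nu> c) = cst c * mon_subst f \<nu>"
  by (cases "c = 0") (auto simp: poly_subst_def)

lemma mult_expand:
  "(F::'k::comm_ring_1 mpol) * G = (\<Sum>\<mu>\<in>Poly_Mapping.keys F. \<Sum>\<nu>\<in>Poly_Mapping.keys G.
      Poly_Mapping.single (\<mu> + \<nu>) (Poly_Mapping.lookup F \<mu> * Poly_Mapping.lookup G \<nu>))"
proof -
  have "F * G = (\<Sum>\<mu>\<in>Poly_Mapping.keys F. Poly_Mapping.single \<mu> (Poly_Mapping.lookup F \<mu>)) *
      (\<Sum>\<nu>\<in>Poly_Mapping.keys G. Poly_Mapping.single \<nu> (Poly_Mapping.lookup G \<nu>))"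
    using poly_mapping_eq_sum_single[of F] poly_mapping_eq_sum_single[of G] by simp
  also have "\<dots> = (\<Sum>\<mu>\<in>Poly_Mapping.keys F. \<Sum>\<nu>\<in>Poly_Mapping.keys G.
      Poly_Mapping.single \<mu> (Poly_Mapping.lookup F \<mu>) * Poly_Mapping.single \<nu> (Poly_Mapping.lookup G \<nu>))"
    by (simp add: sum_product)
  finally show ?thesis by (simp add: mult_single)
qed

lemma poly_subst_mult: "poly_subst f (F * G) = poly_subst f F * poly_subst f G"
proof -
  have "poly_subst f (F * G) = (\<Sum>\<mu>\<in>Poly_Mapping.keys F. \<Sum>\<nu>\<in>Poly_Mapping.keys G.
      cst (Poly_Mapping.lookup F \<mu> * Poly_Mapping.lookup G \<nu>) * mon_subst f (\<mu> + \<nu>))"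
    by (subst mult_expand) (simp add: poly_subst_sum poly_subst_single)
  also have "\<dots> = (\<Sum>\<mu>\<in>Poly_Mapping.keys F. \<Sum>\<nu>\<in>Poly_Mapping.keys G.
      (cst (Poly_Mapping.lookup F \<mu>) * mon_subst f \<mu>) * (cst (Poly_Mapping.lookup G \<nu>) * mon_subst f \<nu>))"
    by (simp add: mon_subst_add cst_mult mult_ac)
  also have "\<dots> = poly_subst f F * poly_subst f G"
    by (simp add: poly_subst_def sum_product)
  finally show ?thesis .
qed

lemma poly_subst_cst[simp]: "poly_subst f (cst c) = cst c"
  by (simp add: cst_def poly_subst_single)

lemma poly_subst_one[simp]: "poly_subst f 1 = 1"
  using poly_subst_cst[of f 1] by simp

lemma poly_subst_var[simp]: "poly_subst f (var i) = f i"
  by (simp add: var_def poly_subst_single mon_subst_single)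

lemma poly_subst_power: "poly_subst f (F ^ n) = poly_subst f F ^ n"
  by (induction n) (auto simp: poly_subst_mult)

lemma poly_subst_prod: "poly_subst f (\<Prod>x\<in>A. g x) = (\<Prod>x\<in>A. poly_subst f (g x))"
  by (induction A rule: infinite_finite_induct) (auto simp: poly_subst_mult)

lemma var_power: "var v ^ n
    = (Poly_Mapping.single (Poly_Mapping.single v n) 1 :: 'k::comm_ring_1 mpol)"
  by (induction n) (auto simp: var_def mult_single single_add[symmetric])

lemma prod_single_1: "(\<Prod>x\<in>A. Poly_Mapping.single (g x) (1::'k::comm_ring_1))
    = Poly_Mapping.single (\<Sum>x\<in>A. g x) 1"
  by (induction A rule: infinite_finite_induct) (auto simp: mult_single)

lemma mon_subst_var: "mon_subst var \<nu> = (Poly_Mapping.single \<nu> 1 :: 'k::comm_ring_1 mpol)"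
proof -
  have "mon_subst var \<nu>
      = (\<Prod>v\<in>Poly_Mapping.keys \<nu>. Poly_Mapping.single (Poly_Mapping.single v (Poly_Mapping.lookup \<nu> v)) (1::'k))"
    unfolding mon_subst_def by (simp add: var_power)
  also have "\<dots> = Poly_Mapping.single \<nu> 1"
    by (subst prod_single_1) (simp add: poly_mapping_eq_sum_single[of \<nu>, symmetric])
  finally show ?thesis .
qed

lemma poly_subst_var_id[simp]: "poly_subst var F = F"
proof -
  have "poly_subst var F
      = (\<Sum>\<nu>\<in>Poly_Mapping.keys F. Poly_Mapping.single \<nu> (Poly_Mapping.lookup F \<nu>))"
    unfolding poly_subst_def by (simp add: mon_subst_var cst_single)
  then show ?thesis using poly_mapping_eq_sum_single[of F] by simp
qed

lemma poly_subst_mon_subst: "poly_subst g (mon_subst f \<nu>) = mon_subst (\<lambda>v. poly_subst g (f v)) \<nu>"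
  by (simp add: mon_subst_def poly_subst_prod poly_subst_power)

lemma poly_subst_poly_subst: "poly_subst g (poly_subst f F) = poly_subst (\<lambda>v. poly_subst g (f v)) F"
proof -
  have "poly_subst g (poly_subst f F)
      = poly_subst g (\<Sum>\<nu>\<in>Poly_Mapping.keys F. cst (Poly_Mapping.lookup F \<nu>) * mon_subst f \<nu>)"
    by (simp add: poly_subst_def)
  also have "\<dots> = (\<Sum>\<nu>\<in>Poly_Mapping.keys F. cst (Poly_Mapping.lookup F \<nu>)
      * mon_subst (\<lambda>v. poly_subst g (f v)) \<nu>)"
    by (simp add: poly_subst_sum poly_subst_mult poly_subst_mon_subst)
  finally show ?thesis by (simp add: poly_subst_def)
qed

section \<open>Dimension theory for finitely spanned subspaces\<close>

text \<open>The space of all polynomials is infinite dimensional, so the locale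
  \<open>finite_dimensional_vector_space\<close> does not apply; instead we work with subspaces
  contained in the span of a finite set.\<close>

context vector_space
begin

definition fin_dim :: "'b set \<Rightarrow> bool" where
  "fin_dim S \<longleftrightarrow> (\<exists>W. finite W \<and> S \<subseteq> local.span W)"

lemma fin_dim_subset: "local.fin_dim T \<Longrightarrow> S \<subseteq> T \<Longrightarrow> local.fin_dim S"
  unfolding fin_dim_def by blast

lemma fin_dim_independent_finite:
  assumes "local.fin_dim S" "B \<subseteq> S" "local.independent B"
  shows "finite B"
proof -
  obtain W where "finite W" "S \<subseteq> local.span W" using assms(1) fin_dim_def by blast
  then show ?thesis using independent_span_bound assms(2,3) by blast
qed

lemma finite_basis_exists:
  assumes "local.fin_dim S"
  obtains B where "B \<subseteq> S" "local.independent B" "S \<subseteq> local.span B" "card B = local.dim S" "finite B"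
  using basis_exists fin_dim_independent_finite[OF assms] by metis

lemma dim_mono_fin_dim:
  assumes "local.fin_dim T" "S \<subseteq> T"
  shows "local.dim S \<le> local.dim T"
proof -
  obtain C where "T \<subseteq> local.span C" "card C = local.dim T" "finite C"
    using finite_basis_exists[OF assms(1)] by blast
  then show ?thesis using dim_le_card[of S C] assms(2) by auto
qed

lemma dim_zero_space: "local.dim {0} = 0"
  using dim_span_eq_card_independent[OF independent_empty] by simp

lemma independent_Un:
  assumes S: "local.independent S" and T: "local.independent T"
    and ST: "local.span S \<inter> local.span T \<subseteq> {0}"
  shows "local.independent (S \<union> T)"
proof -
  have not_dep: "a \<notin> local.span ((A \<union> B) - {a})"
    if A: "local.independent A" "a \<in> A" and AB: "local.span A \<inter> local.span B \<subseteq> {0}" for A B a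
  proof
    assume "a \<in> local.span ((A \<union> B) - {a})"
    moreover have "(A \<union> B) - {a} \<subseteq> (A - {a}) \<union> B" by blast
    ultimately have "a \<in> local.span ((A - {a}) \<union> B)" using span_mono by blast
    then obtain x y where xy: "a = x + y" "x \<in> local.span (A - {a})" "y \<in> local.span B"
      unfolding span_Un by blast
    have "x \<in> local.span A" using xy(2) span_mono[of "A - {a}" A] by blast
    then have "a - x \<in> local.span A" by (rule span_diff[OF span_base[OF A(2)]])
    moreover have "a - x = y" using xy(1) by simp
    ultimately have "y = 0" using xy(3) AB by blast
    then have "a \<in> local.span (A - {a})" using xy(1,2) by simp
    then show False using A unfolding dependent_def by blast
  qed
  have TS: "local.span T \<inter> local.span S \<subseteq> {0}" using ST by blast
  show ?thesis
    unfolding dependent_def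
  proof
    assume "\<exists>a\<in>S \<union> T. a \<in> local.span (S \<union> T - {a})"
    then obtain a where a: "a \<in> S \<union> T" "a \<in> local.span (S \<union> T - {a})" by blast
    have "S \<union> T = T \<union> S" by blast
    then show False
      using a not_dep[OF S _ ST, of a] not_dep[OF T _ TS, of a] by force
  qed
qed

lemma span_Int_span_independent:
  assumes "local.independent (S \<union> T)" "S \<inter> T = {}"
  shows "local.span S \<inter> local.span T \<subseteq> {0}"
proof
  fix x assume "x \<in> local.span S \<inter> local.span T"
  then obtain s0 q t0 r where s0: "finite s0" "s0 \<subseteq> S" "x = (\<Sum>v\<in>s0. q v *s v)"
    and t0: "finite t0" "t0 \<subseteq> T" "x = (\<Sum>v\<in>t0. r v *s v)"
    unfolding span_explicit by blast
  define u where "u v = (if v \<in> s0 then q v else - r v)" for v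
  have disj: "s0 \<inter> t0 = {}" using s0 t0 assms(2) by blast
  have "(\<Sum>v\<in>s0 \<union> t0. u v *s v) = (\<Sum>v\<in>s0. u v *s v) + (\<Sum>v\<in>t0. u v *s v)"
    by (rule sum.union_disjoint) (use s0 t0 disj in auto)
  also have "(\<Sum>v\<in>s0. u v *s v) = x" using s0(3) by (simp add: u_def)
  also have "(\<Sum>v\<in>t0. u v *s v) = (\<Sum>v\<in>t0. - (r v *s v))"
    by (rule sum.cong) (use disj in \<open>auto simp: u_def\<close>)
  also have "\<dots> = - x"
    using t0(3) by (simp add: sum_negf)
  finally have z: "(\<Sum>v\<in>s0 \<union> t0. u v *s v) = 0" by simp
  have "\<forall>v\<in>s0. u v = 0"
    using independentD[OF assms(1) _ _ z] s0 t0 by blast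
  then have "\<forall>v\<in>s0. q v = 0" by (simp add: u_def)
  then show "x \<in> {0}" using s0(3) by simp
qed

lemma independent_Int_span_subset:
  assumes "local.independent B" "C \<subseteq> B"
  shows "B \<inter> local.span C \<subseteq> C"
proof
  fix x assume x: "x \<in> B \<inter> local.span C"
  show "x \<in> C"
  proof (rule ccontr)
    assume "x \<notin> C"
    then have "x \<in> local.span (B - {x})" using x span_mono[of C "B - {x}"] assms(2) by blast
    then show False using x assms(1) unfolding dependent_def by blast
  qed
qed

lemma independent_Un_basis_extensions:
  assumes BA: "local.independent BA" "local.span BA = A"
    and BB: "local.independent BB" "local.span BB = B"
    and C: "C \<subseteq> BA" "C \<subseteq> BB" "A \<inter> B \<subseteq> local.span C"
  shows "local.independent (BA \<union> (BB - C))"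
proof -
  have "BB = C \<union> (BB - C)" using C(2) by blast
  then have CD: "local.span C \<inter> local.span (BB - C) \<subseteq> {0}"
    using span_Int_span_independent[of C "BB - C"] BB(1) by (metis Diff_disjoint)
  have "local.span BA \<inter> local.span (BB - C) \<subseteq> {0}"
  proof
    fix x assume x: "x \<in> local.span BA \<inter> local.span (BB - C)"
    then have "x \<in> A \<inter> B" using BA(2) BB(2) span_mono[of "BB - C" BB] by blast
    then show "x \<in> {0}" using C(3) x CD by blast
  qed
  moreover have "local.independent (BB - C)" using independent_mono[OF BB(1)] by blast
  ultimately show ?thesis using independent_Un[OF BA(1)] by blast
qed

text \<open>Grassmann's formula. A basis of \<open>A \<inter> B\<close> is extended to bases of \<open>A\<close> and of \<open>B\<close>;
  their union is a basis of the span of \<open>A \<union> B\<close>.\<close>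

lemma dim_span_Un_plus_dim_Int:
  assumes A: "local.subspace A" "local.fin_dim A" and B: "local.subspace B" "local.fin_dim B"
  shows "local.dim (local.span (A \<union> B)) + local.dim (A \<inter> B) = local.dim A + local.dim B"
proof -
  obtain C where C: "C \<subseteq> A \<inter> B" "local.independent C" "A \<inter> B \<subseteq> local.span C"
    "card C = local.dim (A \<inter> B)" "finite C"
    using finite_basis_exists[OF fin_dim_subset[OF A(2), of "A \<inter> B"]] by blast
  obtain BA where BA: "C \<subseteq> BA" "BA \<subseteq> A" "local.independent BA" "A \<subseteq> local.span BA"
    using maximal_independent_subset_extend[of C A] C by blast
  obtain BB where BB: "C \<subseteq> BB" "BB \<subseteq> B" "local.independent BB" "B \<subseteq> local.span BB"
    using maximal_independent_subset_extend[of C B] C by blast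
  have fin: "finite BA" "finite BB"
    using fin_dim_independent_finite[OF A(2) BA(2,3)] fin_dim_independent_finite[OF B(2) BB(2,3)]
    by auto
  have spA: "local.span BA = A" by (rule span_subspace[OF BA(2,4) A(1)])
  have spB: "local.span BB = B" by (rule span_subspace[OF BB(2,4) B(1)])
  have BA_BB: "BA \<inter> BB = C"
  proof
    show "C \<subseteq> BA \<inter> BB" using BA(1) BB(1) by blast
    have "BA \<inter> BB \<subseteq> BB \<inter> local.span C" using BA(2) BB(2) C(3) by blast
    then show "BA \<inter> BB \<subseteq> C" using independent_Int_span_subset[OF BB(3,1)] by blast
  qed
  have indep: "local.independent (BA \<union> (BB - C))"
    by (rule independent_Un_basis_extensions[OF BA(3) spA BB(3) spB BA(1) BB(1) C(3)])
  have "BA \<union> (BB - C) \<subseteq> A \<union> B" using BA(2) BB(2) by blast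
  then have "BA \<union> (BB - C) \<subseteq> local.span (A \<union> B)" using span_superset[of "A \<union> B"] by blast
  moreover have "BA \<subseteq> BA \<union> (BB - C)" "BB \<subseteq> BA \<union> (BB - C)" using BA(1) by blast+
  then have "A \<union> B \<subseteq> local.span (BA \<union> (BB - C))"
    using span_mono[of BA "BA \<union> (BB - C)"] span_mono[of BB "BA \<union> (BB - C)"] spA spB by auto
  ultimately have "local.span (BA \<union> (BB - C)) = local.span (A \<union> B)"
    unfolding span_eq by blast
  then have "local.dim (local.span (A \<union> B)) = card (BA \<union> (BB - C))"
    using dim_span_eq_card_independent[OF indep] by simp
  also have "\<dots> = card BA + card (BB - C)"
    by (rule card_Un_disjoint) (use fin BA_BB in auto)
  also have "card (BB - C) = card BB - card C" by (rule card_Diff_subset[OF C(5) BB(1)])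
  finally show ?thesis
    using basis_card_eq_dim[OF BA(2,4,3)] basis_card_eq_dim[OF BB(2,4,3)] C(4)
      card_mono[OF fin(2) BB(1)] by simp
qed

lemma codim_Int:
  assumes V: "local.subspace V" "local.fin_dim V"
    and A: "local.subspace A" "A \<subseteq> V" and B: "local.subspace B" "B \<subseteq> V"
    and spanning: "local.dim V \<le> local.dim (local.span (A \<union> B))"
  shows "local.dim V - local.dim (A \<inter> B)
      = (local.dim V - local.dim A) + (local.dim V - local.dim B)"
proof -
  have fin: "local.fin_dim A" "local.fin_dim B" using fin_dim_subset[OF V(2)] A(2) B(2) by blast+
  have "local.span (A \<union> B) \<subseteq> V" using span_minimal[OF _ V(1)] A(2) B(2) by blast
  then have "local.dim (local.span (A \<union> B)) \<le> local.dim V" by (rule dim_mono_fin_dim[OF V(2)])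
  then have "local.dim (local.span (A \<union> B)) = local.dim V" using spanning by linarith
  moreover have "local.dim A \<le> local.dim V" "local.dim B \<le> local.dim V"
    using dim_mono_fin_dim[OF V(2)] A(2) B(2) by blast+
  ultimately show ?thesis
    using dim_span_Un_plus_dim_Int[OF A(1) fin(1) B(1) fin(2)] by linarith
qed
end

lemma lookup_cst_mult: "Poly_Mapping.lookup (cst c * F) \<nu> = c * Poly_Mapping.lookup F \<nu>"
proof -
  have "cst c * F = Poly_Mapping.map ((*) c) F" by (simp add: cst_def mult_map_scale_conv_mult)
  then show ?thesis by (simp add: Poly_Mapping.map.rep_eq when_def)
qed

lemma keys_cst_mult: "Poly_Mapping.keys (cst c * F) \<subseteq> Poly_Mapping.keys F"
  by (auto simp: in_keys_iff lookup_cst_mult)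

lemma vector_space_kscale: "vector_space (kscale :: 'k::field \<Rightarrow> 'k mpol \<Rightarrow> 'k mpol)"
  by unfold_locales (auto simp: kscale_def cst_add cst_mult algebra_simps)

interpretation kv: vector_space "kscale :: 'k::field \<Rightarrow> 'k mpol \<Rightarrow> 'k mpol"
  by (rule vector_space_kscale)

lemma kdim_eq: "kdim = kv.dim"
  by (simp add: kdim_def fun_eq_iff)

definition keyspace :: "(nat \<Rightarrow>\<^sub>0 nat) set \<Rightarrow> 'k::comm_ring_1 mpol set" where
  "keyspace K = {F. Poly_Mapping.keys F \<subseteq> K}"

lemma subspace_keyspace: "kv.subspace (keyspace K)"
  unfolding kv.subspace_def keyspace_def kscale_def
proof (intro conjI ballI)
  fix F G :: "'a mpol" assume "F \<in> {F. Poly_Mapping.keys F \<subseteq> K}" "G \<in> {F. Poly_Mapping.keys F \<subseteq> K}"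
  then show "F + G \<in> {F. Poly_Mapping.keys F \<subseteq> K}" using keys_add[of F G] by auto
next
  show "\<forall>c. \<forall>x\<in>{F. Poly_Mapping.keys F \<subseteq> K}. cst c * x \<in> {F. Poly_Mapping.keys F \<subseteq> K}"
    using keys_cst_mult by blast
qed simp

lemma independent_monomials: "kv.independent ((\<lambda>\<nu>. Poly_Mapping.single \<nu> (1::'k::field)) ` K)"
  unfolding kv.independent_explicit_module
proof (intro allI impI)
  fix t u v assume t: "finite t" "t \<subseteq> (\<lambda>\<nu>. Poly_Mapping.single \<nu> (1::'k)) ` K"
    and z: "(\<Sum>v\<in>t. kscale (u v) v) = 0" and v: "v \<in> t"
  obtain \<nu> where \<nu>: "v = Poly_Mapping.single \<nu> 1" using t v by blast
  have other: "u w * Poly_Mapping.lookup w \<nu> = 0" if "w \<in> t - {v}" for w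
    using that t \<nu> by (auto simp: lookup_single)
  have "0 = Poly_Mapping.lookup (\<Sum>v\<in>t. kscale (u v) v) \<nu>" using z by simp
  also have "\<dots> = (\<Sum>w\<in>t. u w * Poly_Mapping.lookup w \<nu>)"
    by (simp add: lookup_sum kscale_def lookup_cst_mult)
  also have "\<dots> = u v * Poly_Mapping.lookup v \<nu>"
    using sum.mono_neutral_right[OF t(1), of "{v}" "\<lambda>w. u w * Poly_Mapping.lookup w \<nu>"] other v
    by simp
  finally show "u v = 0" using \<nu> by simp
qed

lemma keyspace_eq_span: "finite K \<Longrightarrow> keyspace K
    = kv.span ((\<lambda>\<nu>. Poly_Mapping.single \<nu> (1::'k::field)) ` K)"
proof
  assume K: "finite K"
  show "keyspace K \<subseteq> kv.span ((\<lambda>\<nu>. Poly_Mapping.single \<nu> (1::'k)) ` K)"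
  proof
    fix F :: "'k mpol" assume "F \<in> keyspace K"
    then have kF: "Poly_Mapping.keys F \<subseteq> K" by (simp add: keyspace_def)
    have "F = (\<Sum>\<nu>\<in>Poly_Mapping.keys F. kscale (Poly_Mapping.lookup F \<nu>) (Poly_Mapping.single \<nu> 1))"
      by (subst poly_mapping_eq_sum_single) (simp add: kscale_def cst_single)
    also have "\<dots> \<in> kv.span ((\<lambda>\<nu>. Poly_Mapping.single \<nu> (1::'k)) ` K)"
      by (intro kv.span_sum kv.span_scale kv.span_base) (use kF in auto)
    finally show "F \<in> kv.span ((\<lambda>\<nu>. Poly_Mapping.single \<nu> (1::'k)) ` K)" .
  qed
  show "kv.span ((\<lambda>\<nu>. Poly_Mapping.single \<nu> (1::'k)) ` K) \<subseteq> keyspace K"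
    by (rule kv.span_minimal[OF _ subspace_keyspace]) (auto simp: keyspace_def)
qed

lemma single_one_eq_iff [simp]:
  "Poly_Mapping.single x (1::'k::zero_neq_one) = Poly_Mapping.single y 1 \<longleftrightarrow> x = y"
  by (metis lookup_single_eq lookup_single_not_eq one_neq_zero)

lemma dim_keyspace: "finite K \<Longrightarrow> kv.dim (keyspace K :: 'k::field mpol set) = card K"
proof -
  assume K: "finite K"
  have "kv.dim (keyspace K :: 'k mpol set)
      = kv.dim (kv.span ((\<lambda>\<nu>. Poly_Mapping.single \<nu> (1::'k)) ` K))"
    by (subst keyspace_eq_span[OF K]) (rule refl)
  also have "\<dots> = card ((\<lambda>\<nu>. Poly_Mapping.single \<nu> (1::'k)) ` K)"
    by (rule kv.dim_span_eq_card_independent[OF independent_monomials])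
  also have "\<dots> = card K"
    by (rule card_image) (simp add: inj_on_def)
  finally show ?thesis .
qed

lemma dim_inj_image:
  fixes f :: "'k::field mpol \<Rightarrow> 'k mpol"
  assumes hom: "module_hom kscale kscale f"
  assumes S: "kv.subspace S" "kv.fin_dim S" and inj: "inj_on f S"
  shows "kv.dim (f ` S) = kv.dim S"
proof -
  interpret h: module_hom kscale kscale f by (rule hom)
  obtain B where B: "B \<subseteq> S" "kv.independent B" "S \<subseteq> kv.span B" "card B = kv.dim S" "finite B"
    using kv.finite_basis_exists[OF S(2)] by blast
  have spB: "kv.span B = S" using kv.span_subspace[OF B(1) B(3) S(1)] .
  have ind: "kv.independent (f ` B)"
    using h.independent_injective_image[OF B(2)] inj spB by simp
  have sp: "kv.span (f ` B) = f ` S" using h.span_image[of B] spB by simp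
  have ssp: "kv.span (f ` S) = f ` S"
    by (rule kv.span_eq_iff[THEN iffD2, OF h.subspace_image[OF S(1)]])
  have "kv.dim (f ` S) = card (f ` B)"
  proof (rule kv.dim_eq_card)
    show "kv.span (f ` B) = kv.span (f ` S)" by (simp only: sp ssp)
  qed (rule ind)
  also have "\<dots> = card B" using card_image[of f B] inj_on_subset[OF inj B(1)] by simp
  finally show ?thesis using B(4) by simp
qed

lemma fin_dim_keyspace: "finite K \<Longrightarrow> kv.fin_dim (keyspace K :: 'k::field mpol set)"
  unfolding kv.fin_dim_def using keyspace_eq_span by blast

definition R_mon :: "(nat \<Rightarrow>\<^sub>0 nat) \<Rightarrow> bool" where
  "R_mon \<nu> \<longleftrightarrow> Poly_Mapping.keys \<nu> \<subseteq> {0,1,2,3}"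

definition bideg :: "(nat \<Rightarrow>\<^sub>0 nat) \<Rightarrow> nat \<times> nat" where
  "bideg \<nu> = (Poly_Mapping.lookup \<nu> 0 + Poly_Mapping.lookup \<nu> 1, Poly_Mapping.lookup \<nu> 2
      + Poly_Mapping.lookup \<nu> 3)"

definition monset :: "nat \<Rightarrow> nat \<Rightarrow> (nat \<Rightarrow>\<^sub>0 nat) set" where
  "monset p q = {\<nu>. R_mon \<nu> \<and> bideg \<nu> = (p, q)}"

lemma bihom_keyspace: "bihom p q = keyspace (monset p q)"
  by (auto simp: bihom_def keyspace_def monset_def R_mon_def bideg_def)

lemma ringR_keyspace: "ringR = keyspace {\<nu>. R_mon \<nu>}"
  by (auto simp: ringR_def keyspace_def R_mon_def)

lemma bideg_add: "bideg (\<mu> + \<nu>) = (fst (bideg \<mu>) + fst (bideg \<nu>), snd (bideg \<mu>) + snd (bideg \<nu>))"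
  by (simp add: bideg_def lookup_add)

lemma R_mon_add: "R_mon \<mu> \<Longrightarrow> R_mon \<nu> \<Longrightarrow> R_mon (\<mu> + \<nu>)"
  unfolding R_mon_def using keys_add[of \<mu> \<nu>] by blast

definition mon4 :: "nat \<Rightarrow> nat \<Rightarrow> nat \<Rightarrow> nat \<Rightarrow> (nat \<Rightarrow>\<^sub>0 nat)" where
  "mon4 a b c d = Poly_Mapping.single 0 a + Poly_Mapping.single 1 b + Poly_Mapping.single 2 c
      + Poly_Mapping.single 3 d"

lemma lookup_mon4: "Poly_Mapping.lookup (mon4 a b c d) k =
   (if k = 0 then a else if k = 1 then b else if k = 2 then c else if k = 3 then d else 0)"
  by (simp add: mon4_def lookup_add lookup_single when_def)

lemma R_mon_mon4: "R_mon (mon4 a b c d)"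
  by (auto simp: R_mon_def in_keys_iff lookup_mon4 split: if_splits)

lemma bideg_mon4: "bideg (mon4 a b c d) = (a + b, c + d)"
  by (simp add: bideg_def lookup_mon4)

lemma R_mon_eq_mon4: "R_mon \<nu> \<Longrightarrow> \<nu>
    = mon4 (Poly_Mapping.lookup \<nu> 0) (Poly_Mapping.lookup \<nu> 1) (Poly_Mapping.lookup \<nu> 2) (Poly_Mapping.lookup \<nu> 3)"
  by (rule poly_mapping_eqI) (auto simp: lookup_mon4 R_mon_def in_keys_iff)

lemma monset_eq: "monset p q = (\<lambda>(u,v). mon4 u (p - u) v (q - v)) ` ({..p} \<times> {..q})"
proof
  show "monset p q \<subseteq> (\<lambda>(u,v). mon4 u (p - u) v (q - v)) ` ({..p} \<times> {..q})"
  proof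
    fix \<nu> assume "\<nu> \<in> monset p q"
    then have g: "R_mon \<nu>" and b: "bideg \<nu> = (p,q)" by (auto simp: monset_def)
    have "Poly_Mapping.lookup \<nu> 1 = p - Poly_Mapping.lookup \<nu> 0"
      "Poly_Mapping.lookup \<nu> 3 = q - Poly_Mapping.lookup \<nu> 2"
      using b by (auto simp: bideg_def)
    then have "\<nu> = mon4 (Poly_Mapping.lookup \<nu> 0) (p - Poly_Mapping.lookup \<nu> 0)
                      (Poly_Mapping.lookup \<nu> 2) (q - Poly_Mapping.lookup \<nu> 2)"
      using R_mon_eq_mon4[OF g] by metis
    moreover have "Poly_Mapping.lookup \<nu> 0 \<le> p" "Poly_Mapping.lookup \<nu> 2 \<le> q"
      using b by (auto simp: bideg_def)
    ultimately show "\<nu> \<in> (\<lambda>(u,v). mon4 u (p - u) v (q - v)) ` ({..p} \<times> {..q})" by force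
  qed
  show "(\<lambda>(u,v). mon4 u (p - u) v (q - v)) ` ({..p} \<times> {..q}) \<subseteq> monset p q"
    by (auto simp: monset_def R_mon_mon4 bideg_mon4)
qed

lemma inj_mon4: "inj_on (\<lambda>(u,v). mon4 u (p - u) v (q - v)) X"
proof (rule inj_onI, clarify)
  fix a b c d assume "mon4 a (p - a) b (q - b) = mon4 c (p - c) d (q - d)"
  then have "Poly_Mapping.lookup (mon4 a (p - a) b (q - b)) 0
      = Poly_Mapping.lookup (mon4 c (p - c) d (q - d)) 0"
    "Poly_Mapping.lookup (mon4 a (p - a) b (q - b)) 2
        = Poly_Mapping.lookup (mon4 c (p - c) d (q - d)) 2" by simp_all
  then show "a = c \<and> b = d" by (simp add: lookup_mon4)
qed

lemma finite_monset: "finite (monset p q)"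
  by (simp add: monset_eq)

lemma card_monset: "card (monset p q) = (p + 1) * (q + 1)"
  by (simp add: monset_eq card_image[OF inj_mon4] card_cartesian_product)

lemma dim_bihom: "kv.dim (bihom p q :: 'k::field mpol set) = (p + 1) * (q + 1)"
  by (simp add: bihom_keyspace dim_keyspace finite_monset card_monset)

lemma fin_dim_bihom: "kv.fin_dim (bihom p q :: 'k::field mpol set)"
  by (simp add: bihom_keyspace fin_dim_keyspace finite_monset)

lemma subspace_bihom: "kv.subspace (bihom p q :: 'k::field mpol set)"
  by (simp add: bihom_keyspace subspace_keyspace)

lemma subspace_ringR: "kv.subspace (ringR :: 'k::field mpol set)"
  by (simp add: ringR_keyspace subspace_keyspace)

lemma bihom_ringR: "bihom p q \<subseteq> (ringR :: 'k::comm_ring_1 mpol set)"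
  by (auto simp: bihom_keyspace ringR_keyspace keyspace_def monset_def)

lemma keyspace_mult:
  assumes "F \<in> keyspace A" "G \<in> keyspace B" "\<And>a b. a \<in> A \<Longrightarrow> b \<in> B \<Longrightarrow> a + b \<in> C"
  shows "F * G \<in> keyspace C"
  unfolding keyspace_def
proof
  show "Poly_Mapping.keys (F * G) \<subseteq> C"
  proof
    fix x assume "x \<in> Poly_Mapping.keys (F * G)"
    then obtain a b where "x = a + b" "a \<in> Poly_Mapping.keys F" "b \<in> Poly_Mapping.keys G"
      using keys_mult[of F G] by blast
    then show "x \<in> C" using assms by (auto simp: keyspace_def)
  qed
qed

lemma bihom_mult: "F \<in> bihom a b \<Longrightarrow> G \<in> bihom c d \<Longrightarrow> F * G \<in> bihom (a + c) (b + d)"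
  unfolding bihom_keyspace
  by (erule keyspace_mult, assumption) (auto simp: monset_def R_mon_add bideg_add)

lemma ringR_mult: "F \<in> ringR \<Longrightarrow> G \<in> ringR \<Longrightarrow> F * G \<in> ringR"
  unfolding ringR_keyspace
  by (erule keyspace_mult, assumption) (auto simp: R_mon_add)

lemma ringR_add: "F \<in> ringR \<Longrightarrow> G \<in> ringR \<Longrightarrow> F + G \<in> (ringR :: 'k::field mpol set)"
  using subspace_ringR kv.subspace_add by blast

lemma bihom_add: "F \<in> bihom p q \<Longrightarrow> G \<in> bihom p q \<Longrightarrow> F + G \<in> (bihom p q :: 'k::field mpol set)"
  using subspace_bihom kv.subspace_add by blast

lemma bihom_diff: "F \<in> bihom p q \<Longrightarrow> G \<in> bihom p q \<Longrightarrow> F - G \<in> (bihom p q :: 'k::field mpol set)"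
  using subspace_bihom kv.subspace_diff by blast

lemma ringR_0[simp]: "0 \<in> ringR" by (simp add: ringR_def)
lemma bihom_0[simp]: "0 \<in> bihom p q" by (simp add: bihom_def)

lemma ringR_sum: "(\<And>x. x \<in> A \<Longrightarrow> f x \<in> ringR) \<Longrightarrow> sum f A \<in> (ringR :: 'k::field mpol set)"
  using subspace_ringR kv.subspace_sum by blast

lemma bihom_sum: "(\<And>x. x \<in> A \<Longrightarrow> f x \<in> bihom p q) \<Longrightarrow> sum f A \<in> (bihom p q :: 'k::field mpol set)"
  using subspace_bihom kv.subspace_sum by blast

lemma cst_bihom[simp]: "cst c \<in> bihom 0 0"
  by (auto simp: bihom_def cst_def)

lemma cst_ringR[simp]: "cst c \<in> ringR"
  by (auto simp: ringR_def cst_def)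

lemma one_ringR [simp]: "1 \<in> ringR"
  using cst_ringR[of 1] by simp

lemma one_bihom [simp]: "1 \<in> bihom 0 0"
  using cst_bihom[of 1] by simp

lemma var_bihom:
  "var 0 \<in> bihom 1 0" "var 1 \<in> bihom 1 0" "var 2 \<in> bihom 0 1" "var 3 \<in> bihom 0 1"
  by (auto simp: bihom_def var_def lookup_single when_def)

lemma var_ringR: "v \<le> 3 \<Longrightarrow> var v \<in> ringR"
  by (auto simp: ringR_def var_def)

lemma cst_mult_bihom: "F \<in> bihom p q \<Longrightarrow> cst c * F \<in> bihom p q"
  using bihom_mult[OF cst_bihom[of c]] by simp

lemma cst_mult_ringR: "F \<in> ringR \<Longrightarrow> cst c * F \<in> ringR"
  using ringR_mult[OF cst_ringR[of c]] by simp

lemma lin1_bihom: "lin1 a \<in> bihom 1 0"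
  unfolding lin1_def by (intro bihom_diff cst_mult_bihom var_bihom)

lemma lin2_bihom: "lin2 b \<in> bihom 0 1"
  unfolding lin2_def by (intro bihom_diff cst_mult_bihom var_bihom)

lemma bihom_power: "F \<in> bihom p q \<Longrightarrow> F ^ n \<in> bihom (n * p) (n * q)"
  by (induction n) (auto dest: bihom_mult)

lemma ringR_power: "F \<in> ringR \<Longrightarrow> F ^ n \<in> ringR"
  by (induction n) (auto intro: ringR_mult)

lemma bihom_prod: "(\<And>x. x \<in> A \<Longrightarrow> f x \<in> bihom (g x) (h x)) \<Longrightarrow>
   prod f A \<in> bihom (\<Sum>x\<in>A. g x) (\<Sum>x\<in>A. h x)"
  by (induction A rule: infinite_finite_induct) (auto dest: bihom_mult)

lemma ringR_prod: "(\<And>x. x \<in> A \<Longrightarrow> f x \<in> ringR) \<Longrightarrow> prod f A \<in> ringR"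
  by (induction A rule: infinite_finite_induct) (auto intro: ringR_mult)

lemma lin1_ringR: "lin1 a \<in> ringR" using lin1_bihom bihom_ringR by blast
lemma lin2_ringR: "lin2 b \<in> ringR" using lin2_bihom bihom_ringR by blast

lemma module_kscale: "module (kscale :: 'k::field \<Rightarrow> 'k mpol \<Rightarrow> 'k mpol)"
  using vector_space_kscale module_iff_vector_space by blast

lemma linear_mult: "module_hom kscale kscale (\<lambda>F. G * (F :: 'k::field mpol))"
  unfolding module_hom_iff using module_kscale by (auto simp: kscale_def algebra_simps)

lemma linear_poly_subst: "module_hom kscale kscale (poly_subst f :: 'k::field mpol \<Rightarrow> _)"
  unfolding module_hom_iff
    using module_kscale by (auto simp: kscale_def poly_subst_add poly_subst_mult)

lemma dim_mult_image:
  assumes "(G :: 'k::field mpol) \<noteq> 0" "kv.subspace S" "kv.fin_dim S"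
  shows "kv.dim ((\<lambda>F. G * F) ` S) = kv.dim S"
  by (rule dim_inj_image[OF linear_mult assms(2,3)]) (use assms(1) in \<open>auto simp: inj_on_def\<close>)

lemma mon_subst_bihom:
  assumes f: "\<And>v. v \<in> {0,1,2,3} \<Longrightarrow> f v \<in> bihom (fst (\<delta> v)) (snd (\<delta> v))"
    and \<nu>: "R_mon \<nu>"
  shows "mon_subst f \<nu> \<in> bihom (\<Sum>v\<in>{0,1,2,3}. Poly_Mapping.lookup \<nu> v * fst (\<delta> v))
                                  (\<Sum>v\<in>{0,1,2,3}. Poly_Mapping.lookup \<nu> v * snd (\<delta> v))"
proof -
  have "mon_subst f \<nu> = (\<Prod>v\<in>{0,1,2,3::nat}. f v ^ Poly_Mapping.lookup \<nu> v)"
    by (rule mon_subst_alt) (use \<nu> in \<open>auto simp: R_mon_def\<close>)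
  also have "\<dots> \<in> bihom (\<Sum>v\<in>{0,1,2,3}. Poly_Mapping.lookup \<nu> v * fst (\<delta> v))
                         (\<Sum>v\<in>{0,1,2,3}. Poly_Mapping.lookup \<nu> v * snd (\<delta> v))"
    by (rule bihom_prod) (rule bihom_power[OF f], auto)
  finally show ?thesis .
qed

lemma poly_subst_bihom_weighted:
  fixes F :: "'k::field mpol"
  assumes f: "\<And>v. v \<in> {0,1,2,3} \<Longrightarrow> f v \<in> bihom (fst (\<delta> v)) (snd (\<delta> v))"
    and F: "F \<in> bihom p q"
    and \<delta>: "\<And>\<nu>. \<nu> \<in> monset p q \<Longrightarrow>
       (\<Sum>v\<in>{0,1,2,3}. Poly_Mapping.lookup \<nu> v * fst (\<delta> v)) = p' \<and>
       (\<Sum>v\<in>{0,1,2,3}. Poly_Mapping.lookup \<nu> v * snd (\<delta> v)) = q'"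
  shows "poly_subst f F \<in> bihom p' q'"
  unfolding poly_subst_def
proof (rule bihom_sum)
  fix \<nu> assume "\<nu> \<in> Poly_Mapping.keys F"
  then have \<nu>: "\<nu> \<in> monset p q" using F by (auto simp: bihom_keyspace keyspace_def)
  then have "R_mon \<nu>" by (simp add: monset_def)
  then have "mon_subst f \<nu> \<in> bihom p' q'"
    using mon_subst_bihom[of f \<delta> \<nu>] f \<delta>[OF \<nu>] by simp
  then show "cst (Poly_Mapping.lookup F \<nu>) * mon_subst f \<nu> \<in> bihom p' q'"
    by (rule cst_mult_bihom)
qed

definition var_bideg :: "nat \<Rightarrow> nat \<times> nat" where
  "var_bideg v = (if v = 0 \<or> v = 1 then (1,0) else (0,1))"

lemma poly_subst_bihom:
  fixes F :: "'k::field mpol"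
  assumes "\<And>v. v \<in> {0,1,2,3} \<Longrightarrow> f v \<in> bihom (fst (var_bideg v)) (snd (var_bideg v))"
    and "F \<in> bihom p q"
  shows "poly_subst f F \<in> bihom p q"
  using assms by (rule poly_subst_bihom_weighted) (auto simp: monset_def bideg_def var_bideg_def)

lemma poly_subst_ringR:
  fixes F :: "'k::field mpol"
  assumes f: "\<And>v. v \<in> {0,1,2,3} \<Longrightarrow> f v \<in> ringR"
    and F: "F \<in> ringR"
  shows "poly_subst f F \<in> ringR"
  unfolding poly_subst_def
proof (rule ringR_sum)
  fix \<nu> assume "\<nu> \<in> Poly_Mapping.keys F"
  then have g: "R_mon \<nu>" using F by (auto simp: ringR_keyspace keyspace_def)
  have "mon_subst f \<nu> = (\<Prod>v\<in>{0,1,2,3::nat}. f v ^ Poly_Mapping.lookup \<nu> v)"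
    by (rule mon_subst_alt) (use g in \<open>auto simp: R_mon_def\<close>)
  also have "\<dots> \<in> ringR" by (intro ringR_prod ringR_power f) auto
  finally show "cst (Poly_Mapping.lookup F \<nu>) * mon_subst f \<nu> \<in> ringR" by (rule cst_mult_ringR)
qed

definition bihom_part :: "nat \<Rightarrow> nat \<Rightarrow> 'k::comm_ring_1 mpol \<Rightarrow> 'k mpol" where
  "bihom_part p q F = Abs_poly_mapping (\<lambda>\<nu>. if \<nu> \<in> monset p q then Poly_Mapping.lookup F \<nu> else 0)"

lemma lookup_bihom_part: "Poly_Mapping.lookup (bihom_part p q F) \<nu>
    = (if \<nu> \<in> monset p q then Poly_Mapping.lookup F \<nu> else 0)"
proof -
  have "finite {\<nu>. (if \<nu> \<in> monset p q then Poly_Mapping.lookup F \<nu> else 0) \<noteq> 0}"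
    by (rule finite_subset[OF _ finite_keys[of F]]) (auto simp: in_keys_iff)
  then show ?thesis by (simp add: bihom_part_def)
qed

lemma bihom_part_bihom: "bihom_part p q F \<in> bihom p q"
  by (auto simp: bihom_keyspace keyspace_def in_keys_iff lookup_bihom_part split: if_splits)

lemma bihom_part_id: "F \<in> bihom p q \<Longrightarrow> bihom_part p q F = F"
  by (rule poly_mapping_eqI) (auto simp: lookup_bihom_part bihom_keyspace keyspace_def in_keys_iff)

lemma bihom_part_other: "F \<in> bihom p' q' \<Longrightarrow> (p', q') \<noteq> (p, q) \<Longrightarrow> bihom_part p q F = 0"
  by (rule poly_mapping_eqI) (auto simp: lookup_bihom_part bihom_keyspace keyspace_def in_keys_iff monset_def)

lemma bihom_part_add: "bihom_part p q (F + G) = bihom_part p q F + bihom_part p q G"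
  by (rule poly_mapping_eqI) (simp add: lookup_bihom_part lookup_add)

lemma bihom_part_0[simp]: "bihom_part p q 0 = 0"
  by (rule poly_mapping_eqI) (simp add: lookup_bihom_part)

lemma bihom_part_sum: "bihom_part p q (\<Sum>x\<in>A. f x) = (\<Sum>x\<in>A. bihom_part p q (f x))"
  by (induction A rule: infinite_finite_induct) (auto simp: bihom_part_add)

lemma bihom_part_decomp:
  assumes "F \<in> ringR"
  shows "F = (\<Sum>d\<in>bideg ` Poly_Mapping.keys F. bihom_part (fst d) (snd d) F)"
proof (rule poly_mapping_eqI)
  fix \<nu>
  have "Poly_Mapping.lookup (\<Sum>d\<in>bideg ` Poly_Mapping.keys F. bihom_part (fst d) (snd d) F) \<nu> =
     (\<Sum>d\<in>bideg ` Poly_Mapping.keys F. if bideg \<nu> = d \<and> R_mon \<nu> then Poly_Mapping.lookup F \<nu> else 0)"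
    by (simp add: lookup_sum lookup_bihom_part monset_def conj_commute)
  also have "\<dots> = (if bideg \<nu> \<in> bideg ` Poly_Mapping.keys F \<and> R_mon \<nu> then Poly_Mapping.lookup F \<nu> else 0)"
    by (cases "R_mon \<nu>") (simp_all add: sum.delta)
  also have "\<dots> = Poly_Mapping.lookup F \<nu>"
    using assms by (auto simp: ringR_keyspace keyspace_def in_keys_iff)
  finally show "Poly_Mapping.lookup F \<nu>
      = Poly_Mapping.lookup (\<Sum>d\<in>bideg ` Poly_Mapping.keys F. bihom_part (fst d) (snd d) F) \<nu>" by simp
qed

lemma bihom_part_notin: "(p, q) \<notin> bideg ` Poly_Mapping.keys F \<Longrightarrow> bihom_part p q F = 0"
  by (rule poly_mapping_eqI) (force simp: lookup_bihom_part monset_def in_keys_iff)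

lemma bihom_part_mult:
  fixes G F :: "'k::field mpol"
  assumes G: "G \<in> bihom g1 g2" and F: "F \<in> ringR"
  shows "bihom_part (s + g1) (t + g2) (G * F) = G * bihom_part s t F"
proof -
  let ?D = "bideg ` Poly_Mapping.keys F"
  have "G * F = (\<Sum>d\<in>?D. G * bihom_part (fst d) (snd d) F)"
    by (subst bihom_part_decomp[OF F]) (simp add: sum_distrib_left)
  then have "bihom_part (s + g1) (t + g2) (G * F)
      = (\<Sum>d\<in>?D. bihom_part (s + g1) (t + g2) (G * bihom_part (fst d) (snd d) F))"
    by (simp add: bihom_part_sum)
  also have "\<dots> = (\<Sum>d\<in>?D. if d = (s, t) then G * bihom_part s t F else 0)"
  proof (rule sum.cong[OF refl])
    fix d assume "d \<in> ?D"
    have inb: "G * bihom_part (fst d) (snd d) F \<in> bihom (g1 + fst d) (g2 + snd d)"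
      by (rule bihom_mult[OF G bihom_part_bihom])
    show "bihom_part (s + g1) (t + g2) (G * bihom_part (fst d) (snd d) F)
        = (if d = (s, t) then G * bihom_part s t F else 0)"
    proof (cases "d = (s, t)")
      case True
      then show ?thesis using bihom_part_id[OF inb] by (simp add: add.commute)
    next
      case False
      then have "(g1 + fst d, g2 + snd d) \<noteq> (s + g1, t + g2)" by (cases d) auto
      then show ?thesis using bihom_part_other[OF inb] False by simp
    qed
  qed
  also have "\<dots> = G * bihom_part s t F"
    using bihom_part_notin[of s t F] by (simp add: sum.delta)
  finally show ?thesis .
qed

lemma bihom_factor:
  fixes G H :: "'k::field mpol"
  assumes G: "G \<in> bihom g1 g2" "G \<noteq> 0" and H: "H \<in> ringR" "H \<noteq> 0"
    and GH: "G * H \<in> bihom d1 d2"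
  shows "g1 \<le> d1 \<and> g2 \<le> d2 \<and> H \<in> bihom (d1 - g1) (d2 - g2)"
proof -
  let ?D = "bideg ` Poly_Mapping.keys H"
  have comp: "bihom_part s t H = 0 \<or> (s + g1 = d1 \<and> t + g2 = d2)" for s t
  proof (rule ccontr)
    assume "\<not> (bihom_part s t H = 0 \<or> (s + g1 = d1 \<and> t + g2 = d2))"
    then have nz: "bihom_part s t H \<noteq> 0" and ne: "(d1, d2) \<noteq> (s + g1, t + g2)" by auto
    have "G * bihom_part s t H = bihom_part (s + g1) (t + g2) (G * H)"
      using bihom_part_mult[OF G(1) H(1)] by simp
    also have "\<dots> = 0" using bihom_part_other[OF GH ne] .
    finally show False using nz G(2) by simp
  qed
  have eq: "H = (\<Sum>d\<in>?D. bihom_part (fst d) (snd d) H)" by (rule bihom_part_decomp[OF H(1)])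
  have ex: "\<exists>d\<in>?D. bihom_part (fst d) (snd d) H \<noteq> 0"
  proof (rule ccontr)
    assume "\<not> ?thesis"
    then have "(\<Sum>d\<in>?D. bihom_part (fst d) (snd d) H) = 0" by (intro sum.neutral) blast
    then show False using eq H(2) by simp
  qed
  then have le: "g1 \<le> d1 \<and> g2 \<le> d2" using comp by force
  have "(\<Sum>d\<in>?D. bihom_part (fst d) (snd d) H) \<in> bihom (d1 - g1) (d2 - g2)"
  proof (rule bihom_sum)
    fix d assume "d \<in> ?D"
    show "bihom_part (fst d) (snd d) H \<in> bihom (d1 - g1) (d2 - g2)"
    proof (cases "bihom_part (fst d) (snd d) H = 0")
      case False
      then have "fst d + g1 = d1 \<and> snd d + g2 = d2" using comp by blast
      then have "fst d = d1 - g1" "snd d = d2 - g2" by auto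
      then show ?thesis using bihom_part_bihom[of "fst d" "snd d" H] by simp
    qed simp
  qed
  then show ?thesis using le eq by simp
qed

lemma lookup_single_mult:
  "Poly_Mapping.lookup (Poly_Mapping.single m c * H) \<nu> =
     (if (\<exists>\<nu>'. \<nu> = m + \<nu>') then c * Poly_Mapping.lookup H (\<nu> - m) else 0)"
  for H :: "'k::comm_ring_1 mpol"
proof -
  have "Poly_Mapping.single m c * H
      = (\<Sum>\<mu>\<in>Poly_Mapping.keys H. Poly_Mapping.single (m + \<mu>) (c * Poly_Mapping.lookup H \<mu>))"
    by (subst poly_mapping_eq_sum_single[of H]) (simp add: sum_distrib_left mult_single)
  then have l: "Poly_Mapping.lookup (Poly_Mapping.single m c * H) \<nu> =
      (\<Sum>\<mu>\<in>Poly_Mapping.keys H. if \<nu> = m + \<mu> then c * Poly_Mapping.lookup H \<mu> else 0)"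
    by (simp add: lookup_sum lookup_single when_def eq_commute)
  show ?thesis
  proof (cases "\<exists>\<nu>'. \<nu> = m + \<nu>'")
    case True
    then obtain \<nu>' where \<nu>': "\<nu> = m + \<nu>'" by blast
    have "(\<Sum>\<mu>\<in>Poly_Mapping.keys H. if \<nu> = m + \<mu> then c * Poly_Mapping.lookup H \<mu> else 0) =
          (\<Sum>\<mu>\<in>Poly_Mapping.keys H. if \<mu> = \<nu>' then c * Poly_Mapping.lookup H \<mu> else 0)"
      by (rule sum.cong) (auto simp: \<nu>')
    also have "\<dots> = c * Poly_Mapping.lookup H \<nu>'"
      by (simp add: sum.delta' in_keys_iff)
    finally show ?thesis using l True \<nu>' by simp
  next
    case False
    then show ?thesis using l by auto
  qed
qed

lemma lookup_single_mult_shift: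
  "Poly_Mapping.lookup (Poly_Mapping.single m c * H) (m + \<nu>) = c * Poly_Mapping.lookup H \<nu>"
  for H :: "'k::comm_ring_1 mpol"
  by (subst lookup_single_mult) auto

section \<open>Divisibility by a variable and by a linear form\<close>

definition var_quot :: "nat \<Rightarrow> 'k::comm_ring_1 mpol \<Rightarrow> 'k mpol" where
  "var_quot p F = Abs_poly_mapping (\<lambda>\<nu>. Poly_Mapping.lookup F (Poly_Mapping.single p 1 + \<nu>))"

lemma lookup_var_quot: "Poly_Mapping.lookup (var_quot p F) \<nu>
    = Poly_Mapping.lookup F (Poly_Mapping.single p 1 + \<nu>)"
proof -
  have "finite ((\<lambda>\<nu>. Poly_Mapping.single p 1 + \<nu>) -` Poly_Mapping.keys F)"
    by (rule finite_vimageI) (auto simp: inj_on_def)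
  then have "finite {\<nu>. Poly_Mapping.lookup F (Poly_Mapping.single p 1 + \<nu>) \<noteq> 0}"
    by (simp add: in_keys_iff vimage_def)
  then show ?thesis by (simp add: var_quot_def)
qed

lemma nat_pm_decomp:
  fixes \<nu> :: "nat \<Rightarrow>\<^sub>0 nat"
  assumes "1 \<le> Poly_Mapping.lookup \<nu> p"
  shows "\<nu> = Poly_Mapping.single p 1 + (\<nu> - Poly_Mapping.single p 1)"
  by (rule poly_mapping_eqI) (use assms in \<open>auto simp: lookup_add lookup_minus lookup_single when_def\<close>)

lemma eq_var_mult_var_quot:
  fixes F :: "'k::comm_ring_1 mpol"
  assumes "\<forall>\<nu>\<in>Poly_Mapping.keys F. 1 \<le> Poly_Mapping.lookup \<nu> p"
  shows "F = var p * var_quot p F"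
proof (rule poly_mapping_eqI)
  fix \<nu>
  show "Poly_Mapping.lookup F \<nu> = Poly_Mapping.lookup (var p * var_quot p F) \<nu>"
  proof (cases "\<exists>\<nu>'. \<nu> = Poly_Mapping.single p 1 + \<nu>'")
    case True
    then obtain \<nu>' where \<nu>': "\<nu> = Poly_Mapping.single p 1 + \<nu>'" by blast
    show ?thesis unfolding var_def \<nu>' lookup_single_mult_shift by (simp add: lookup_var_quot)
  next
    case False
    then have "\<nu> \<notin> Poly_Mapping.keys F" using assms nat_pm_decomp by blast
    then show ?thesis using False unfolding var_def by (simp add: lookup_single_mult in_keys_iff)
  qed
qed

lemma var_quot_ringR:
  assumes "F \<in> ringR"
  shows "var_quot p F \<in> ringR"
proof -
  have "Poly_Mapping.keys \<nu> \<subseteq> {0,1,2,3}" if "\<nu> \<in> Poly_Mapping.keys (var_quot p F)" for \<nu>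
  proof -
    have "Poly_Mapping.single p 1 + \<nu> \<in> Poly_Mapping.keys F"
      using that by (simp add: in_keys_iff lookup_var_quot)
    then have "Poly_Mapping.keys (Poly_Mapping.single p 1 + \<nu>) \<subseteq> {0,1,2,3}"
      using assms by (auto simp: ringR_def)
    moreover have "Poly_Mapping.keys \<nu> \<subseteq> Poly_Mapping.keys (Poly_Mapping.single p 1 + \<nu>)"
      by (auto simp: in_keys_iff lookup_add)
    ultimately show ?thesis by blast
  qed
  then show ?thesis by (auto simp: ringR_def)
qed

definition zero_at :: "nat \<Rightarrow> nat \<Rightarrow> 'k::comm_ring_1 mpol" where
  "zero_at p = (\<lambda>v. if v = p then 0 else var v)"

definition set_zero :: "nat \<Rightarrow> 'k::comm_ring_1 mpol \<Rightarrow> 'k mpol" where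
  "set_zero p F = poly_subst (zero_at p) F"

lemma mon_subst_zero_at: "mon_subst (zero_at p) \<mu>
    = (if p \<in> Poly_Mapping.keys \<mu> then 0 else (Poly_Mapping.single \<mu> 1 :: 'k::comm_ring_1 mpol))"
proof (cases "p \<in> Poly_Mapping.keys \<mu>")
  case True
  then have "Poly_Mapping.lookup \<mu> p \<noteq> 0" by (simp add: in_keys_iff)
  then have "zero_at p p ^ Poly_Mapping.lookup \<mu> p = (0 :: 'k mpol)"
    by (simp add: zero_at_def zero_power_eq)
  have "mon_subst (zero_at p) \<mu> = (0 :: 'k mpol)" unfolding mon_subst_def
    by (rule prod_zero) (use True \<open>zero_at p p ^ Poly_Mapping.lookup \<mu> p = 0\<close> in auto)
  then show ?thesis using True by simp
next
  case False
  then have "mon_subst (zero_at p) \<mu> = (mon_subst var \<mu> :: 'k mpol)" unfolding mon_subst_def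
    by (intro prod.cong) (auto simp: zero_at_def)
  then show ?thesis using False by (simp add: mon_subst_var)
qed

lemma lookup_set_zero: "Poly_Mapping.lookup (set_zero p F) \<nu>
    = (if Poly_Mapping.lookup \<nu> p = 0 then Poly_Mapping.lookup F \<nu> else 0)"
proof -
  have "set_zero p F = (\<Sum>\<mu>\<in>Poly_Mapping.keys F. cst (Poly_Mapping.lookup F \<mu>) * (if p
      \<in> Poly_Mapping.keys \<mu> then 0 else Poly_Mapping.single \<mu> 1))"
    by (simp add: set_zero_def poly_subst_def mon_subst_zero_at)
  then have "Poly_Mapping.lookup (set_zero p F) \<nu>
      = (\<Sum>\<mu>\<in>Poly_Mapping.keys F. Poly_Mapping.lookup (cst (Poly_Mapping.lookup F \<mu>) * (if p \<in> Poly_Mapping.keys \<mu> then 0 else Poly_Mapping.single \<mu> 1)) \<nu>)"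
    by (simp only: lookup_sum)
  also have "\<dots> = (\<Sum>\<mu>\<in>Poly_Mapping.keys F. if p \<in> Poly_Mapping.keys \<mu> then 0 else (if \<mu> = \<nu>
      then Poly_Mapping.lookup F \<mu> else 0))"
    by (rule sum.cong) (auto simp: cst_single lookup_single when_def)
  also have "\<dots> = (\<Sum>\<mu>\<in>Poly_Mapping.keys F. if \<mu> = \<nu> then (if p \<in> Poly_Mapping.keys \<nu> then 0
      else Poly_Mapping.lookup F \<nu>) else 0)"
    by (rule sum.cong) auto
  also have "\<dots> = (if Poly_Mapping.lookup \<nu> p = 0 then Poly_Mapping.lookup F \<nu> else 0)"
    by (simp add: sum.delta' in_keys_iff)
  finally show ?thesis .
qed

lemma set_zero_mult: "set_zero p (F * G) = set_zero p F * set_zero p G"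
  by (simp add: set_zero_def poly_subst_mult)

lemma set_zero_var_self: "set_zero p (var p) = 0"
  by (simp add: set_zero_def zero_at_def)

lemma set_zero_var_other: "q \<noteq> p \<Longrightarrow> set_zero p (var q) = var q"
  by (simp add: set_zero_def zero_at_def)

lemma set_zero_cst: "set_zero p (cst c) = cst c"
  by (simp add: set_zero_def)

lemma eq_var_mult_var_quot_if_set_zero:
  fixes F :: "'k::comm_ring_1 mpol"
  assumes "set_zero p F = 0"
  shows "F = var p * var_quot p F"
proof (rule eq_var_mult_var_quot, rule ballI)
  fix \<nu> assume \<nu>: "\<nu> \<in> Poly_Mapping.keys F"
  show "1 \<le> Poly_Mapping.lookup \<nu> p"
  proof (rule ccontr)
    assume "\<not> 1 \<le> Poly_Mapping.lookup \<nu> p"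
    then have "Poly_Mapping.lookup \<nu> p = 0" by simp
    then have "Poly_Mapping.lookup (set_zero p F) \<nu> = Poly_Mapping.lookup F \<nu>"
      by (simp add: lookup_set_zero)
    then show False using assms \<nu> by (simp add: in_keys_iff)
  qed
qed

definition linform :: "nat \<Rightarrow> nat \<Rightarrow> 'k::field \<times> 'k \<Rightarrow> 'k mpol" where
  "linform p q a = cst (snd a) * var p - cst (fst a) * var q"

lemma lin1_linform: "lin1 a = linform 0 1 a" by (simp add: lin1_def linform_def)
lemma lin2_linform: "lin2 b = linform 2 3 b" by (simp add: lin2_def linform_def)

definition var_pair :: "nat \<Rightarrow> nat \<Rightarrow> bool" where
  "var_pair p q \<longleftrightarrow> p \<noteq> q \<and> p \<le> 3 \<and> q \<le> 3 \<and> var_bideg p = var_bideg q"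

lemma var_pair01: "var_pair 0 1" and var_pair23: "var_pair 2 3"
  by (auto simp: var_pair_def var_bideg_def)

definition coord_compl :: "'k::field \<times> 'k \<Rightarrow> 'k \<times> 'k" where
  "coord_compl a = (if snd a \<noteq> 0 then (1 / snd a, 0) else (0, - 1 / fst a))"

lemma coord_compl_det: "a \<noteq> (0,0) \<Longrightarrow> snd a * fst (coord_compl a) - fst a * snd (coord_compl a) = 1"
  by (cases a) (auto simp: coord_compl_def)

definition lf_to_var :: "nat \<Rightarrow> nat \<Rightarrow> 'k::field \<times> 'k \<Rightarrow> nat \<Rightarrow> 'k mpol" where
  "lf_to_var p q a v = (if v = p then cst (fst (coord_compl a)) * var p + cst (fst a) * var q
     else if v = q then cst (snd (coord_compl a)) * var p + cst (snd a) * var q else var v)"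

definition var_to_lf :: "nat \<Rightarrow> nat \<Rightarrow> 'k::field \<times> 'k \<Rightarrow> nat \<Rightarrow> 'k mpol" where
  "var_to_lf p q a v = (if v = p then linform p q a
     else if v = q then cst (- snd (coord_compl a)) * var p + cst (fst (coord_compl a)) * var q else var v)"

lemma lf_to_var_linform_gen:
  assumes "p \<noteq> q"
  shows "poly_subst (lf_to_var p q a) (linform p q a') =
     cst (snd a' * fst (coord_compl a) - fst a' * snd (coord_compl a)) * var p + cst (snd a' * fst a - fst a' * snd a) * var q"
  using assms by (simp add: linform_def lf_to_var_def poly_subst_diff poly_subst_mult cst_mult cst_diff algebra_simps)

lemma lf_to_var_linform:
  assumes "p \<noteq> q" "a \<noteq> (0,0)"
  shows "poly_subst (lf_to_var p q a) (linform p q a) = var p"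
  using lf_to_var_linform_gen[OF assms(1), of a a] coord_compl_det[OF assms(2)]
    by (simp add: mult.commute)

lemmas lincomb_simps = poly_subst_add poly_subst_diff poly_subst_uminus poly_subst_mult
  cst_mult cst_diff cst_uminus algebra_simps

lemma var_to_lf_lf_to_var:
  assumes "p \<noteq> q" "a \<noteq> (0,0)"
  shows "poly_subst (var_to_lf p q a) (poly_subst (lf_to_var p q a) F) = F"
proof -
  have d: "snd a * fst (coord_compl a) - fst a * snd (coord_compl a) = 1"
    by (rule coord_compl_det[OF assms(2)])
  have "poly_subst (var_to_lf p q a) (lf_to_var p q a v) = var v" for v
  proof (cases "v = p \<or> v = q")
    case True
    then have "poly_subst (var_to_lf p q a) (lf_to_var p q a v) =
        cst (if v = p then snd a * fst (coord_compl a) - fst a * snd (coord_compl a) else 0) * var p +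
        cst (if v = q then snd a * fst (coord_compl a) - fst a * snd (coord_compl a) else 0) * var q"
      using assms(1) by (auto simp: lf_to_var_def var_to_lf_def linform_def lincomb_simps)
    then show ?thesis using d True assms(1) by auto
  qed (simp add: lf_to_var_def var_to_lf_def)
  then show ?thesis by (simp add: poly_subst_poly_subst)
qed

lemma lf_to_var_var_to_lf:
  assumes "p \<noteq> q" "a \<noteq> (0,0)"
  shows "poly_subst (lf_to_var p q a) (poly_subst (var_to_lf p q a) F) = F"
proof -
  have d: "snd a * fst (coord_compl a) - fst a * snd (coord_compl a) = 1"
    by (rule coord_compl_det[OF assms(2)])
  have "poly_subst (lf_to_var p q a) (var_to_lf p q a q) =
      cst 0 * var p + cst (snd a * fst (coord_compl a) - fst a * snd (coord_compl a)) * var q"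
    using assms(1) by (simp add: lf_to_var_def var_to_lf_def lincomb_simps)
  then have "poly_subst (lf_to_var p q a) (var_to_lf p q a v) = var v" for v
    using d lf_to_var_linform[OF assms] assms(1)
    by (cases "v = p"; cases "v = q") (simp_all add: var_to_lf_def lf_to_var_def)
  then show ?thesis by (simp add: poly_subst_poly_subst)
qed

lemma var_bihom_var_bideg: "v \<le> 3 \<Longrightarrow> var v \<in> bihom (fst (var_bideg v)) (snd (var_bideg v))"
proof -
  assume "v \<le> 3"
  then have "v = 0 \<or> v = 1 \<or> v = 2 \<or> v = 3" by auto
  then show ?thesis using var_bihom by (auto simp: var_bideg_def)
qed

lemma var_pair_lincomb_bihom:
  assumes "var_pair p q"
  shows "cst c * var p + cst d * var q \<in> (bihom (fst (var_bideg p)) (snd (var_bideg p)) :: 'k::field mpol set)"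
proof -
  have "p \<le> 3" "q \<le> 3" "var_bideg p = var_bideg q" using assms by (auto simp: var_pair_def)
  then show ?thesis using var_bihom_var_bideg[of p] var_bihom_var_bideg[of q]
    by (intro bihom_add cst_mult_bihom) simp_all
qed

lemma linform_bihom: "var_pair p q \<Longrightarrow> linform p q a \<in> bihom (fst (var_bideg p)) (snd (var_bideg p))"
  using var_pair_lincomb_bihom[of p q "snd a" "- fst a"] by (simp add: linform_def cst_uminus)

lemma lf_to_var_bihom:
  fixes a :: "'k::field \<times> 'k"
  assumes "var_pair p q" "v \<in> {0,1,2,3}"
  shows "lf_to_var p q a v \<in> bihom (fst (var_bideg v)) (snd (var_bideg v))"
  using assms var_pair_lincomb_bihom[OF assms(1)] var_bihom_var_bideg[of v]
  by (auto simp: lf_to_var_def var_pair_def)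

lemma var_to_lf_bihom:
  fixes a :: "'k::field \<times> 'k"
  assumes "var_pair p q" "v \<in> {0,1,2,3}"
  shows "var_to_lf p q a v \<in> bihom (fst (var_bideg v)) (snd (var_bideg v))"
  using assms var_pair_lincomb_bihom[OF assms(1)] var_bihom_var_bideg[of v]
    linform_bihom[OF assms(1), of a]
  by (auto simp: var_to_lf_def var_pair_def)

lemma poly_subst_lf_to_var_bihom: "var_pair p q \<Longrightarrow> F \<in> bihom d e \<Longrightarrow> poly_subst (lf_to_var p q a) F
    \<in> bihom d e"
  by (rule poly_subst_bihom[OF lf_to_var_bihom])
lemma poly_subst_var_to_lf_bihom: "var_pair p q \<Longrightarrow> F \<in> bihom d e \<Longrightarrow> poly_subst (var_to_lf p q a) F
    \<in> bihom d e"
  by (rule poly_subst_bihom[OF var_to_lf_bihom])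

lemma poly_subst_lf_to_var_ringR: "var_pair p q \<Longrightarrow> F \<in> ringR \<Longrightarrow> poly_subst (lf_to_var p q a) F
    \<in> ringR"
  by (rule poly_subst_ringR) (use lf_to_var_bihom bihom_ringR in blast)+
lemma poly_subst_var_to_lf_ringR: "var_pair p q \<Longrightarrow> F \<in> ringR \<Longrightarrow> poly_subst (var_to_lf p q a) F
    \<in> ringR"
  by (rule poly_subst_ringR) (use var_to_lf_bihom bihom_ringR in blast)+

lemma linform_ringR: "var_pair p q \<Longrightarrow> linform p q a \<in> ringR"
  using linform_bihom bihom_ringR by blast

text \<open>\<open>restrict_lf p q a F\<close> is the restriction of \<open>F\<close> to the line \<open>linform p q a = 0\<close>,
  written in coordinates in which this line is \<open>var p = 0\<close>.\<close>

definition restrict_lf :: "nat \<Rightarrow> nat \<Rightarrow> 'k::field \<times> 'k \<Rightarrow> 'k mpol \<Rightarrow> 'k mpol" where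
  "restrict_lf p q a F = set_zero p (poly_subst (lf_to_var p q a) F)"

lemma set_zero_add: "set_zero p (F + G) = set_zero p F + set_zero p G"
  by (simp add: set_zero_def poly_subst_add)

lemma restrict_lf_one[simp]: "restrict_lf p q a 1 = 1"
  by (simp add: restrict_lf_def set_zero_def)

lemma restrict_lf_mult: "restrict_lf p q a (F * G) = restrict_lf p q a F * restrict_lf p q a G"
  by (simp add: restrict_lf_def poly_subst_mult set_zero_mult)

lemma restrict_lf_power: "restrict_lf p q a (F ^ n) = restrict_lf p q a F ^ n"
  by (induction n) (auto simp: restrict_lf_mult)

lemma restrict_lf_prod: "restrict_lf p q a (\<Prod>x\<in>A. f x) = (\<Prod>x\<in>A. restrict_lf p q a (f x))"
  by (induction A rule: infinite_finite_induct) (auto simp: restrict_lf_mult)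

lemma restrict_lf_self: "p \<noteq> q \<Longrightarrow> a \<noteq> (0,0) \<Longrightarrow> restrict_lf p q a (linform p q a) = 0"
  by (simp add: restrict_lf_def lf_to_var_linform set_zero_var_self)

lemma var_nonzero: "var v \<noteq> (0 :: 'k::comm_ring_1 mpol)"
  by (metis lookup_single_eq lookup_zero one_neq_zero var_def)

lemma restrict_lf_other:
  assumes "p \<noteq> q" "\<not> proj_eq a' a"
  shows "restrict_lf p q a (linform p q a') \<noteq> 0"
proof -
  have "restrict_lf p q a (linform p q a') = cst (snd a' * fst a - fst a' * snd a) * var q"
    using assms(1) by (simp add: restrict_lf_def lf_to_var_linform_gen set_zero_add set_zero_mult set_zero_var_self set_zero_var_other set_zero_cst)
  moreover have "snd a' * fst a - fst a' * snd a \<noteq> 0" using assms(2) by (simp add: proj_eq_def)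
  ultimately show ?thesis using var_nonzero[of q] by simp
qed

lemma linform_nonzero: "p \<noteq> q \<Longrightarrow> a \<noteq> (0,0) \<Longrightarrow> linform p q a \<noteq> 0"
  using lf_to_var_linform[of p q a] var_nonzero[of p] by auto

lemma linform_dvd_if_restrict_lf_zero:
  assumes "var_pair p q" "a \<noteq> (0,0)" "F \<in> ringR" "restrict_lf p q a F = 0"
  shows "\<exists>H\<in>ringR. F = linform p q a * H"
proof -
  have pq: "p \<noteq> q" using assms(1) by (simp add: var_pair_def)
  let ?G = "poly_subst (lf_to_var p q a) F"
  have G: "?G = var p * var_quot p ?G"
    using eq_var_mult_var_quot_if_set_zero assms(4) by (simp add: restrict_lf_def)
  have "F = poly_subst (var_to_lf p q a) ?G" using var_to_lf_lf_to_var[OF pq assms(2)] by simp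
  also have "\<dots> = linform p q a * poly_subst (var_to_lf p q a) (var_quot p ?G)"
    by (subst G) (simp add: poly_subst_mult var_to_lf_def)
  finally have "F = linform p q a * poly_subst (var_to_lf p q a) (var_quot p ?G)" .
  moreover have "poly_subst (var_to_lf p q a) (var_quot p ?G) \<in> ringR"
    by (intro poly_subst_var_to_lf_ringR[OF assms(1)] var_quot_ringR poly_subst_lf_to_var_ringR[OF assms(1) assms(3)])
  ultimately show ?thesis by blast
qed

lemma linform_pow_cancel:
  assumes "var_pair p q" "a \<noteq> (0,0)" "P \<in> ringR" "restrict_lf p q a P \<noteq> 0"
  shows "H \<in> ringR \<Longrightarrow> K \<in> ringR \<Longrightarrow> P * H = linform p q a ^ e * K \<Longrightarrow> \<exists>H'\<in>ringR. H
      = linform p q a ^ e * H'"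
proof (induction e arbitrary: H K)
  case 0
  then show ?case by auto
next
  case (Suc e)
  have pq: "p \<noteq> q" using assms(1) by (simp add: var_pair_def)
  have "restrict_lf p q a P * restrict_lf p q a H = restrict_lf p q a (P * H)"
    by (simp only: restrict_lf_mult)
  also have "\<dots> = restrict_lf p q a (linform p q a ^ Suc e * K)" by (simp only: Suc.prems(3))
  also have "\<dots> = 0"
    by (simp add: restrict_lf_mult restrict_lf_power restrict_lf_self[OF pq assms(2)])
  finally have "restrict_lf p q a H = 0" using assms(4) by simp
  then obtain H1 where H1: "H1 \<in> ringR" "H = linform p q a * H1"
    using linform_dvd_if_restrict_lf_zero[OF assms(1,2) Suc.prems(1)] by blast
  have "linform p q a * (P * H1) = linform p q a * (linform p q a ^ e * K)"
    using Suc.prems(3) H1(2) by (simp add: algebra_simps)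
  then have "P * H1 = linform p q a ^ e * K" using linform_nonzero[OF pq assms(2)] by simp
  then obtain H' where "H' \<in> ringR" "H1 = linform p q a ^ e * H'"
    using Suc.IH[OF H1(1) Suc.prems(2)] by blast
  then show ?case using H1 by (intro bexI[of _ H']) auto
qed

lemma coprime_linform_pow_dvd:
  assumes "var_pair p q" "a \<noteq> (0,0)" "P \<in> ringR" "restrict_lf p q a P \<noteq> 0"
    and "H \<in> ringR" "K \<in> ringR" "F = P * H" "F = linform p q a ^ e * K"
  shows "\<exists>H'\<in>ringR. F = P * linform p q a ^ e * H'"
proof -
  obtain H' where "H' \<in> ringR" "H = linform p q a ^ e * H'"
    using linform_pow_cancel[OF assms(1-4) assms(5,6)] assms(7,8) by metis
  then show ?thesis using assms(7) by (intro bexI[of _ H']) (auto simp: mult.assoc)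
qed

definition multiples :: "'k::field mpol \<Rightarrow> nat \<Rightarrow> nat \<Rightarrow> 'k mpol set" where
  "multiples G p q = {F \<in> bihom p q. \<exists>H\<in>ringR. F = G * H}"

lemma multiples_subset: "multiples G p q \<subseteq> bihom p q"
  by (auto simp: multiples_def)

lemma subspace_multiples: "G \<in> ringR \<Longrightarrow> kv.subspace (multiples G p q)"
  unfolding kv.subspace_def multiples_def
proof (intro conjI ballI allI)
  show "0 \<in> {F \<in> bihom p q. \<exists>H\<in>ringR. F = G * H}" by (auto intro: bexI[of _ 0])
next
  fix F1 F2 assume "F1 \<in> {F \<in> bihom p q. \<exists>H\<in>ringR. F = G * H}" "F2 \<in> {F \<in> bihom p q. \<exists>H\<in>ringR. F
      = G * H}"
  then obtain H1 H2 where "F1 \<in> bihom p q" "F2 \<in> bihom p q" "H1 \<in> ringR" "H2 \<in> ringR" "F1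
      = G * H1" "F2 = G * H2"
    by blast
  then show "F1 + F2 \<in> {F \<in> bihom p q. \<exists>H\<in>ringR. F = G * H}"
    by (auto intro!: bihom_add bexI[of _ "H1 + H2"] ringR_add simp: algebra_simps)
next
  fix c F1 assume "F1 \<in> {F \<in> bihom p q. \<exists>H\<in>ringR. F = G * H}"
  then obtain H1 where h: "F1 \<in> bihom p q" "H1 \<in> ringR" "F1 = G * H1" by blast
  have "kscale c F1 \<in> bihom p q" unfolding kscale_def by (rule cst_mult_bihom[OF h(1)])
  moreover have "cst c * H1 \<in> ringR" by (rule cst_mult_ringR[OF h(2)])
  moreover have "kscale c F1 = G * (cst c * H1)"
    unfolding kscale_def h(3) by (simp add: mult.left_commute)
  ultimately show "kscale c F1 \<in> {F \<in> bihom p q. \<exists>H\<in>ringR. F = G * H}" by blast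
qed

lemma fin_dim_multiples: "kv.fin_dim (multiples G p q)"
  using kv.fin_dim_subset[OF fin_dim_bihom multiples_subset] .

lemma multiples_eq_image:
  assumes G: "G \<in> bihom g1 g2" "G \<noteq> 0" and deg: "g1 \<le> p" "g2 \<le> q"
  shows "multiples G p q = (\<lambda>H. G * H) ` bihom (p - g1) (q - g2)"
proof (intro equalityI subsetI)
  fix F assume "F \<in> multiples G p q"
  then obtain H where H: "H \<in> ringR" "F = G * H" "F \<in> bihom p q" by (auto simp: multiples_def)
  have "H \<in> bihom (p - g1) (q - g2)"
    using bihom_factor[OF G H(1)] H(2,3) by (cases "H = 0") auto
  then show "F \<in> (\<lambda>H. G * H) ` bihom (p - g1) (q - g2)" using H(2) by blast
next
  fix F assume "F \<in> (\<lambda>H. G * H) ` bihom (p - g1) (q - g2)"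
  then obtain H where H: "H \<in> bihom (p - g1) (q - g2)" "F = G * H" by blast
  have "F \<in> bihom p q" using bihom_mult[OF G(1) H(1)] H(2) deg by simp
  then show "F \<in> multiples G p q" using H bihom_ringR by (auto simp: multiples_def)
qed

lemma multiples_eq_zero:
  assumes G: "G \<in> bihom g1 g2" "G \<noteq> 0" and deg: "\<not> (g1 \<le> p \<and> g2 \<le> q)"
  shows "multiples G p q = {0}"
proof (intro equalityI subsetI)
  fix F assume "F \<in> multiples G p q"
  then obtain H where H: "H \<in> ringR" "F = G * H" "F \<in> bihom p q" by (auto simp: multiples_def)
  have "H = 0" using bihom_factor[OF G H(1)] H(2,3) deg by blast
  then show "F \<in> {0}" using H(2) by simp
qed (auto simp: multiples_def intro: bexI[of _ 0])

lemma dim_multiples: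
  assumes G: "G \<in> bihom g1 g2" "G \<noteq> 0"
  shows "kv.dim (multiples G p q) = (p + 1 - g1) * (q + 1 - g2)"
proof (cases "g1 \<le> p \<and> g2 \<le> q")
  case True
  then have "kv.dim (multiples G p q) = kv.dim ((\<lambda>H. G * H) ` bihom (p - g1) (q - g2))"
    by (simp add: multiples_eq_image[OF G])
  also have "\<dots> = kv.dim (bihom (p - g1) (q - g2) :: 'a mpol set)"
    by (rule dim_mult_image[OF G(2) subspace_bihom fin_dim_bihom])
  also have "\<dots> = (p - g1 + 1) * (q - g2 + 1)" by (rule dim_bihom)
  also have "\<dots> = (p + 1 - g1) * (q + 1 - g2)" using True by (simp add: Suc_diff_le)
  finally show ?thesis .
next
  case False
  then show ?thesis by (auto simp: multiples_eq_zero[OF G] kv.dim_zero_space)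
qed

definition nonproportional :: "'i set \<Rightarrow> ('i \<Rightarrow> 'k::field \<times> 'k) \<Rightarrow> bool" where
  "nonproportional C a \<longleftrightarrow> (\<forall>c\<in>C. a c \<noteq> (0,0)) \<and> (\<forall>c\<in>C. \<forall>c'\<in>C. c \<noteq> c' \<longrightarrow> \<not> proj_eq (a c) (a c'))"

definition lf_prod :: "nat \<Rightarrow> nat \<Rightarrow> 'i set \<Rightarrow> ('i \<Rightarrow> 'k::field \<times> 'k) \<Rightarrow> ('i \<Rightarrow> nat) \<Rightarrow> 'k mpol" where
  "lf_prod p q C a e = (\<Prod>c\<in>C. linform p q (a c) ^ e c)"

lemma lf_prod_ringR: "var_pair p q \<Longrightarrow> lf_prod p q C a e \<in> ringR"
  unfolding lf_prod_def by (intro ringR_prod ringR_power linform_ringR)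

lemma lf_prod_bihom: "var_pair p q \<Longrightarrow> lf_prod p q C a e
    \<in> bihom ((\<Sum>c\<in>C. e c) * fst (var_bideg p)) ((\<Sum>c\<in>C. e c) * snd (var_bideg p))"
proof -
  assume pq: "var_pair p q"
  have "lf_prod p q C a e \<in> bihom (\<Sum>c\<in>C. e c * fst (var_bideg p)) (\<Sum>c\<in>C. e c * snd (var_bideg p))"
    unfolding lf_prod_def by (intro bihom_prod bihom_power linform_bihom[OF pq])
  then show ?thesis by (simp add: sum_distrib_right)
qed

lemma lf_prod_nonzero: "var_pair p q \<Longrightarrow> finite C \<Longrightarrow> nonproportional C a \<Longrightarrow> lf_prod p q C a e \<noteq> 0"
  unfolding lf_prod_def nonproportional_def var_pair_def
  by (auto simp: prod_zero_iff linform_nonzero)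

lemma restrict_lf_lf_prod_nonzero:
  assumes "var_pair p q" "finite C" "nonproportional C a" "\<forall>c\<in>C. \<not> proj_eq (a c) b"
  shows "restrict_lf p q b (lf_prod p q C a e) \<noteq> 0"
proof -
  have pq: "p \<noteq> q" using assms(1) by (simp add: var_pair_def)
  have "\<forall>c\<in>C. restrict_lf p q b (linform p q (a c)) \<noteq> 0"
    using restrict_lf_other[OF pq] assms(4) by blast
  then show ?thesis unfolding lf_prod_def restrict_lf_prod restrict_lf_power
    using assms(2) by (auto simp: prod_zero_iff)
qed

lemma proj_eq_sym: "proj_eq a b \<longleftrightarrow> proj_eq b a"
  unfolding proj_eq_def by (metis mult.commute)

lemma lf_prod_dvd:
  assumes pq: "var_pair p q" and fin: "finite C" and np: "nonproportional C a" and F: "F \<in> ringR"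
    and dv: "\<forall>c\<in>C. \<exists>K\<in>ringR. F = linform p q (a c) ^ e c * K"
  shows "\<exists>H\<in>ringR. F = lf_prod p q C a e * H"
  using fin np dv
proof (induction C rule: finite_induct)
  case empty
  then show ?case using F by (auto simp: lf_prod_def)
next
  case (insert c C)
  have npC: "nonproportional C a" using insert.prems(1) by (auto simp: nonproportional_def)
  obtain H where H: "H \<in> ringR" "F = lf_prod p q C a e * H"
    using insert.IH[OF npC] insert.prems(2) by blast
  obtain K where K: "K \<in> ringR" "F = linform p q (a c) ^ e c * K" using insert.prems(2) by blast
  have ac: "a c \<noteq> (0,0)" using insert.prems(1) by (auto simp: nonproportional_def)
  have "\<forall>c'\<in>C. \<not> proj_eq (a c') (a c)"
    using insert.prems(1) insert.hyps(2) by (auto simp: nonproportional_def)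
  then have set_zero: "restrict_lf p q (a c) (lf_prod p q C a e) \<noteq> 0"
    by (rule restrict_lf_lf_prod_nonzero[OF pq insert.hyps(1) npC])
  obtain H' where H': "H' \<in> ringR" "F = lf_prod p q C a e * linform p q (a c) ^ e c * H'"
    using coprime_linform_pow_dvd[OF pq ac lf_prod_ringR[OF pq] set_zero H(1) K(1) H(2) K(2)]
      by blast
  have "lf_prod p q (insert c C) a e = linform p q (a c) ^ e c * lf_prod p q C a e"
    using insert.hyps by (simp add: lf_prod_def)
  then show ?case using H' by (intro bexI[of _ H']) (auto simp: algebra_simps)
qed

lemma multiples_lf_prod:
  assumes pq: "var_pair p q" and fin: "finite C" and np: "nonproportional C a"
  shows "multiples (lf_prod p q C a e) i j = {F \<in> bihom i j. \<forall>c\<in>C. F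
      \<in> multiples (linform p q (a c) ^ e c) i j}"
proof
  show "multiples (lf_prod p q C a e) i j \<subseteq> {F \<in> bihom i j. \<forall>c\<in>C. F
      \<in> multiples (linform p q (a c) ^ e c) i j}"
  proof
    fix F assume "F \<in> multiples (lf_prod p q C a e) i j"
    then obtain H where H: "F \<in> bihom i j" "H \<in> ringR" "F = lf_prod p q C a e * H"
      by (auto simp: multiples_def)
    have "F \<in> multiples (linform p q (a c) ^ e c) i j" if c: "c \<in> C" for c
    proof -
      have "lf_prod p q C a e = linform p q (a c) ^ e c * lf_prod p q (C - {c}) a e"
        unfolding lf_prod_def using fin c by (simp add: prod.remove)
      then have "F = linform p q (a c) ^ e c * (lf_prod p q (C - {c}) a e * H)"
        using H(3) by (simp add: mult.assoc)
      moreover have "lf_prod p q (C - {c}) a e * H \<in> ringR"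
        by (intro ringR_mult lf_prod_ringR[OF pq] H(2))
      ultimately show ?thesis using H(1) by (auto simp: multiples_def)
    qed
    then show "F \<in> {F \<in> bihom i j. \<forall>c\<in>C. F \<in> multiples (linform p q (a c) ^ e c) i j}"
      using H(1) by blast
  qed
  show "{F \<in> bihom i j. \<forall>c\<in>C. F \<in> multiples (linform p q (a c) ^ e c) i j}
      \<subseteq> multiples (lf_prod p q C a e) i j"
  proof
    fix F assume F: "F \<in> {F \<in> bihom i j. \<forall>c\<in>C. F \<in> multiples (linform p q (a c) ^ e c) i j}"
    then have "\<forall>c\<in>C. \<exists>K\<in>ringR. F = linform p q (a c) ^ e c * K" by (auto simp: multiples_def)
    moreover have "F \<in> ringR" using F bihom_ringR by blast
    ultimately obtain H where "H \<in> ringR" "F = lf_prod p q C a e * H"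
      using lf_prod_dvd[OF pq fin np] by blast
    then show "F \<in> multiples (lf_prod p q C a e) i j" using F by (auto simp: multiples_def)
  qed
qed

lemma dim_multiples_lf_prod_x:
  assumes "finite C" "nonproportional C a"
  shows "kv.dim (multiples (lf_prod 0 1 C a e) i j) = (i + 1 - (\<Sum>c\<in>C. e c)) * (j + 1)"
proof -
  have "lf_prod 0 1 C a e \<in> bihom ((\<Sum>c\<in>C. e c) * 1) ((\<Sum>c\<in>C. e c) * 0)"
    using lf_prod_bihom[OF var_pair01, of C a e] by (simp add: var_bideg_def)
  then show ?thesis
    using dim_multiples[of "lf_prod 0 1 C a e" "\<Sum>c\<in>C. e c" 0 i j] lf_prod_nonzero[OF var_pair01 assms]
    by simp
qed

lemma dim_multiples_lf_prod_y:
  assumes "finite C" "nonproportional C a"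
  shows "kv.dim (multiples (lf_prod 2 3 C a e) i j) = (i + 1) * (j + 1 - (\<Sum>c\<in>C. e c))"
proof -
  have "lf_prod 2 3 C a e \<in> bihom ((\<Sum>c\<in>C. e c) * 0) ((\<Sum>c\<in>C. e c) * 1)"
    using lf_prod_bihom[OF var_pair23, of C a e] by (simp add: var_bideg_def)
  then show ?thesis
    using dim_multiples[of "lf_prod 2 3 C a e" 0 "\<Sum>c\<in>C. e c" i j] lf_prod_nonzero[OF var_pair23 assms]
    by simp
qed

section \<open>Independence of the rows in high x-degree\<close>

lemma linform_x_pow_bihom: "linform 0 1 a ^ l \<in> bihom l 0"
  using bihom_power[OF linform_bihom[OF var_pair01, of a], of l] by (simp add: var_bideg_def)

lemma linform_pow_nonzero: "a \<noteq> (0,0) \<Longrightarrow> linform 0 1 a ^ l \<noteq> 0"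
  using linform_nonzero[of 0 1 a] by simp

lemma dim_multiples_linform_pow: "a \<noteq> (0,0) \<Longrightarrow> kv.dim (multiples (linform 0 1 a ^ l) i j)
    = (i + 1 - l) * (j + 1)"
  using dim_multiples[OF linform_x_pow_bihom linform_pow_nonzero] by simp

text \<open>The rows do not interact in high x-degree: if the \<open>l r\<close> add up to at most \<open>i + 1\<close>,
  the multiples of the powers \<open>L_r ^ l r\<close> of the linear forms of the rows span all
  of \<open>R_(i,j)\<close>.\<close>

lemma dim_span_multiples_rows:
  fixes a :: "'i \<Rightarrow> 'k::field \<times> 'k"
  assumes fin: "finite R" and r: "r \<notin> R" and np: "nonproportional (insert r R) a"
    and deg: "(\<Sum>s\<in>insert r R. l s) \<le> i + 1"
  shows "kv.dim (bihom i j :: 'k mpol set) \<le>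
    kv.dim (kv.span (multiples (lf_prod 0 1 R a l) i j \<union> multiples (linform 0 1 (a r) ^ l r) i j))"
    (is "_ \<le> kv.dim (kv.span (?M1 \<union> ?M2))")
proof -
  have npR: "nonproportional R a" using np by (auto simp: nonproportional_def)
  have ar: "a r \<noteq> (0,0)" using np by (auto simp: nonproportional_def)
  have "?M1 \<inter> ?M2 \<subseteq> multiples (lf_prod 0 1 (insert r R) a l) i j"
    using multiples_lf_prod[OF var_pair01 fin npR] multiples_lf_prod[OF var_pair01 _ np] fin
    by auto
  then have "kv.dim (?M1 \<inter> ?M2) \<le> kv.dim (multiples (lf_prod 0 1 (insert r R) a l) i j)"
    by (rule kv.dim_mono_fin_dim[OF fin_dim_multiples])
  also have "\<dots> = (i + 1 - (\<Sum>s\<in>insert r R. l s)) * (j + 1)"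
    using dim_multiples_lf_prod_x[of "insert r R" a l i j] fin np by simp
  finally have "kv.dim (?M1 \<inter> ?M2) \<le> (i + 1 - (\<Sum>s\<in>insert r R. l s)) * (j + 1)" .
  moreover have "kv.dim (kv.span (?M1 \<union> ?M2)) + kv.dim (?M1 \<inter> ?M2) = kv.dim ?M1 + kv.dim ?M2"
    by (intro kv.dim_span_Un_plus_dim_Int subspace_multiples fin_dim_multiples lf_prod_ringR
        ringR_power linform_ringR var_pair01)
  moreover have "i + 1 - (\<Sum>s\<in>R. l s) + (i + 1 - l r) = (i + 1) + (i + 1 - (\<Sum>s\<in>insert r R. l s))"
    using deg fin r by simp
  then have "kv.dim ?M1 + kv.dim ?M2 = (i + 1) * (j + 1) + (i + 1 - (\<Sum>s\<in>insert r R. l s)) * (j + 1)"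
    using dim_multiples_lf_prod_x[OF fin npR] dim_multiples_linform_pow[OF ar]
    by (metis add_mult_distrib)
  ultimately show ?thesis
    unfolding dim_bihom by linarith
qed

lemma codim_Int_row:
  fixes a :: "'i \<Rightarrow> 'k::field \<times> 'k" and A B :: "'k mpol set"
  assumes fin: "finite R" and r: "r \<notin> R" and np: "nonproportional (insert r R) a"
    and deg: "(\<Sum>s\<in>insert r R. l s) \<le> i + 1"
    and A: "kv.subspace A" "A \<subseteq> bihom i j" "multiples (lf_prod 0 1 R a l) i j \<subseteq> A"
    and B: "kv.subspace B" "B \<subseteq> bihom i j" "multiples (linform 0 1 (a r) ^ l r) i j \<subseteq> B"
  shows "kv.dim (bihom i j :: 'k mpol set) - kv.dim (A \<inter> B) =
    (kv.dim (bihom i j :: 'k mpol set) - kv.dim A) + (kv.dim (bihom i j :: 'k mpol set) - kv.dim B)"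
proof -
  have "kv.span (A \<union> B) \<subseteq> bihom i j"
    by (rule kv.span_minimal) (use A(2) B(2) subspace_bihom in auto)
  moreover have "kv.span (multiples (lf_prod 0 1 R a l) i j \<union> multiples (linform 0 1 (a r) ^ l r) i j)
      \<subseteq> kv.span (A \<union> B)"
    using A(3) B(3) by (intro kv.span_mono) blast
  ultimately have "kv.dim (kv.span (multiples (lf_prod 0 1 R a l) i j \<union>
        multiples (linform 0 1 (a r) ^ l r) i j)) \<le> kv.dim (kv.span (A \<union> B))"
    using kv.dim_mono_fin_dim[OF kv.fin_dim_subset[OF fin_dim_bihom]] by blast
  then have "kv.dim (bihom i j :: 'k mpol set) \<le> kv.dim (kv.span (A \<union> B))"
    using dim_span_multiples_rows[OF fin r np deg, where j=j] by linarith
  then show ?thesis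
    by (rule kv.codim_Int[OF subspace_bihom[of i j] fin_dim_bihom[of i j] A(1,2) B(1,2)])
qed

lemma codim_Inter_rows:
  fixes a :: "'i \<Rightarrow> 'k::field \<times> 'k" and S :: "'i \<Rightarrow> 'k mpol set"
  assumes "finite R" and "nonproportional R a" and "(\<Sum>r\<in>R. l r) \<le> i + 1"
    and "\<And>r. r \<in> R \<Longrightarrow>
      kv.subspace (S r) \<and> S r \<subseteq> bihom i j \<and> multiples (linform 0 1 (a r) ^ l r) i j \<subseteq> S r"
  shows "kv.dim (bihom i j :: 'k mpol set) - kv.dim (bihom i j \<inter> (\<Inter>r\<in>R. S r))
      = (\<Sum>r\<in>R. kv.dim (bihom i j :: 'k mpol set) - kv.dim (S r))"
  using assms
proof (induction R rule: finite_induct)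
  case empty
  then show ?case by simp
next
  case (insert r R)
  let ?V = "bihom i j :: 'k mpol set"
  let ?A = "?V \<inter> (\<Inter>s\<in>R. S s)"
  have npR: "nonproportional R a" using insert.prems(1) by (auto simp: nonproportional_def)
  have S: "kv.subspace (S s)" "S s \<subseteq> ?V" "multiples (linform 0 1 (a s) ^ l s) i j \<subseteq> S s"
    if "s \<in> insert r R" for s
    using insert.prems(3) that by auto
  have "kv.subspace ?A"
    by (intro kv.subspace_inter subspace_bihom kv.subspace_Int) (use S in blast)
  moreover have "multiples (lf_prod 0 1 R a l) i j \<subseteq> ?A"
  proof
    fix F assume "F \<in> multiples (lf_prod 0 1 R a l) i j"
    then have "F \<in> ?V" "\<forall>s\<in>R. F \<in> multiples (linform 0 1 (a s) ^ l s) i j"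
      unfolding multiples_lf_prod[OF var_pair01 insert.hyps(1) npR] by auto
    then show "F \<in> ?A" using S(3) by blast
  qed
  ultimately have "kv.dim ?V - kv.dim (?A \<inter> S r)
      = (kv.dim ?V - kv.dim ?A) + (kv.dim ?V - kv.dim (S r))"
    using codim_Int_row[OF insert.hyps insert.prems(1,2)] S[of r] by blast
  moreover have "?A \<inter> S r = ?V \<inter> (\<Inter>s\<in>insert r R. S s)" by auto
  moreover have "kv.dim ?V - kv.dim ?A = (\<Sum>s\<in>R. kv.dim ?V - kv.dim (S s))"
  proof (rule insert.IH[OF npR])
    show "(\<Sum>s\<in>R. l s) \<le> i + 1" using insert.prems(2) insert.hyps by simp
  qed (use insert.prems(3) in blast)
  ultimately show ?case using insert.hyps by simp
qed

lemma pt_ideal_pow_0: "0 \<in> pt_ideal_pow P \<mu>"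
  unfolding pt_ideal_pow_def by (rule CollectI, rule exI[of _ "\<lambda>_. 0"]) simp

lemma pt_ideal_pow_add: "F \<in> pt_ideal_pow P \<mu> \<Longrightarrow> G \<in> pt_ideal_pow P \<mu> \<Longrightarrow> F + G
    \<in> (pt_ideal_pow P \<mu> :: 'k::field mpol set)"
  unfolding pt_ideal_pow_def
proof (elim CollectE exE conjE, intro CollectI)
  fix g h assume g: "\<forall>k\<le>\<mu>. g k \<in> ringR" and h: "\<forall>k\<le>\<mu>. h k \<in> ringR"
    and F: "F = (\<Sum>k\<le>\<mu>. g k * lin1 (fst P) ^ k * lin2 (snd P) ^ (\<mu> - k))"
    and G: "G = (\<Sum>k\<le>\<mu>. h k * lin1 (fst P) ^ k * lin2 (snd P) ^ (\<mu> - k))"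
  show "\<exists>g. (\<forall>k\<le>\<mu>. g k \<in> ringR) \<and> F + G = (\<Sum>k\<le>\<mu>. g k * lin1 (fst P) ^ k * lin2 (snd P) ^ (\<mu> - k))"
    by (rule exI[of _ "\<lambda>k. g k + h k"]) (use g h in \<open>auto simp: F G ringR_add sum.distrib algebra_simps\<close>)
qed

lemma pt_ideal_pow_mult: "F \<in> pt_ideal_pow P \<mu> \<Longrightarrow> r \<in> ringR \<Longrightarrow> r * F
    \<in> (pt_ideal_pow P \<mu> :: 'k::field mpol set)"
  unfolding pt_ideal_pow_def
proof (elim CollectE exE conjE, intro CollectI)
  fix g assume g: "\<forall>k\<le>\<mu>. g k \<in> ringR" and r: "r \<in> ringR"
    and F: "F = (\<Sum>k\<le>\<mu>. g k * lin1 (fst P) ^ k * lin2 (snd P) ^ (\<mu> - k))"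
  show "\<exists>g. (\<forall>k\<le>\<mu>. g k \<in> ringR) \<and> r * F = (\<Sum>k\<le>\<mu>. g k * lin1 (fst P) ^ k * lin2 (snd P) ^ (\<mu> - k))"
    by (rule exI[of _ "\<lambda>k. r * g k"]) (use g r in \<open>auto simp: F ringR_mult sum_distrib_left algebra_simps\<close>)
qed

lemma pt_ideal_pow_generator: "k0 \<le> \<mu> \<Longrightarrow> lin1 (fst P) ^ k0 * lin2 (snd P) ^ (\<mu> - k0)
    \<in> (pt_ideal_pow P \<mu> :: 'k::field mpol set)"
  unfolding pt_ideal_pow_def
proof (intro CollectI exI[of _ "\<lambda>k. if k = k0 then 1 else 0"] conjI)
  assume "k0 \<le> \<mu>"
  show "\<forall>k\<le>\<mu>. (if k = k0 then 1 else 0) \<in> (ringR :: 'k mpol set)" by auto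
  have "(\<Sum>k\<le>\<mu>. (if k = k0 then 1 else 0) * lin1 (fst P) ^ k * lin2 (snd P) ^ (\<mu> - k)) =
        (\<Sum>k\<le>\<mu>. if k = k0 then lin1 (fst P) ^ k * lin2 (snd P) ^ (\<mu> - k) else (0 :: 'k mpol))"
    by (rule sum.cong) auto
  also have "\<dots> = lin1 (fst P) ^ k0 * lin2 (snd P) ^ (\<mu> - k0)"
    using \<open>k0 \<le> \<mu>\<close> by (simp add: sum.delta)
  finally show "lin1 (fst P) ^ k0 * lin2 (snd P) ^ (\<mu> - k0) =
      (\<Sum>k\<le>\<mu>. (if k = k0 then 1 else 0) * lin1 (fst P) ^ k * lin2 (snd P) ^ (\<mu> - k))" by simp
qed

lemma pt_ideal_pow_sum: "(\<And>x. x \<in> A \<Longrightarrow> f x \<in> pt_ideal_pow P \<mu>) \<Longrightarrow> sum f A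
    \<in> (pt_ideal_pow P \<mu> :: 'k::field mpol set)"
  by (induction A rule: infinite_finite_induct) (auto simp: pt_ideal_pow_0 pt_ideal_pow_add)

lemma pt_ideal_pow_kscale: "F \<in> pt_ideal_pow P \<mu> \<Longrightarrow> kscale c F
    \<in> (pt_ideal_pow P \<mu> :: 'k::field mpol set)"
  unfolding kscale_def by (rule pt_ideal_pow_mult) auto

lemma subspace_pt_ideal_pow: "kv.subspace (pt_ideal_pow P \<mu> :: 'k::field mpol set)"
  unfolding kv.subspace_def using pt_ideal_pow_0 pt_ideal_pow_add pt_ideal_pow_kscale by blast

lemma pt_ideal_pow_lin_pow_mult:
  assumes "u + v \<ge> \<mu>" "r \<in> ringR"
  shows "lin1 (fst P) ^ u * lin2 (snd P) ^ v * r \<in> (pt_ideal_pow P \<mu> :: 'k::field mpol set)"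
proof -
  define k where "k = min u \<mu>"
  have k: "k \<le> \<mu>" "k \<le> u" "\<mu> - k \<le> v" using assms(1) by (auto simp: k_def)
  have "lin1 (fst P) ^ u * lin2 (snd P) ^ v * r =
     (lin1 (fst P) ^ (u - k) * lin2 (snd P) ^ (v - (\<mu> - k)) * r) * (lin1 (fst P) ^ k * lin2 (snd P) ^ (\<mu> - k))"
  proof -
    have "lin1 (fst P) ^ u = lin1 (fst P) ^ (u - k) * (lin1 (fst P) :: 'k mpol) ^ k"
      using k by (simp add: power_add[symmetric])
    moreover have "lin2 (snd P) ^ v
        = lin2 (snd P) ^ (v - (\<mu> - k)) * (lin2 (snd P) :: 'k mpol) ^ (\<mu> - k)"
      using k by (simp add: power_add[symmetric])
    ultimately show ?thesis by (simp add: algebra_simps)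
  qed
  also have "\<dots> \<in> pt_ideal_pow P \<mu>"
    by (intro pt_ideal_pow_mult pt_ideal_pow_generator k ringR_mult ringR_power lin1_ringR lin2_ringR assms(2))
  finally show ?thesis .
qed

lemma proj_eq_scalar_multiple:
  fixes a a' :: "'k::field \<times> 'k"
  assumes "a \<noteq> (0,0)" "a' \<noteq> (0,0)" "proj_eq a' a"
  shows "\<exists>lam. lam \<noteq> 0 \<and> fst a' = lam * fst a \<and> snd a' = lam * snd a"
proof (cases "snd a = 0")
  case False
  define lam where "lam = snd a' / snd a"
  have e: "fst a' * snd a = snd a' * fst a" using assms(3) by (simp add: proj_eq_def)
  have "fst a' = lam * fst a" using e False by (simp add: lam_def field_simps)
  moreover have "snd a' = lam * snd a" using False by (simp add: lam_def)
  moreover have "lam \<noteq> 0"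
    using assms(2) \<open>fst a' = lam * fst a\<close> \<open>snd a' = lam * snd a\<close> by (cases a') auto
  ultimately show ?thesis by blast
next
  case True
  then have f: "fst a \<noteq> 0" using assms(1) by (cases a) auto
  define lam where "lam = fst a' / fst a"
  have e: "fst a' * snd a = snd a' * fst a" using assms(3) by (simp add: proj_eq_def)
  then have "snd a' = 0" using True f by simp
  have "fst a' = lam * fst a" using f by (simp add: lam_def)
  moreover have "snd a' = lam * snd a" using True \<open>snd a' = 0\<close> by simp
  moreover have "lam \<noteq> 0" using assms(2) \<open>fst a' = lam * fst a\<close> \<open>snd a' = 0\<close> by (cases a') auto
  ultimately show ?thesis by blast
qed

lemma pt_ideal_pow_proj_eq:
  fixes a a' :: "'k::field \<times> 'k"
  assumes "a \<noteq> (0,0)" "a' \<noteq> (0,0)" "proj_eq a' a"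
  shows "pt_ideal_pow (a', b) \<mu> = pt_ideal_pow (a, b) \<mu>"
proof -
  obtain lam where l: "lam \<noteq> 0" "fst a' = lam * fst a" "snd a' = lam * snd a"
    using proj_eq_scalar_multiple[OF assms] by blast
  have L: "lin1 a' = cst lam * lin1 a" unfolding lin1_def l by (simp add: cst_mult algebra_simps)
  have sub: "pt_ideal_pow (a', b) \<mu> \<subseteq> pt_ideal_pow (a, b) \<mu>"
    if L: "lin1 a' = cst lam * lin1 a" for a a' :: "'k \<times> 'k" and lam
  proof
    fix F assume "F \<in> pt_ideal_pow (a', b) \<mu>"
    then obtain g where g: "\<forall>k\<le>\<mu>. g k \<in> ringR" "F = (\<Sum>k\<le>\<mu>. g k * lin1 a' ^ k * lin2 b ^ (\<mu> - k))"
      by (auto simp: pt_ideal_pow_def)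
    have "F = (\<Sum>k\<le>\<mu>. (cst (lam ^ k) * g k) * lin1 a ^ k * lin2 b ^ (\<mu> - k))"
      unfolding g(2) L
        by (intro sum.cong refl) (simp add: power_mult_distrib cst_power algebra_simps)
    moreover have "\<forall>k\<le>\<mu>. cst (lam ^ k) * g k \<in> ringR" using g(1) by (auto intro: cst_mult_ringR)
    ultimately show "F \<in> pt_ideal_pow (a, b) \<mu>" unfolding pt_ideal_pow_def by auto
  qed
  have L': "lin1 a = cst (inverse lam) * lin1 a'"
    using L l(1) by (simp add: cst_mult[symmetric] mult.assoc[symmetric])
  show ?thesis using sub[OF L] sub[OF L'] by blast
qed

definition xexp :: "nat \<Rightarrow> nat \<Rightarrow> (nat \<Rightarrow>\<^sub>0 nat)" where
  "xexp u w = Poly_Mapping.single 0 u + Poly_Mapping.single 1 w"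

definition xmon :: "nat \<Rightarrow> nat \<Rightarrow> 'k::comm_ring_1 mpol" where
  "xmon u w = Poly_Mapping.single (xexp u w) 1"

lemma lookup_xexp: "Poly_Mapping.lookup (xexp u w) k
    = (if k = 0 then u else if k = 1 then w else 0)"
  by (simp add: xexp_def lookup_add lookup_single when_def)

lemma xmon_eq: "xmon u w = var 0 ^ u * (var 1 ^ w :: 'k::comm_ring_1 mpol)"
  by (simp add: xmon_def xexp_def var_power mult_single)

lemma nat_pm_ex_iff: "(\<exists>\<nu>'. \<nu> = m + \<nu>') \<longleftrightarrow> (\<forall>k. Poly_Mapping.lookup m k \<le> Poly_Mapping.lookup \<nu> k)"
  for \<nu> m :: "nat \<Rightarrow>\<^sub>0 nat"
proof
  assume "\<exists>\<nu>'. \<nu> = m + \<nu>'"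
  then show "\<forall>k. Poly_Mapping.lookup m k \<le> Poly_Mapping.lookup \<nu> k" by (auto simp: lookup_add)
next
  assume le: "\<forall>k. Poly_Mapping.lookup m k \<le> Poly_Mapping.lookup \<nu> k"
  have "\<nu> = m + (\<nu> - m)"
    by (rule poly_mapping_eqI) (use le in \<open>simp add: lookup_add lookup_minus\<close>)
  then show "\<exists>\<nu>'. \<nu> = m + \<nu>'" by blast
qed

lemma ex_xexp_iff: "(\<exists>\<nu>'. \<nu> = xexp u w + \<nu>')
    \<longleftrightarrow> (u \<le> Poly_Mapping.lookup \<nu> 0 \<and> w \<le> Poly_Mapping.lookup \<nu> 1)"
  unfolding nat_pm_ex_iff lookup_xexp
  by (metis le0 zero_neq_one)

lemma lookup_xmon_mult:
  "Poly_Mapping.lookup (xmon u w * H) \<nu> =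
    (if u \<le> Poly_Mapping.lookup \<nu> 0 \<and> w \<le> Poly_Mapping.lookup \<nu> 1 then Poly_Mapping.lookup H (\<nu> - xexp u w) else 0)"
  for H :: "'k::comm_ring_1 mpol"
  unfolding xmon_def lookup_single_mult ex_xexp_iff by simp

text \<open>For \<open>F\<close> of x-degree \<open>i\<close>, \<open>xslice i u F\<close> is the form \<open>G_u\<close> in \<open>y0, y1\<close> of the
  expansion \<open>F = (\<Sum>u\<le>i. x0 ^ u * x1 ^ (i - u) * G_u)\<close>.\<close>

definition xslice :: "nat \<Rightarrow> nat \<Rightarrow> 'k::comm_ring_1 mpol \<Rightarrow> 'k mpol" where
  "xslice i u F = Abs_poly_mapping (\<lambda>\<nu>. if Poly_Mapping.lookup \<nu> 0 = 0 \<and> Poly_Mapping.lookup \<nu> 1 = 0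
       then Poly_Mapping.lookup F (xexp u (i - u) + \<nu>) else 0)"

lemma lookup_xslice: "Poly_Mapping.lookup (xslice i u F) \<nu> =
   (if Poly_Mapping.lookup \<nu> 0 = 0 \<and> Poly_Mapping.lookup \<nu> 1 = 0 then Poly_Mapping.lookup F (xexp u (i - u) + \<nu>) else 0)"
proof -
  have "finite ((\<lambda>\<nu>. xexp u (i - u) + \<nu>) -` Poly_Mapping.keys F)"
    by (rule finite_vimageI) (auto simp: inj_on_def)
  then have "finite {\<nu>. (if Poly_Mapping.lookup \<nu> 0 = 0 \<and> Poly_Mapping.lookup \<nu> 1 = 0
      then Poly_Mapping.lookup F (xexp u (i - u) + \<nu>) else 0) \<noteq> 0}"
    by (rule finite_subset[rotated]) (auto simp: in_keys_iff)
  then show ?thesis by (simp add: xslice_def)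
qed

definition xfree :: "'k::comm_ring_1 mpol \<Rightarrow> bool" where
  "xfree G \<longleftrightarrow> (\<forall>\<nu>\<in>Poly_Mapping.keys G. Poly_Mapping.lookup \<nu> 0 = 0 \<and> Poly_Mapping.lookup \<nu> 1 = 0)"

lemma bihom0_xfree: "G \<in> bihom 0 j \<Longrightarrow> xfree G"
  by (auto simp: xfree_def bihom_def)

lemma xslice_bihom:
  assumes "F \<in> bihom i j"
  shows "xslice i u F \<in> bihom 0 j"
  unfolding bihom_def
proof (intro CollectI ballI conjI)
  fix \<nu> assume \<nu>: "\<nu> \<in> Poly_Mapping.keys (xslice i u F)"
  then have z: "Poly_Mapping.lookup \<nu> 0 = 0" "Poly_Mapping.lookup \<nu> 1 = 0"
    and k: "xexp u (i - u) + \<nu> \<in> Poly_Mapping.keys F"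
    by (auto simp: in_keys_iff lookup_xslice split: if_splits)
  have kk: "Poly_Mapping.keys (xexp u (i - u) + \<nu>) \<subseteq> {0,1,2,3}"
    and d: "Poly_Mapping.lookup (xexp u (i - u) + \<nu>) 2 + Poly_Mapping.lookup (xexp u (i - u) + \<nu>) 3
        = j"
    using assms k by (auto simp: bihom_def)
  have "Poly_Mapping.keys \<nu> \<subseteq> Poly_Mapping.keys (xexp u (i - u) + \<nu>)"
    by (auto simp: in_keys_iff lookup_add)
  then show "Poly_Mapping.keys \<nu> \<subseteq> {0,1,2,3}" using kk by blast
  show "Poly_Mapping.lookup \<nu> 0 + Poly_Mapping.lookup \<nu> 1 = 0" using z by simp
  show "Poly_Mapping.lookup \<nu> 2 + Poly_Mapping.lookup \<nu> 3 = j"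
    using d by (simp add: lookup_add lookup_xexp)
qed

lemma xslice_term:
  assumes "u \<le> i"
  shows "Poly_Mapping.lookup (xmon u (i - u) * xslice i u F) \<nu> =
    (if Poly_Mapping.lookup \<nu> 0 = u \<and> Poly_Mapping.lookup \<nu> 1 = i - u then Poly_Mapping.lookup F \<nu> else 0)"
proof (cases "u \<le> Poly_Mapping.lookup \<nu> 0 \<and> i - u \<le> Poly_Mapping.lookup \<nu> 1")
  case True
  have e: "xexp u (i - u) + (\<nu> - xexp u (i - u)) = \<nu>"
    by (rule poly_mapping_eqI) (use True in \<open>simp add: lookup_add lookup_minus lookup_xexp\<close>)
  show ?thesis
    using True by (auto simp add: lookup_xmon_mult lookup_xslice lookup_minus lookup_xexp e)
next
  case False
  then show ?thesis by (auto simp: lookup_xmon_mult)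
qed

lemma xslice_decomp:
  assumes F: "F \<in> bihom i j"
  shows "F = (\<Sum>u\<le>i. xmon u (i - u) * xslice i u F)"
proof (rule poly_mapping_eqI)
  fix \<nu>
  have "Poly_Mapping.lookup (\<Sum>u\<le>i. xmon u (i - u) * xslice i u F) \<nu> =
      (\<Sum>u\<le>i. if Poly_Mapping.lookup \<nu> 0 = u \<and> Poly_Mapping.lookup \<nu> 1 = i - u then Poly_Mapping.lookup F \<nu> else 0)"
    by (simp add: lookup_sum xslice_term)
  also have "\<dots> = (\<Sum>u\<le>i. if u = Poly_Mapping.lookup \<nu> 0 then (if Poly_Mapping.lookup \<nu> 0
      + Poly_Mapping.lookup \<nu> 1 = i then Poly_Mapping.lookup F \<nu> else 0) else 0)"
    by (rule sum.cong) auto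
  also have "\<dots> = (if Poly_Mapping.lookup \<nu> 0 \<le> i then (if Poly_Mapping.lookup \<nu> 0
      + Poly_Mapping.lookup \<nu> 1 = i then Poly_Mapping.lookup F \<nu> else 0) else 0)"
    by (simp add: sum.delta')
  also have "\<dots> = Poly_Mapping.lookup F \<nu>"
    using F by (auto simp: bihom_def in_keys_iff)
  finally show "Poly_Mapping.lookup F \<nu>
      = Poly_Mapping.lookup (\<Sum>u\<le>i. xmon u (i - u) * xslice i u F) \<nu>" by simp
qed

lemma xslice_add: "xslice i u (F + G) = xslice i u F + xslice i u G"
  by (rule poly_mapping_eqI) (simp add: lookup_xslice lookup_add)

lemma xslice_0[simp]: "xslice i u 0 = 0"
  by (rule poly_mapping_eqI) (simp add: lookup_xslice)

lemma xslice_sum: "xslice i u (\<Sum>x\<in>A. f x) = (\<Sum>x\<in>A. xslice i u (f x))"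
  by (induction A rule: infinite_finite_induct) (auto simp: xslice_add)

lemma xslice_xmon:
  assumes G: "xfree G" and u: "u \<le> i" and u': "u' \<le> i"
  shows "xslice i u (xmon u' (i - u') * G) = (if u = u' then G else 0)"
proof (rule poly_mapping_eqI)
  fix \<nu>
  show "Poly_Mapping.lookup (xslice i u (xmon u' (i - u') * G)) \<nu>
      = Poly_Mapping.lookup (if u = u' then G else 0) \<nu>"
  proof (cases "Poly_Mapping.lookup \<nu> 0 = 0 \<and> Poly_Mapping.lookup \<nu> 1 = 0")
    case True
    have l0: "Poly_Mapping.lookup (xexp u (i - u) + \<nu>) 0
        = u" and l1: "Poly_Mapping.lookup (xexp u (i - u) + \<nu>) 1 = i - u"
      using True by (simp_all add: lookup_add lookup_xexp)
    show ?thesis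
    proof (cases "u = u'")
      case True
      have d: "(xexp u (i - u) + \<nu>) - xexp u (i - u) = \<nu>" by simp
      show ?thesis using \<open>Poly_Mapping.lookup \<nu> 0 = 0 \<and> Poly_Mapping.lookup \<nu> 1 = 0\<close>
        unfolding lookup_xslice lookup_xmon_mult True[symmetric] l0 l1 d by simp
    next
      case False
      then have "\<not> (u' \<le> u \<and> i - u' \<le> i - u)" using u u' by auto
      then have nc: "\<not> (u' \<le> Poly_Mapping.lookup (xexp u (i - u)
          + \<nu>) 0 \<and> i - u' \<le> Poly_Mapping.lookup (xexp u (i - u) + \<nu>) 1)"
        unfolding l0 l1 .
      show ?thesis using \<open>Poly_Mapping.lookup \<nu> 0 = 0 \<and> Poly_Mapping.lookup \<nu> 1 = 0\<close> False
        unfolding lookup_xslice lookup_xmon_mult if_not_P[OF nc] by simp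
    qed
  next
    case False
    have "Poly_Mapping.lookup G \<nu> = 0"
    proof (rule ccontr)
      assume "Poly_Mapping.lookup G \<nu> \<noteq> 0"
      then have "\<nu> \<in> Poly_Mapping.keys G" by (simp add: in_keys_iff)
      then show False using G False unfolding xfree_def by blast
    qed
    then show ?thesis unfolding lookup_xslice if_not_P[OF False] by simp
  qed
qed

lemma xslice_unique:
  assumes G: "\<And>u. u \<le> i \<Longrightarrow> xfree (G u)" and u: "u \<le> i"
  shows "xslice i u (\<Sum>u'\<le>i. xmon u' (i - u') * G u') = G u"
proof -
  have "xslice i u (\<Sum>u'\<le>i. xmon u' (i - u') * G u') = (\<Sum>u'\<le>i. if u = u' then G u' else 0)"
    unfolding xslice_sum by (rule sum.cong) (auto simp: xslice_xmon[OF G u])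
  also have "\<dots> = G u" using u by (simp add: sum.delta)
  finally show ?thesis .
qed

lemma poly_subst_xmon_y: "poly_subst (lf_to_var 2 3 b) (xmon u w) = (xmon u w :: 'k::field mpol)"
  by (simp add: xmon_eq poly_subst_mult poly_subst_power lf_to_var_def)

lemma xslice_poly_subst_y:
  fixes F :: "'k::field mpol"
  assumes F: "F \<in> bihom i j" and u: "u \<le> i"
  shows "xslice i u (poly_subst (lf_to_var 2 3 b) F) = poly_subst (lf_to_var 2 3 b) (xslice i u F)"
proof -
  have "poly_subst (lf_to_var 2 3 b) F
      = (\<Sum>u'\<le>i. xmon u' (i - u') * poly_subst (lf_to_var 2 3 b) (xslice i u' F))"
    by (subst xslice_decomp[OF F]) (simp add: poly_subst_sum poly_subst_mult poly_subst_xmon_y)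
  then show ?thesis
    using xslice_unique[of i "\<lambda>u'. poly_subst (lf_to_var 2 3 b) (xslice i u' F)" u] u
      bihom0_xfree[OF poly_subst_lf_to_var_bihom[OF var_pair23 xslice_bihom[OF F]]] by simp
qed

section \<open>The ideal of a row of fat points\<close>

lemma lin1_01[simp]: "lin1 (0,1) = (var 0 :: 'k::field mpol)" by (simp add: lin1_def)
lemma lin2_01[simp]: "lin2 (0,1) = (var 2 :: 'k::field mpol)" by (simp add: lin2_def)

lemma pt_ideal_pow_std_keys:
  fixes F :: "'k::field mpol"
  assumes "F \<in> pt_ideal_pow ((0,1),(0,1)) \<mu>"
  shows "\<forall>\<nu>\<in>Poly_Mapping.keys F. \<mu> \<le> Poly_Mapping.lookup \<nu> 0 + Poly_Mapping.lookup \<nu> 2"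
proof -
  obtain g where g: "F = (\<Sum>k\<le>\<mu>. g k * var 0 ^ k * var 2 ^ (\<mu> - k))"
    using assms by (auto simp: pt_ideal_pow_def)
  let ?K = "{\<nu>. \<mu> \<le> Poly_Mapping.lookup \<nu> 0 + Poly_Mapping.lookup \<nu> 2}"
  have "F \<in> keyspace ?K" unfolding g
  proof (rule kv.subspace_sum[OF subspace_keyspace])
    fix k assume k: "k \<in> {..\<mu>}"
    have m: "var 0 ^ k * var 2 ^ (\<mu> - k)
        = (Poly_Mapping.single (Poly_Mapping.single 0 k + Poly_Mapping.single 2 (\<mu> - k)) 1 :: 'k mpol)"
      by (simp add: var_power mult_single)
    have "g k * Poly_Mapping.single (Poly_Mapping.single 0 k + Poly_Mapping.single 2 (\<mu> - k)) 1
        \<in> keyspace ?K"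
      by (rule keyspace_mult[of _ UNIV _ "{Poly_Mapping.single 0 k + Poly_Mapping.single 2 (\<mu> - k)}"])
         (use k in \<open>auto simp: keyspace_def lookup_add lookup_single\<close>)
    then show "g k * var 0 ^ k * var 2 ^ (\<mu> - k) \<in> keyspace ?K" using m by (simp add: mult.assoc)
  qed
  then show ?thesis by (auto simp: keyspace_def)
qed

lemma lf_to_var_y_var0: "lf_to_var 2 3 b 0 = var 0" and lf_to_var_y_var1: "lf_to_var 2 3 b 1
    = var 1"
  by (simp_all add: lf_to_var_def)

lemma pt_ideal_pow_transport_y:
  fixes b :: "'k::field \<times> 'k"
  assumes b: "b \<noteq> (0,0)" and F: "F \<in> pt_ideal_pow ((0,1), b) \<mu>"
  shows "poly_subst (lf_to_var 2 3 b) F \<in> pt_ideal_pow ((0,1),(0,1)) \<mu>"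
proof -
  obtain g where g: "\<forall>k\<le>\<mu>. g k \<in> ringR" "F = (\<Sum>k\<le>\<mu>. g k * var 0 ^ k * lin2 b ^ (\<mu> - k))"
    using F by (auto simp: pt_ideal_pow_def)
  have "poly_subst (lf_to_var 2 3 b) F
      = (\<Sum>k\<le>\<mu>. poly_subst (lf_to_var 2 3 b) (g k) * var 0 ^ k * var 2 ^ (\<mu> - k))"
    unfolding g(2) by (simp add: poly_subst_sum poly_subst_mult poly_subst_power lf_to_var_y_var0 lin2_linform lf_to_var_linform[OF _ b])
  moreover have "\<forall>k\<le>\<mu>. poly_subst (lf_to_var 2 3 b) (g k) \<in> ringR"
    using g(1) poly_subst_lf_to_var_ringR[OF var_pair23] by blast
  ultimately show ?thesis unfolding pt_ideal_pow_def by auto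
qed

lemma var_pow_div:
  fixes F :: "'k::field mpol"
  shows "F \<in> ringR \<Longrightarrow> \<forall>\<nu>\<in>Poly_Mapping.keys F. e \<le> Poly_Mapping.lookup \<nu> p \<Longrightarrow> \<exists>H\<in>ringR. F
      = var p ^ e * H"
proof (induction e arbitrary: F)
  case 0
  then show ?case by auto
next
  case (Suc e)
  have F: "F = var p * var_quot p F" by (rule eq_var_mult_var_quot) (use Suc.prems(2) in auto)
  have "\<forall>\<nu>\<in>Poly_Mapping.keys (var_quot p F). e \<le> Poly_Mapping.lookup \<nu> p"
  proof
    fix \<nu> assume "\<nu> \<in> Poly_Mapping.keys (var_quot p F)"
    then have "Poly_Mapping.single p 1 + \<nu> \<in> Poly_Mapping.keys F"
      by (simp add: in_keys_iff lookup_var_quot)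
    then have "Suc e \<le> Poly_Mapping.lookup (Poly_Mapping.single p 1 + \<nu>) p"
      using Suc.prems(2) by blast
    then show "e \<le> Poly_Mapping.lookup \<nu> p" by (simp add: lookup_add)
  qed
  then obtain H where "H \<in> ringR" "var_quot p F = var p ^ e * H"
    using Suc.IH[OF var_quot_ringR[OF Suc.prems(1)]] by blast
  then show ?case using F by (intro bexI[of _ H]) (auto simp: mult.assoc)
qed

lemma xslice_in_multiples:
  fixes F :: "'k::field mpol"
  assumes b: "b \<noteq> (0,0)" and F: "F \<in> bihom i j" "F \<in> pt_ideal_pow ((0,1), b) \<mu>"
    and u: "u \<le> i" "u < \<mu>"
  shows "xslice i u F \<in> multiples (linform 2 3 b ^ (\<mu> - u)) 0 j"
proof -
  let ?t = "poly_subst (lf_to_var 2 3 b)" and ?ti = "poly_subst (var_to_lf 2 3 b)"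
  have G: "?t F \<in> pt_ideal_pow ((0,1),(0,1)) \<mu>" by (rule pt_ideal_pow_transport_y[OF b F(2)])
  have kG: "\<forall>\<nu>\<in>Poly_Mapping.keys (?t F). \<mu> \<le> Poly_Mapping.lookup \<nu> 0 + Poly_Mapping.lookup \<nu> 2"
    by (rule pt_ideal_pow_std_keys[OF G])
  have sl: "xslice i u (?t F) = ?t (xslice i u F)" by (rule xslice_poly_subst_y[OF F(1) u(1)])
  have ks: "\<forall>\<nu>\<in>Poly_Mapping.keys (xslice i u (?t F)). \<mu> - u \<le> Poly_Mapping.lookup \<nu> 2"
  proof
    fix \<nu> assume \<nu>: "\<nu> \<in> Poly_Mapping.keys (xslice i u (?t F))"
    then have z: "Poly_Mapping.lookup \<nu> 0 = 0" and k: "xexp u (i - u) + \<nu>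
        \<in> Poly_Mapping.keys (?t F)"
      by (auto simp: in_keys_iff lookup_xslice split: if_splits)
    have "\<mu> \<le> Poly_Mapping.lookup (xexp u (i - u) + \<nu>) 0 + Poly_Mapping.lookup (xexp u (i - u) + \<nu>) 2"
      using kG k by blast
    then show "\<mu> - u \<le> Poly_Mapping.lookup \<nu> 2" using z by (simp add: lookup_add lookup_xexp)
  qed
  have sR: "xslice i u (?t F) \<in> ringR"
    using xslice_bihom[OF poly_subst_lf_to_var_bihom[OF var_pair23 F(1)]] bihom_ringR by blast
  obtain H where H: "H \<in> ringR" "xslice i u (?t F) = var 2 ^ (\<mu> - u) * H"
    using var_pow_div[OF sR ks] by blast
  have pq: "(2::nat) \<noteq> 3" by simp
  have "xslice i u F = ?ti (?t (xslice i u F))" using var_to_lf_lf_to_var[OF pq b] by simp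
  also have "\<dots> = ?ti (var 2 ^ (\<mu> - u) * H)" using sl H(2) by simp
  also have "\<dots> = linform 2 3 b ^ (\<mu> - u) * ?ti H"
    by (simp add: poly_subst_mult poly_subst_power var_to_lf_def)
  finally have eq: "xslice i u F = linform 2 3 b ^ (\<mu> - u) * ?ti H" .
  have tH: "?ti H \<in> ringR" by (rule poly_subst_var_to_lf_ringR[OF var_pair23 H(1)])
  have sb: "xslice i u F \<in> bihom 0 j" by (rule xslice_bihom[OF F(1)])
  show ?thesis unfolding multiples_def using sb eq tH by blast
qed

lemma pt_ideal_pow_if_xslices:
  fixes F :: "'k::field mpol" and b :: "'k \<times> 'k"
  assumes F: "F \<in> bihom i j"
    and sl: "\<And>u. u \<le> i \<Longrightarrow> u < \<mu> \<Longrightarrow> xslice i u F \<in> multiples (linform 2 3 b ^ (\<mu> - u)) 0 j"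
  shows "F \<in> pt_ideal_pow ((0,1), b) \<mu>"
proof -
  have trm: "xmon u (i - u) * xslice i u F \<in> pt_ideal_pow ((0,1), b) \<mu>" if u: "u \<le> i" for u
  proof -
    have sR: "xslice i u F \<in> ringR" using xslice_bihom[OF F] bihom_ringR by blast
    show ?thesis
    proof (cases "u < \<mu>")
      case True
      then obtain H where H: "H \<in> ringR" "xslice i u F = linform 2 3 b ^ (\<mu> - u) * H"
        using sl[of u] u by (auto simp: multiples_def)
      have e: "xmon u (i - u) * xslice i u F
          = lin1 (fst (((0::'k),(1::'k)), b)) ^ u * lin2 (snd (((0::'k),(1::'k)), b)) ^ (\<mu> - u) * (var 1 ^ (i - u) * H)"
        by (simp add: xmon_eq H(2) lin2_linform algebra_simps)
      have m: "lin1 (fst (((0::'k),(1::'k)), b)) ^ u * lin2 (snd (((0::'k),(1::'k)), b)) ^ (\<mu> - u)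
          * (var 1 ^ (i - u) * H) \<in> pt_ideal_pow ((0,1), b) \<mu>"
      proof (rule pt_ideal_pow_lin_pow_mult)
        show "var 1 ^ (i - u) * H \<in> ringR" by (intro ringR_mult ringR_power var_ringR H(1)) simp
      qed simp
      show ?thesis by (subst e) (rule m)
    next
      case False
      have e: "xmon u (i - u) * xslice i u F
          = lin1 (fst (((0::'k),(1::'k)), b)) ^ u * lin2 (snd (((0::'k),(1::'k)), b)) ^ 0 * (var 1 ^ (i - u) * xslice i u F)"
        by (simp add: xmon_eq algebra_simps)
      have m: "lin1 (fst (((0::'k),(1::'k)), b)) ^ u * lin2 (snd (((0::'k),(1::'k)), b)) ^ 0
          * (var 1 ^ (i - u) * xslice i u F) \<in> pt_ideal_pow ((0,1), b) \<mu>"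
      proof (rule pt_ideal_pow_lin_pow_mult)
        show "var 1 ^ (i - u) * xslice i u F \<in> ringR"
          by (intro ringR_mult ringR_power var_ringR sR) simp
      qed (use False in simp)
      show ?thesis by (subst e) (rule m)
    qed
  qed
  have "(\<Sum>u\<le>i. xmon u (i - u) * xslice i u F) \<in> pt_ideal_pow ((0,1), b) \<mu>"
    by (rule pt_ideal_pow_sum) (use trm in auto)
  then show ?thesis using xslice_decomp[OF F] by simp
qed

lemma span_Un_span: "kv.span (A \<union> kv.span B) = kv.span (A \<union> (B :: 'k::field mpol set))"
proof
  show "kv.span (A \<union> kv.span B) \<subseteq> kv.span (A \<union> B)"
    by (rule kv.span_minimal) (use kv.span_mono[of A "A \<union> B"] kv.span_mono[of B "A \<union> B"] kv.span_superset[of A] in auto)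
  show "kv.span (A \<union> B) \<subseteq> kv.span (A \<union> kv.span B)"
    by (rule kv.span_mono) (use kv.span_superset[of B] in auto)
qed

lemma keyspace_Int_disjoint:
  assumes "A \<inter> B = {}"
  shows "keyspace A \<inter> keyspace B = {0}"
proof (intro equalityI subsetI)
  fix F assume "F \<in> keyspace A \<inter> keyspace B"
  then have "Poly_Mapping.keys F = {}" using assms unfolding keyspace_def by blast
  then show "F \<in> {0}" by simp
qed (auto simp: keyspace_def)

lemma dim_span_UN_x0_degree:
  fixes W :: "nat \<Rightarrow> 'k::field mpol set"
  assumes V: "kv.subspace V" "kv.fin_dim V"
  shows "finite U \<Longrightarrow> (\<And>u. u \<in> U \<Longrightarrow>
      kv.subspace (W u) \<and> W u \<subseteq> V \<and> W u \<subseteq> keyspace {\<nu>. Poly_Mapping.lookup \<nu> 0 = u})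
    \<Longrightarrow> kv.dim (kv.span (\<Union>u\<in>U. W u)) = (\<Sum>u\<in>U. kv.dim (W u))"
proof (induction U rule: finite_induct)
  case empty
  then show ?case by (simp add: kv.dim_zero_space)
next
  case (insert u U)
  let ?S = "kv.span (\<Union>u\<in>U. W u)"
  have Wu: "kv.subspace (W u)" "W u \<subseteq> V" "W u \<subseteq> keyspace {\<nu>. Poly_Mapping.lookup \<nu> 0 = u}"
    using insert.prems by auto
  have SV: "?S \<subseteq> V" by (rule kv.span_minimal[OF _ V(1)]) (use insert.prems in blast)
  have SU: "?S \<subseteq> keyspace {\<nu>. Poly_Mapping.lookup \<nu> 0 \<in> U}"
    by (rule kv.span_minimal[OF _ subspace_keyspace]) (use insert.prems in \<open>fastforce simp: keyspace_def\<close>)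
  have "{\<nu>. Poly_Mapping.lookup \<nu> 0 = u} \<inter> {\<nu>. Poly_Mapping.lookup \<nu> 0 \<in> U} = {}"
    using insert.hyps(2) by auto
  from keyspace_Int_disjoint[OF this] have "W u \<inter> ?S \<subseteq> {0}"
    using Wu(3) SU by blast
  moreover have "0 \<in> W u \<inter> ?S" using kv.subspace_0[OF Wu(1)] kv.span_zero by simp
  ultimately have "W u \<inter> ?S = {0}" by blast
  then have "kv.dim (kv.span (W u \<union> ?S)) = kv.dim (W u) + kv.dim ?S"
    using kv.dim_span_Un_plus_dim_Int[OF Wu(1) kv.fin_dim_subset[OF V(2) Wu(2)] kv.subspace_span
        kv.fin_dim_subset[OF V(2) SV]]
    by (simp add: kv.dim_zero_space)
  moreover have "kv.span (W u \<union> ?S) = kv.span (\<Union>u\<in>insert u U. W u)"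
    using span_Un_span[of "W u" "\<Union>u\<in>U. W u"] by (simp add: Un_commute)
  ultimately show ?case using insert.IH insert.prems insert.hyps by simp
qed

text \<open>A row of fat points on the line \<open>x0 = 0\<close>, given by the points \<open>b c\<close> of the second factor
  with multiplicities \<open>m c\<close>.\<close>

definition row_ideal_std :: "nat \<Rightarrow> nat \<Rightarrow> 'c set \<Rightarrow> ('c \<Rightarrow> 'k::field \<times> 'k) \<Rightarrow> ('c \<Rightarrow> nat) \<Rightarrow> 'k mpol set" where
  "row_ideal_std i j C b m = {F \<in> bihom i j. \<forall>c\<in>C. F \<in> pt_ideal_pow ((0,1), b c) (m c)}"

definition slice_space :: "nat \<Rightarrow> 'c set \<Rightarrow> ('c \<Rightarrow> 'k::field \<times> 'k) \<Rightarrow> ('c \<Rightarrow> nat) \<Rightarrow> nat \<Rightarrow> 'k mpol set" where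
  "slice_space j C b m u = multiples (lf_prod 2 3 C b (\<lambda>c. m c - u)) 0 j"

lemma multiples_one: "multiples 1 p q = (bihom p q :: 'k::field mpol set)"
  unfolding multiples_def using bihom_ringR by fastforce

lemma row_ideal_std_char:
  fixes b :: "'c \<Rightarrow> 'k::field \<times> 'k"
  assumes fin: "finite C" and np: "nonproportional C b" and F: "F \<in> bihom i j"
  shows "F \<in> row_ideal_std i j C b m \<longleftrightarrow> (\<forall>u\<le>i. xslice i u F \<in> slice_space j C b m u)"
proof
  assume R: "F \<in> row_ideal_std i j C b m"
  show "\<forall>u\<le>i. xslice i u F \<in> slice_space j C b m u"
  proof (intro allI impI)
    fix u assume u: "u \<le> i"
    have "xslice i u F \<in> multiples (linform 2 3 (b c) ^ (m c - u)) 0 j" if c: "c \<in> C" for c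
    proof (cases "u < m c")
      case True
      have bc: "b c \<noteq> (0,0)" using np c by (auto simp: nonproportional_def)
      have "F \<in> pt_ideal_pow ((0,1), b c) (m c)" using R c by (auto simp: row_ideal_std_def)
      then show ?thesis by (rule xslice_in_multiples[OF bc F _ u True])
    next
      case False
      then have "m c - u = 0" by simp
      then show ?thesis using xslice_bihom[OF F] by (simp add: multiples_one)
    qed
    then show "xslice i u F \<in> slice_space j C b m u"
      unfolding slice_space_def
        using multiples_lf_prod[OF var_pair23 fin np] xslice_bihom[OF F] by blast
  qed
next
  assume S: "\<forall>u\<le>i. xslice i u F \<in> slice_space j C b m u"
  have "F \<in> pt_ideal_pow ((0,1), b c) (m c)" if c: "c \<in> C" for c
  proof (rule pt_ideal_pow_if_xslices[OF F])
    fix u assume u: "u \<le> i" "u < m c"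
    have "xslice i u F \<in> multiples (lf_prod 2 3 C b (\<lambda>c. m c - u)) 0 j"
      using S u by (simp add: slice_space_def)
    then show "xslice i u F \<in> multiples (linform 2 3 (b c) ^ (m c - u)) 0 j"
      using multiples_lf_prod[OF var_pair23 fin np, of "\<lambda>c. m c - u" 0 j] c by blast
  qed
  then show "F \<in> row_ideal_std i j C b m" using F by (auto simp: row_ideal_std_def)
qed

lemma subspace_row_ideal_std: "kv.subspace (row_ideal_std i j C b m)"
proof -
  have "row_ideal_std i j C b m = bihom i j \<inter> (\<Inter>c\<in>C. pt_ideal_pow ((0,1), b c) (m c))"
    by (auto simp: row_ideal_std_def)
  then show ?thesis
    by (simp add: kv.subspace_inter subspace_bihom kv.subspace_Int subspace_pt_ideal_pow)
qed

lemma xmon_nonzero: "xmon u w \<noteq> (0 :: 'k::field mpol)"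
  by (metis lookup_single_eq lookup_zero one_neq_zero xmon_def)

lemma xmon_bihom: "u \<le> i \<Longrightarrow> xmon u (i - u) \<in> (bihom i 0 :: 'k::field mpol set)"
  using bihom_mult[OF bihom_power[OF var_bihom(1), of u] bihom_power[OF var_bihom(2), of "i - u"]]
  by (simp add: xmon_eq)

definition row_summand :: "nat \<Rightarrow> nat \<Rightarrow> 'c set \<Rightarrow> ('c \<Rightarrow> 'k::field \<times> 'k) \<Rightarrow> ('c \<Rightarrow> nat) \<Rightarrow> nat \<Rightarrow>
    'k mpol set" where
  "row_summand i j C b m u = (\<lambda>G. xmon u (i - u) * G) ` slice_space j C b m u"

lemma subspace_slice_space: "kv.subspace (slice_space j C b m u)"
  unfolding slice_space_def by (rule subspace_multiples[OF lf_prod_ringR[OF var_pair23]])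

lemma slice_space_bihom: "slice_space j C b m u \<subseteq> bihom 0 j"
  unfolding slice_space_def by (rule multiples_subset)

lemma subspace_row_summand: "kv.subspace (row_summand i j C b m u)"
proof -
  interpret h: module_hom kscale kscale "\<lambda>G. xmon u (i - u) * G" by (rule linear_mult)
  show ?thesis unfolding row_summand_def by (rule h.subspace_image[OF subspace_slice_space])
qed

lemma row_summand_bihom: "u \<le> i \<Longrightarrow> row_summand i j C b m u \<subseteq> bihom i j"
  using bihom_mult[OF xmon_bihom] slice_space_bihom by (fastforce simp: row_summand_def)

lemma row_summand_x0_degree:
  "row_summand i j C b m u \<subseteq> keyspace {\<nu>. Poly_Mapping.lookup \<nu> 0 = u}"
proof (intro subsetI)
  fix F assume "F \<in> row_summand i j C b m u"
  then obtain G where G: "G \<in> bihom 0 j" "F = xmon u (i - u) * G"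
    using slice_space_bihom unfolding row_summand_def by blast
  show "F \<in> keyspace {\<nu>. Poly_Mapping.lookup \<nu> 0 = u}"
    unfolding keyspace_def
  proof (intro CollectI subsetI)
    fix \<nu> assume "\<nu> \<in> Poly_Mapping.keys F"
    then have le: "u \<le> Poly_Mapping.lookup \<nu> 0" and "\<nu> - xexp u (i - u) \<in> Poly_Mapping.keys G"
      using G(2) by (auto simp: in_keys_iff lookup_xmon_mult split: if_splits)
    then have "Poly_Mapping.lookup (\<nu> - xexp u (i - u)) 0 = 0"
      using bihom0_xfree[OF G(1)] by (auto simp: xfree_def)
    then show "Poly_Mapping.lookup \<nu> 0 = u" using le by (simp add: lookup_minus lookup_xexp)
  qed
qed

lemma dim_row_summand:
  assumes "finite C" "nonproportional C b"
  shows "kv.dim (row_summand i j C b m u) = j + 1 - (\<Sum>c\<in>C. m c - u)"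
proof -
  have "kv.dim (row_summand i j C b m u) = kv.dim (slice_space j C b m u)"
    unfolding row_summand_def
    by (rule dim_mult_image[OF xmon_nonzero subspace_slice_space
          kv.fin_dim_subset[OF fin_dim_bihom slice_space_bihom]])
  also have "\<dots> = (0 + 1) * (j + 1 - (\<Sum>c\<in>C. m c - u))"
    unfolding slice_space_def by (rule dim_multiples_lf_prod_y[OF assms])
  finally show ?thesis by simp
qed

lemma row_ideal_std_eq_span:
  fixes b :: "'c \<Rightarrow> 'k::field \<times> 'k"
  assumes fin: "finite C" and np: "nonproportional C b"
  shows "row_ideal_std i j C b m = kv.span (\<Union>u\<le>i. row_summand i j C b m u)"
proof
  show "row_ideal_std i j C b m \<subseteq> kv.span (\<Union>u\<le>i. row_summand i j C b m u)"
  proof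
    fix F assume R: "F \<in> row_ideal_std i j C b m"
    then have F: "F \<in> bihom i j" by (simp add: row_ideal_std_def)
    have "xmon u (i - u) * xslice i u F \<in> row_summand i j C b m u" if "u \<le> i" for u
      using row_ideal_std_char[OF fin np F] R that by (auto simp: row_summand_def)
    then have "(\<Sum>u\<le>i. xmon u (i - u) * xslice i u F) \<in> kv.span (\<Union>u\<le>i. row_summand i j C b m u)"
      by (intro kv.span_sum kv.span_base) blast
    then show "F \<in> kv.span (\<Union>u\<le>i. row_summand i j C b m u)" using xslice_decomp[OF F] by simp
  qed
  show "kv.span (\<Union>u\<le>i. row_summand i j C b m u) \<subseteq> row_ideal_std i j C b m"
  proof (rule kv.span_minimal[OF _ subspace_row_ideal_std], intro UN_least subsetI)
    fix u F assume u: "u \<in> {..i}" and F: "F \<in> row_summand i j C b m u"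
    then obtain G where G: "G \<in> slice_space j C b m u" "F = xmon u (i - u) * G"
      unfolding row_summand_def by blast
    have Gb: "G \<in> bihom 0 j" using G(1) slice_space_bihom by blast
    have "xslice i u' F = (if u' = u then G else 0)" if "u' \<le> i" for u'
      unfolding G(2) using xslice_xmon[OF bihom0_xfree[OF Gb] that, of u] u by simp
    then have "\<forall>u'\<le>i. xslice i u' F \<in> slice_space j C b m u'"
      using G(1) kv.subspace_0[OF subspace_slice_space] by auto
    moreover have "F \<in> bihom i j" using row_summand_bihom u F by blast
    ultimately show "F \<in> row_ideal_std i j C b m" using row_ideal_std_char[OF fin np] by blast
  qed
qed

text \<open>The slices of a form in the ideal of the row are independent of each other.\<close>

lemma dim_row_ideal_std:
  fixes b :: "'c \<Rightarrow> 'k::field \<times> 'k"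
  assumes "finite C" "nonproportional C b"
  shows "kv.dim (row_ideal_std i j C b m) = (\<Sum>u\<le>i. j + 1 - (\<Sum>c\<in>C. m c - u))"
proof -
  have "kv.dim (row_ideal_std i j C b m) = (\<Sum>u\<le>i. kv.dim (row_summand i j C b m u))"
    unfolding row_ideal_std_eq_span[OF assms]
    by (rule dim_span_UN_x0_degree[OF subspace_bihom[of i j] fin_dim_bihom[of i j]])
       (auto simp: subspace_row_summand row_summand_bihom row_summand_x0_degree)
  then show ?thesis using dim_row_summand[OF assms] by simp
qed
text \<open>A general row is moved to the line \<open>x0 = 0\<close> by the change of coordinates \<open>lf_to_var 0 1 a\<close>.\<close>

lemma pt_ideal_pow_transport_x:
  fixes a b :: "'k::field \<times> 'k"
  assumes a: "a \<noteq> (0,0)" and F: "F \<in> pt_ideal_pow (a, b) \<mu>"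
  shows "poly_subst (lf_to_var 0 1 a) F \<in> pt_ideal_pow ((0,1), b) \<mu>"
proof -
  obtain g where g: "\<forall>k\<le>\<mu>. g k \<in> ringR" "F = (\<Sum>k\<le>\<mu>. g k * lin1 a ^ k * lin2 b ^ (\<mu> - k))"
    using F by (auto simp: pt_ideal_pow_def)
  have l2: "poly_subst (lf_to_var 0 1 a) (lin2 b) = lin2 b"
    by (simp add: lin2_def poly_subst_diff poly_subst_mult lf_to_var_def)
  have l1: "poly_subst (lf_to_var 0 1 a) (lin1 a) = var 0"
    using lf_to_var_linform[OF _ a, of 0 1] by (simp add: lin1_linform)
  have "poly_subst (lf_to_var 0 1 a) F
      = (\<Sum>k\<le>\<mu>. poly_subst (lf_to_var 0 1 a) (g k) * lin1 (0,1) ^ k * lin2 b ^ (\<mu> - k))"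
    unfolding g(2) by (simp only: poly_subst_sum poly_subst_mult poly_subst_power l1 l2 lin1_01)
  moreover have "\<forall>k\<le>\<mu>. poly_subst (lf_to_var 0 1 a) (g k) \<in> ringR"
    using g(1) poly_subst_lf_to_var_ringR[OF var_pair01] by blast
  ultimately show ?thesis unfolding pt_ideal_pow_def by auto
qed

lemma pt_ideal_pow_transport_xi:
  fixes a b :: "'k::field \<times> 'k"
  assumes a: "a \<noteq> (0,0)" and F: "F \<in> pt_ideal_pow ((0,1), b) \<mu>"
  shows "poly_subst (var_to_lf 0 1 a) F \<in> pt_ideal_pow (a, b) \<mu>"
proof -
  obtain g where g: "\<forall>k\<le>\<mu>. g k \<in> ringR" "F = (\<Sum>k\<le>\<mu>. g k * var 0 ^ k * lin2 b ^ (\<mu> - k))"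
    using F by (auto simp: pt_ideal_pow_def)
  have l2: "poly_subst (var_to_lf 0 1 a) (lin2 b) = lin2 b"
    by (simp add: lin2_def poly_subst_diff poly_subst_mult var_to_lf_def)
  have l1: "poly_subst (var_to_lf 0 1 a) (var 0) = lin1 a" by (simp add: var_to_lf_def lin1_linform)
  have "poly_subst (var_to_lf 0 1 a) F
      = (\<Sum>k\<le>\<mu>. poly_subst (var_to_lf 0 1 a) (g k) * lin1 a ^ k * lin2 b ^ (\<mu> - k))"
    unfolding g(2) by (simp only: poly_subst_sum poly_subst_mult poly_subst_power l1 l2 lin1_01)
  moreover have "\<forall>k\<le>\<mu>. poly_subst (var_to_lf 0 1 a) (g k) \<in> ringR"
    using g(1) poly_subst_var_to_lf_ringR[OF var_pair01] by blast
  ultimately show ?thesis unfolding pt_ideal_pow_def by auto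
qed

definition row_ideal :: "'k::field \<times> 'k \<Rightarrow> nat \<Rightarrow> nat \<Rightarrow> 'c set \<Rightarrow> ('c \<Rightarrow> 'k \<times> 'k) \<Rightarrow> ('c \<Rightarrow> nat) \<Rightarrow> 'k mpol set" where
  "row_ideal a i j C b m = {F \<in> bihom i j. \<forall>c\<in>C. F \<in> pt_ideal_pow (a, b c) (m c)}"

lemma subspace_row_ideal: "kv.subspace (row_ideal a i j C b m)"
proof -
  have "row_ideal a i j C b m = bihom i j \<inter> (\<Inter>c\<in>C. pt_ideal_pow (a, b c) (m c))"
    by (auto simp: row_ideal_def)
  then show ?thesis
    by (simp add: kv.subspace_inter subspace_bihom kv.subspace_Int subspace_pt_ideal_pow)
qed

lemma row_ideal_subset: "row_ideal a i j C b m \<subseteq> bihom i j"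
  by (auto simp: row_ideal_def)

lemma row_ideal_image_lf_to_var:
  assumes a: "a \<noteq> (0,0)"
  shows "poly_subst (lf_to_var 0 1 a) ` row_ideal a i j C b m = row_ideal_std i j C b m"
proof (intro equalityI subsetI)
  fix G assume "G \<in> poly_subst (lf_to_var 0 1 a) ` row_ideal a i j C b m"
  then obtain F where F: "F \<in> row_ideal a i j C b m" "G = poly_subst (lf_to_var 0 1 a) F" by blast
  have "F \<in> bihom i j" using F(1) by (simp add: row_ideal_def)
  then have "G \<in> bihom i j" using F(2) poly_subst_lf_to_var_bihom[OF var_pair01] by blast
  moreover have "\<forall>c\<in>C. G \<in> pt_ideal_pow ((0,1), b c) (m c)"
    using F pt_ideal_pow_transport_x[OF a] by (auto simp: row_ideal_def)
  ultimately show "G \<in> row_ideal_std i j C b m" by (simp add: row_ideal_std_def)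
next
  fix G assume G: "G \<in> row_ideal_std i j C b m"
  let ?F = "poly_subst (var_to_lf 0 1 a) G"
  have "G \<in> bihom i j" using G by (simp add: row_ideal_std_def)
  then have "?F \<in> bihom i j" using poly_subst_var_to_lf_bihom[OF var_pair01] by blast
  moreover have "\<forall>c\<in>C. ?F \<in> pt_ideal_pow (a, b c) (m c)"
    using G pt_ideal_pow_transport_xi[OF a] by (auto simp: row_ideal_std_def)
  ultimately have "?F \<in> row_ideal a i j C b m" by (simp add: row_ideal_def)
  moreover have "G = poly_subst (lf_to_var 0 1 a) ?F" using lf_to_var_var_to_lf[OF _ a] by simp
  ultimately show "G \<in> poly_subst (lf_to_var 0 1 a) ` row_ideal a i j C b m" by blast
qed

lemma dim_row_ideal:
  fixes a :: "'k::field \<times> 'k" and b :: "'c \<Rightarrow> 'k \<times> 'k"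
  assumes a: "a \<noteq> (0,0)" and "finite C" "nonproportional C b"
  shows "kv.dim (row_ideal a i j C b m) = (\<Sum>u\<le>i. j + 1 - (\<Sum>c\<in>C. m c - u))"
proof -
  have "inj_on (poly_subst (lf_to_var 0 1 a)) (row_ideal a i j C b m)"
    by (rule inj_on_inverseI[where g = "poly_subst (var_to_lf 0 1 a)"])
       (use var_to_lf_lf_to_var[OF _ a] in simp)
  then have "kv.dim (poly_subst (lf_to_var 0 1 a) ` row_ideal a i j C b m)
      = kv.dim (row_ideal a i j C b m)"
    by (rule dim_inj_image[OF linear_poly_subst subspace_row_ideal
          kv.fin_dim_subset[OF fin_dim_bihom row_ideal_subset]])
  then have "kv.dim (row_ideal a i j C b m) = kv.dim (row_ideal_std i j C b m)"
    unfolding row_ideal_image_lf_to_var[OF a] ..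
  also have "\<dots> = (\<Sum>u\<le>i. j + 1 - (\<Sum>c\<in>C. m c - u))" by (rule dim_row_ideal_std[OF assms(2,3)])
  finally show ?thesis .
qed

lemma multiples_in_row_ideal:
  fixes a :: "'k::field \<times> 'k" and b :: "'c \<Rightarrow> 'k \<times> 'k"
  assumes "\<forall>c\<in>C. m c \<le> l"
  shows "multiples (linform 0 1 a ^ l) i j \<subseteq> row_ideal a i j C b m"
proof
  fix F assume "F \<in> multiples (linform 0 1 a ^ l) i j"
  then obtain H where H: "F \<in> bihom i j" "H \<in> ringR" "F = linform 0 1 a ^ l * H"
    by (auto simp: multiples_def)
  have "F \<in> pt_ideal_pow (a, b c) (m c)" if "c \<in> C" for c
  proof -
    have "lin1 (fst (a, b c)) ^ l * lin2 (snd (a, b c)) ^ 0 * H \<in> pt_ideal_pow (a, b c) (m c)"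
      by (rule pt_ideal_pow_lin_pow_mult) (use assms that H(2) in auto)
    then show ?thesis using H(3) by (simp add: lin1_linform)
  qed
  then show "F \<in> row_ideal a i j C b m" using H(1) by (simp add: row_ideal_def)
qed

section \<open>First differences and conjugate partitions\<close>

definition count_ge :: "nat list \<Rightarrow> nat \<Rightarrow> nat" where
  "count_ge al s = length (filter (\<lambda>x. s \<le> x) al)"

definition sum_min :: "nat list \<Rightarrow> nat \<Rightarrow> nat" where
  "sum_min al j = sum_list (map (\<lambda>x. min x (j + 1)) al)"

lemma foldr_max_ge: "x \<in> set al \<Longrightarrow> x \<le> foldr max al (0::nat)"
  by (induction al) auto

lemma sum_list_if_count: "sum_list (map (\<lambda>x. if P x then 1 else 0) al) = length (filter P al)"
  by (induction al) auto

lemma sum_min_0: "sum_min al 0 = count_ge al 1"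
proof -
  have "(\<lambda>x. min x (0 + 1)) = (\<lambda>x. if 1 \<le> x then 1 else (0::nat))" by (auto simp: fun_eq_iff)
  then show ?thesis by (simp add: sum_min_def count_ge_def sum_list_if_count)
qed

lemma sum_min_Suc: "sum_min al (Suc j) = sum_min al j + count_ge al (j + 2)"
proof -
  have "(\<lambda>x. min x (Suc j + 1)) = (\<lambda>x. min x (j + 1) + (if j + 2 \<le> x then 1 else 0))"
    by (auto simp: fun_eq_iff)
  then have "sum_min al (Suc j)
      = sum_list (map (\<lambda>x. min x (j + 1) + (if j + 2 \<le> x then 1 else 0)) al)"
    by (simp add: sum_min_def)
  also have "\<dots> = sum_min al j + sum_list (map (\<lambda>x. if j + 2 \<le> x then 1 else 0) al)"
    by (simp add: sum_min_def sum_list_addf)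
  finally show ?thesis by (simp add: sum_list_if_count count_ge_def)
qed

lemma length_Delta[simp]: "length (Delta p) = length p"
  by (simp add: Delta_def)

lemma nth_Delta: "j < length p \<Longrightarrow> Delta p ! j = p ! j - (0 # p) ! j"
  by (simp add: Delta_def)

lemma length_conjugate: "length (conjugate al) = foldr max al 0"
  by (simp add: conjugate_def)

lemma nth_conjugate: "j < foldr max al 0 \<Longrightarrow> conjugate al ! j = count_ge al (j + 1)"
  by (simp add: conjugate_def count_ge_def add.commute del: upt_Suc)

lemma count_ge_big: "foldr max al 0 < s \<Longrightarrow> count_ge al s = 0"
  unfolding count_ge_def
    using foldr_max_ge[of _ al] by (auto simp: filter_empty_conv) (meson le_trans not_le)

lemma Delta_sum_min_eq_conjugate:
  assumes "foldr max al 0 \<le> n"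
  shows "Delta (map (\<lambda>j. int (sum_min al j)) [0..<n]) = map int (pad0 (conjugate al) n)"
proof (rule nth_equalityI)
  show "length (Delta (map (\<lambda>j. int (sum_min al j)) [0..<n]))
      = length (map int (pad0 (conjugate al) n))"
    using assms by (simp add: pad0_def length_conjugate)
next
  fix j assume "j < length (Delta (map (\<lambda>j. int (sum_min al j)) [0..<n]))"
  then have j: "j < n" by simp
  have lhs: "Delta (map (\<lambda>j. int (sum_min al j)) [0..<n]) ! j = int (count_ge al (j + 1))"
  proof (cases j)
    case 0
    then show ?thesis using j by (simp add: nth_Delta sum_min_0)
  next
    case (Suc j')
    then have "Delta (map (\<lambda>j. int (sum_min al j)) [0..<n]) ! j
        = int (sum_min al (Suc j')) - int (sum_min al j')"
      using j by (simp add: nth_Delta)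
    then show ?thesis using Suc by (simp add: sum_min_Suc)
  qed
  have rhs: "map int (pad0 (conjugate al) n) ! j = int (count_ge al (j + 1))"
  proof (cases "j < foldr max al 0")
    case True
    then show ?thesis using j assms
      by (simp add: pad0_def nth_append length_conjugate nth_conjugate)
  next
    case False
    then have "count_ge al (j + 1) = 0" by (intro count_ge_big) simp
    then show ?thesis using j False assms
      by (simp add: pad0_def nth_append length_conjugate)
  qed
  show "Delta (map (\<lambda>j. int (sum_min al j)) [0..<n]) ! j = map int (pad0 (conjugate al) n) ! j"
    using lhs rhs by simp
qed

lemma proj_eq_refl: "proj_eq a a"
  by (simp add: proj_eq_def mult.commute)

lemma proj_eq_trans:
  fixes a a' c :: "'k::field \<times> 'k"
  assumes ca: "proj_eq c a" and a'a: "proj_eq a' a" and a: "a \<noteq> (0,0)"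
  shows "proj_eq c a'"
proof -
  obtain c0 c1 where c: "c = (c0, c1)" by (cases c)
  obtain a0 a1 where aa: "a = (a0, a1)" by (cases a)
  obtain b0 b1 where bb: "a' = (b0, b1)" by (cases a')
  have h1: "c0 * a1 = c1 * a0" using ca by (simp add: proj_eq_def c aa)
  have h2: "b0 * a1 = b1 * a0" using a'a by (simp add: proj_eq_def bb aa)
  define X where "X = c0 * b1 - c1 * b0"
  have "X * a1 = b1 * (c0 * a1) - c1 * (b0 * a1)" by (simp add: X_def algebra_simps)
  also have "\<dots> = b1 * (c1 * a0) - c1 * (b1 * a0)" using h1 h2 by simp
  also have "\<dots> = 0" by (simp add: algebra_simps)
  finally have x1: "X * a1 = 0" .
  have "X * a0 = c0 * (b1 * a0) - b0 * (c1 * a0)" by (simp add: X_def algebra_simps)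
  also have "\<dots> = c0 * (b0 * a1) - b0 * (c0 * a1)" using h1 h2 by simp
  also have "\<dots> = 0" by (simp add: algebra_simps)
  finally have x0: "X * a0 = 0" .
  have "X = 0" using x0 x1 a aa by auto
  then show ?thesis by (simp add: proj_eq_def X_def c bb)
qed

lemma proj_class_eq_iff:
  fixes a a' :: "'k::field \<times> 'k"
  assumes "a \<noteq> (0,0)" "a' \<noteq> (0,0)"
  shows "proj_class a = proj_class a' \<longleftrightarrow> proj_eq a a'"
proof
  assume "proj_class a = proj_class a'"
  moreover have "a \<in> proj_class a" using assms(1) proj_eq_refl by (simp add: proj_class_def)
  ultimately show "proj_eq a a'" by (simp add: proj_class_def)
next
  assume e: "proj_eq a a'"
  then have e': "proj_eq a' a" using proj_eq_sym by blast
  show "proj_class a = proj_class a'"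
    unfolding proj_class_def
      using proj_eq_trans[OF _ e' assms(1)] proj_eq_trans[OF _ e assms(2)] by blast
qed

definition pt1 :: "(('k \<times> 'k) \<times> ('k \<times> 'k)) \<times> nat \<Rightarrow> 'k \<times> 'k" where "pt1 e = fst (fst e)"
definition pt2 :: "(('k \<times> 'k) \<times> ('k \<times> 'k)) \<times> nat \<Rightarrow> 'k \<times> 'k" where "pt2 e = snd (fst e)"
definition pt_mult :: "(('k \<times> 'k) \<times> ('k \<times> 'k)) \<times> nat \<Rightarrow> nat" where "pt_mult e = snd e"

lemma fat_point_scheme_nonzero:
  assumes "fat_point_scheme Z" "e \<in> set Z"
  shows "pt1 e \<noteq> (0,0)" "pt2 e \<noteq> (0,0)" "1 \<le> pt_mult e"
  using assms by (auto simp: fat_point_scheme_def pt1_def pt2_def pt_mult_def)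

lemma fat_point_scheme_unique:
  assumes "fat_point_scheme Z" "e \<in> set Z" "e' \<in> set Z"
    "proj_eq (pt1 e) (pt1 e')" "proj_eq (pt2 e) (pt2 e')"
  shows "e = e'"
proof -
  obtain i where i: "i < length Z" "e = Z ! i" using assms(2) by (auto simp: in_set_conv_nth)
  obtain j where j: "j < length Z" "e' = Z ! j" using assms(3) by (auto simp: in_set_conv_nth)
  show ?thesis
  proof (cases "i = j")
    case True
    then show ?thesis using i j by simp
  next
    case False
    have "\<not> (proj_eq (fst (fst (Z!i))) (fst (fst (Z!j))) \<and> proj_eq (snd (fst (Z!i))) (snd (fst (Z!j))))"
      using assms(1) i j False unfolding fat_point_scheme_def by blast
    then show ?thesis using assms(4,5) i j by (simp add: pt1_def pt2_def)
  qed
qed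

lemma fat_point_scheme_distinct:
  assumes "fat_point_scheme Z"
  shows "distinct Z"
  unfolding distinct_conv_nth
proof (intro allI impI)
  fix i j assume ij: "i < length Z" "j < length Z" "i \<noteq> j"
  have A: "\<not> (proj_eq (fst (fst (Z!i))) (fst (fst (Z!j))) \<and> proj_eq (snd (fst (Z!i))) (snd (fst (Z!j))))"
    using assms ij unfolding fat_point_scheme_def by blast
  show "Z ! i \<noteq> Z ! j"
  proof
    assume eq: "Z ! i = Z ! j"
    have "proj_eq (fst (fst (Z!i))) (fst (fst (Z!j))) \<and> proj_eq (snd (fst (Z!i))) (snd (fst (Z!j)))"
      unfolding eq by (simp add: proj_eq_refl)
    then show False using A by blast
  qed
qed

text \<open>For the row \<open>r = R_i\<close> (a class of \<open>rows Z\<close>), \<open>row_len Z r\<close> and \<open>row_alpha Z r k\<close> are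
  the numbers \<open>l_i\<close> and \<open>a_(i,k)\<close> of the paper; \<open>row_rep Z r\<close> is a coordinate vector of \<open>R_i\<close>.\<close>

definition row_entries :: "'k::field fatpts \<Rightarrow> ('k \<times> 'k) set \<Rightarrow> ((('k \<times> 'k) \<times> ('k \<times> 'k)) \<times> nat) set" where
  "row_entries Z r = {e \<in> set Z. proj_class (pt1 e) = r}"

definition row_rep :: "'k::field fatpts \<Rightarrow> ('k \<times> 'k) set \<Rightarrow> 'k \<times> 'k" where
  "row_rep Z r = pt1 (SOME e. e \<in> row_entries Z r)"

definition row_len :: "'k::field fatpts \<Rightarrow> ('k \<times> 'k) set \<Rightarrow> nat" where
  "row_len Z r = Max (pt_mult ` row_entries Z r)"

definition row_alpha :: "'k::field fatpts \<Rightarrow> ('k \<times> 'k) set \<Rightarrow> nat \<Rightarrow> nat" where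
  "row_alpha Z r u = (\<Sum>e\<in>row_entries Z r. pt_mult e - u)"

lemma rows_eq: "rows Z = (\<lambda>e. proj_class (pt1 e)) ` set Z"
  unfolding rows_def by (rule image_cong[OF refl]) (simp add: pt1_def split: prod.splits)

lemma cols_eq: "cols Z = (\<lambda>e. proj_class (pt2 e)) ` set Z"
  unfolding cols_def by (rule image_cong[OF refl]) (simp add: pt2_def split: prod.splits)

lemma finite_rows: "finite (rows Z)" by (simp add: rows_eq)
lemma finite_cols: "finite (cols Z)" by (simp add: cols_eq)
lemma finite_row_entries: "finite (row_entries Z r)" by (simp add: row_entries_def)

lemma row_entries_nonempty: "r \<in> rows Z \<Longrightarrow> row_entries Z r \<noteq> {}"
  unfolding rows_eq row_entries_def by blast

lemma row_rep_in: "r \<in> rows Z \<Longrightarrow> \<exists>e\<in>row_entries Z r. pt1 e = row_rep Z r"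
  unfolding row_rep_def using row_entries_nonempty[of r Z] by (metis ex_in_conv someI_ex)

lemma row_rep_props:
  assumes Z: "fat_point_scheme Z" and r: "r \<in> rows Z"
  shows "row_rep Z r \<noteq> (0,0)" "proj_class (row_rep Z r) = r"
proof -
  obtain e where e: "e \<in> row_entries Z r" "pt1 e = row_rep Z r" using row_rep_in[OF r] by blast
  have "e \<in> set Z" using e by (simp add: row_entries_def)
  then show "row_rep Z r \<noteq> (0,0)" using e fat_point_scheme_nonzero(1)[OF Z] by metis
  show "proj_class (row_rep Z r) = r" using e by (simp add: row_entries_def)
qed

lemma row_entries_proj:
  assumes Z: "fat_point_scheme Z" and r: "r \<in> rows Z" and e: "e \<in> row_entries Z r"
  shows "proj_eq (pt1 e) (row_rep Z r)"
proof -
  have "proj_class (pt1 e) = proj_class (row_rep Z r)"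
    using e row_rep_props[OF Z r] by (auto simp: row_entries_def)
  then show ?thesis
    using proj_class_eq_iff[of "pt1 e" "row_rep Z r"] fat_point_scheme_nonzero[OF Z] row_rep_props[OF Z r] e
    by (auto simp: row_entries_def)
qed

lemma nonproportional_rows:
  assumes Z: "fat_point_scheme Z"
  shows "nonproportional (rows Z) (row_rep Z)"
  unfolding nonproportional_def
proof (intro conjI ballI impI)
  fix r assume "r \<in> rows Z" then show "row_rep Z r \<noteq> (0,0)" using row_rep_props[OF Z] by blast
next
  fix r r' assume r: "r \<in> rows Z" and r': "r' \<in> rows Z" and ne: "r \<noteq> r'"
  show "\<not> proj_eq (row_rep Z r) (row_rep Z r')"
    using proj_class_eq_iff[of "row_rep Z r" "row_rep Z r'"] row_rep_props[OF Z r] row_rep_props[OF Z r'] ne by auto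
qed

lemma nonproportional_row_entries:
  assumes Z: "fat_point_scheme Z" and r: "r \<in> rows Z"
  shows "nonproportional (row_entries Z r) pt2"
  unfolding nonproportional_def
proof (intro conjI ballI impI)
  fix e assume "e \<in> row_entries Z r" then have "e \<in> set Z" by (simp add: row_entries_def)
  then show "pt2 e \<noteq> (0,0)" using fat_point_scheme_nonzero(2)[OF Z] by metis
next
  fix e e' assume e: "e \<in> row_entries Z r" and e': "e' \<in> row_entries Z r" and ne: "e \<noteq> e'"
  have "proj_eq (pt1 e) (row_rep Z r)" "proj_eq (pt1 e') (row_rep Z r)"
    using row_entries_proj[OF Z r] e e' by auto
  then have "proj_eq (pt1 e) (pt1 e')"
    using proj_eq_trans[of "pt1 e" "row_rep Z r" "pt1 e'"] proj_eq_sym row_rep_props[OF Z r]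
      by blast
  moreover have "e \<in> set Z" "e' \<in> set Z" using e e' by (simp_all add: row_entries_def)
  ultimately show "\<not> proj_eq (pt2 e) (pt2 e')" using fat_point_scheme_unique[OF Z] ne by blast
qed

lemma pt_ideal_pow_row_rep:
  assumes Z: "fat_point_scheme Z" and r: "r \<in> rows Z" and e: "e \<in> row_entries Z r"
  shows "pt_ideal_pow (fst e) (snd e) = pt_ideal_pow (row_rep Z r, pt2 e) (pt_mult e)"
proof -
  have "fst e = (pt1 e, pt2 e)" by (simp add: pt1_def pt2_def)
  then have "pt_ideal_pow (fst e) (snd e) = pt_ideal_pow (pt1 e, pt2 e) (pt_mult e)"
    by (simp add: pt_mult_def)
  also have "\<dots> = pt_ideal_pow (row_rep Z r, pt2 e) (pt_mult e)"
    by (rule pt_ideal_pow_proj_eq)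
       (use row_rep_props[OF Z r] fat_point_scheme_nonzero[OF Z] e row_entries_proj[OF Z r e] in
        \<open>auto simp: row_entries_def\<close>)
  finally show ?thesis .
qed

lemma fat_ideal_bihom_eq_rows:
  assumes Z: "fat_point_scheme Z"
  shows "fat_ideal Z \<inter> bihom i j =
    bihom i j \<inter> (\<Inter>r\<in>rows Z. row_ideal (row_rep Z r) i j (row_entries Z r) pt2 pt_mult)"
proof -
  have "F \<in> fat_ideal Z \<longleftrightarrow> (\<forall>r\<in>rows Z. \<forall>e\<in>row_entries Z r. F \<in> pt_ideal_pow (fst e) (snd e))"
    if "F \<in> bihom i j" for F
    using that bihom_ringR by (auto simp: fat_ideal_def row_entries_def rows_eq)
  then show ?thesis
    using pt_ideal_pow_row_rep[OF Z] by (auto simp: row_ideal_def)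
qed

lemma codim_sum_min:
  fixes x :: "nat \<Rightarrow> nat"
  shows "(i + 1) * (j + 1) - (\<Sum>u\<le>i. j + 1 - x u) = (\<Sum>u\<le>i. min (x u) (j + 1))"
proof (induction i)
  case 0
  then show ?case by simp
next
  case (Suc i)
  have le: "(\<Sum>u\<le>i. j + 1 - x u) \<le> (i + 1) * (j + 1)"
  proof -
    have "(\<Sum>u\<le>i. j + 1 - x u) \<le> (\<Sum>u\<le>i. j + 1)" by (rule sum_mono) simp
    then show ?thesis by simp
  qed
  have "(Suc i + 1) * (j + 1) - (\<Sum>u\<le>Suc i. j + 1 - x u)
      = ((i + 1) * (j + 1) - (\<Sum>u\<le>i. j + 1 - x u)) + ((j + 1) - (j + 1 - x (Suc i)))"
    using le by simp
  also have "(j + 1) - (j + 1 - x (Suc i)) = min (x (Suc i)) (j + 1)" by simp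
  finally show ?case using Suc.IH by simp
qed

lemma hilb_eq_sum_rows:
  fixes Z :: "'k::field fatpts"
  assumes Z: "fat_point_scheme Z" and deg: "(\<Sum>r\<in>rows Z. row_len Z r) \<le> i + 1"
  shows "hilb Z i j = (\<Sum>r\<in>rows Z. \<Sum>u\<le>i. min (row_alpha Z r u) (j + 1))"
proof -
  let ?S = "\<lambda>r. row_ideal (row_rep Z r) i j (row_entries Z r) pt2 pt_mult"
  have S: "kv.subspace (?S r) \<and> ?S r \<subseteq> bihom i j
      \<and> multiples (linform 0 1 (row_rep Z r) ^ row_len Z r) i j \<subseteq> ?S r"
    if r: "r \<in> rows Z" for r
  proof (intro conjI)
    show "kv.subspace (?S r)" by (rule subspace_row_ideal)
    show "?S r \<subseteq> bihom i j" by (rule row_ideal_subset)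
    show "multiples (linform 0 1 (row_rep Z r) ^ row_len Z r) i j \<subseteq> ?S r"
      by (rule multiples_in_row_ideal) (auto simp: row_len_def finite_row_entries)
  qed
  have "hilb Z i j = kv.dim (bihom i j :: 'k mpol set) - kv.dim (bihom i j \<inter> (\<Inter>r\<in>rows Z. ?S r))"
    by (simp add: hilb_def kdim_eq fat_ideal_bihom_eq_rows[OF Z])
  also have "\<dots> = (\<Sum>r\<in>rows Z. kv.dim (bihom i j :: 'k mpol set) - kv.dim (?S r))"
    by (rule codim_Inter_rows[OF finite_rows nonproportional_rows[OF Z] deg S])
  also have "\<dots> = (\<Sum>r\<in>rows Z. \<Sum>u\<le>i. min (row_alpha Z r u) (j + 1))"
  proof (rule sum.cong[OF refl])
    fix r assume r: "r \<in> rows Z"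
    have "kv.dim (?S r) = (\<Sum>u\<le>i. j + 1 - row_alpha Z r u)"
      unfolding row_alpha_def
        by (rule dim_row_ideal[OF row_rep_props(1)[OF Z r] finite_row_entries nonproportional_row_entries[OF Z r]])
    then show "kv.dim (bihom i j :: 'k mpol set) - kv.dim (?S r)
        = (\<Sum>u\<le>i. min (row_alpha Z r u) (j + 1))"
      by (simp only: dim_bihom codim_sum_min)
  qed
  finally show ?thesis .
qed

definition cell :: "'k::field fatpts \<Rightarrow> ('k \<times> 'k) set \<Rightarrow> ('k \<times> 'k) set \<Rightarrow>
    ((('k \<times> 'k) \<times> ('k \<times> 'k)) \<times> nat) set" where
  "cell Z C D = {e \<in> row_entries Z C. proj_class (pt2 e) = D}"

lemma cell_unique:
  assumes Z: "fat_point_scheme Z" and "e \<in> cell Z C D" "e' \<in> cell Z C D"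
  shows "e = e'"
proof -
  have e: "e \<in> set Z" "e' \<in> set Z" "proj_class (pt1 e) = proj_class (pt1 e')"
    "proj_class (pt2 e) = proj_class (pt2 e')"
    using assms(2,3) by (auto simp: cell_def row_entries_def)
  show ?thesis
  proof (rule fat_point_scheme_unique[OF Z e(1,2)])
    show "proj_eq (pt1 e) (pt1 e')" "proj_eq (pt2 e) (pt2 e')"
      using proj_class_eq_iff fat_point_scheme_nonzero[OF Z] e by metis+
  qed
qed

lemma mult_eq_sum_cell:
  assumes Z: "fat_point_scheme Z"
  shows "mult Z C D = sum pt_mult (cell Z C D)"
proof -
  let ?P = "\<lambda>((a,b),m). proj_class a = C \<and> proj_class b = D"
  let ?Q = "\<lambda>e. proj_class (pt1 e) = C \<and> proj_class (pt2 e) = D"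
  have f: "filter ?P Z = filter ?Q Z"
    by (rule filter_cong[OF refl]) (simp add: pt1_def pt2_def split: prod.splits)
  have d: "distinct (filter ?Q Z)" using fat_point_scheme_distinct[OF Z] by simp
  have "mult Z C D = sum_list (map snd (filter ?Q Z))" by (simp add: mult_def f)
  also have "\<dots> = sum snd (set (filter ?Q Z))" by (rule sum_list_distinct_conv_sum_set[OF d])
  also have "\<dots> = sum pt_mult (cell Z C D)"
    by (auto simp: pt_mult_def[abs_def] cell_def row_entries_def intro: sum.cong)
  finally show ?thesis .
qed

lemma mult_minus_eq_sum_cell:
  assumes Z: "fat_point_scheme Z"
  shows "mult Z C D - k = (\<Sum>e\<in>cell Z C D. pt_mult e - k)"
proof (cases "cell Z C D = {}")
  case False
  then obtain e where "e \<in> cell Z C D" by blast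
  then have "cell Z C D = {e}" using cell_unique[OF Z] by blast
  then show ?thesis by (simp add: mult_eq_sum_cell[OF Z])
qed (simp add: mult_eq_sum_cell[OF Z])

lemma row_alpha_eq:
  assumes Z: "fat_point_scheme Z"
  shows "(\<Sum>D\<in>cols Z. mult Z C D - k) = row_alpha Z C k"
proof -
  have "(\<Sum>D\<in>cols Z. mult Z C D - k) = (\<Sum>D\<in>cols Z. \<Sum>e\<in>cell Z C D. pt_mult e - k)"
    by (simp add: mult_minus_eq_sum_cell[OF Z])
  also have "\<dots> = (\<Sum>e\<in>row_entries Z C. pt_mult e - k)"
    unfolding cell_def
    by (rule sum.group[OF finite_row_entries finite_cols]) (auto simp: cols_eq row_entries_def)
  finally show ?thesis by (simp add: row_alpha_def)
qed

lemma Max_mult_eq: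
  assumes Z: "fat_point_scheme Z" and C: "C \<in> rows Z"
  shows "Max (mult Z C ` cols Z) = row_len Z C"
proof (rule Max_eqI)
  show "finite (mult Z C ` cols Z)" by (simp add: finite_cols)
next
  fix y assume "y \<in> mult Z C ` cols Z"
  then obtain D where y: "y = mult Z C D" by blast
  show "y \<le> row_len Z C"
  proof (cases "cell Z C D = {}")
    case False
    then obtain e where e: "e \<in> cell Z C D" by blast
    then have "cell Z C D = {e}" using cell_unique[OF Z] by blast
    moreover have "pt_mult e \<le> row_len Z C"
      unfolding row_len_def using e finite_row_entries[of Z C] by (auto simp: cell_def)
    ultimately show ?thesis using y mult_eq_sum_cell[OF Z] by simp
  qed (simp add: y mult_eq_sum_cell[OF Z])
next
  have "row_len Z C \<in> pt_mult ` row_entries Z C"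
    unfolding row_len_def using finite_row_entries row_entries_nonempty[OF C] by (intro Max_in) auto
  then obtain e where e: "e \<in> row_entries Z C" "pt_mult e = row_len Z C" by force
  then have "e \<in> cell Z C (proj_class (pt2 e))" by (simp add: cell_def)
  then have "cell Z C (proj_class (pt2 e)) = {e}" using cell_unique[OF Z] by blast
  then have "mult Z C (proj_class (pt2 e)) = row_len Z C" using e mult_eq_sum_cell[OF Z] by simp
  moreover have "proj_class (pt2 e) \<in> cols Z" using e by (auto simp: cols_eq row_entries_def)
  ultimately show "row_len Z C \<in> mult Z C ` cols Z" by (metis image_eqI)
qed

lemma alphaZ_eq:
  assumes Z: "fat_point_scheme Z"
  shows "alphaZ Z = desc_list (\<Sum>C\<in>rows Z. mset (map (row_alpha Z C) [0..<row_len Z C]))"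
proof -
  have "(\<Sum>C\<in>rows Z. mset (map (\<lambda>k. \<Sum>D\<in>cols Z. mult Z C D - k) [0..<Max (mult Z C ` cols Z)]))
      = (\<Sum>C\<in>rows Z. mset (map (row_alpha Z C) [0..<row_len Z C]))"
  proof (rule sum.cong[OF refl])
    fix C assume C: "C \<in> rows Z"
    show "mset (map (\<lambda>k. \<Sum>D\<in>cols Z. mult Z C D - k) [0..<Max (mult Z C ` cols Z)])
        = mset (map (row_alpha Z C) [0..<row_len Z C])"
      using row_alpha_eq[OF Z] Max_mult_eq[OF Z C] by simp
  qed
  then show ?thesis by (simp add: alphaZ_def)
qed

lemma length_desc_list: "length (desc_list M) = size M"
  by (metis desc_list_def length_rev mset_sorted_list_of_multiset size_mset)

lemma sum_list_desc_list: "sum_list (map f (desc_list M)) = sum_mset (image_mset f M)"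
proof -
  have "sum_list (map f (desc_list M)) = sum_mset (mset (map f (desc_list M)))"
    by (rule sum_mset_sum_list[symmetric])
  also have "mset (map f (desc_list M)) = image_mset f M" by (simp add: desc_list_def)
  finally show ?thesis .
qed

lemma set_desc_list: "set (desc_list M) = set_mset M"
  by (simp add: desc_list_def)

lemma size_Sum_mset: "size (\<Sum>C\<in>A. M C) = (\<Sum>C\<in>A. size (M C :: 'd multiset))"
  by (induction A rule: infinite_finite_induct) auto

lemma image_Sum_mset: "sum_mset (image_mset f (\<Sum>C\<in>A. M C))
    = (\<Sum>C\<in>A. sum_mset (image_mset f (M C :: 'd multiset)))"
  by (induction A rule: infinite_finite_induct) auto

lemma in_Sum_mset: "x \<in># (\<Sum>C\<in>A. M C) \<Longrightarrow> \<exists>C\<in>A. x \<in># M C"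
  by (induction A rule: infinite_finite_induct) auto

lemma sum_image_mset_mset: "sum_mset (image_mset g (mset xs)) = sum_list (map g xs)"
  by (induction xs) auto

lemma length_alphaZ:
  assumes Z: "fat_point_scheme Z"
  shows "length (alphaZ Z) = (\<Sum>C\<in>rows Z. row_len Z C)"
  by (simp add: alphaZ_eq[OF Z] length_desc_list size_Sum_mset)

lemma sum_min_alphaZ:
  assumes Z: "fat_point_scheme Z"
  shows "sum_min (alphaZ Z) j = (\<Sum>C\<in>rows Z. \<Sum>k<row_len Z C. min (row_alpha Z C k) (j + 1))"
proof -
  have "sum_min (alphaZ Z) j
      = (\<Sum>C\<in>rows Z. sum_mset (image_mset (\<lambda>x. min x (j + 1)) (mset (map (row_alpha Z C) [0..<row_len Z C]))))"
    by (simp add: sum_min_def alphaZ_eq[OF Z] sum_list_desc_list image_Sum_mset)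
  also have "\<dots> = (\<Sum>C\<in>rows Z. \<Sum>k<row_len Z C. min (row_alpha Z C k) (j + 1))"
  proof (rule sum.cong[OF refl])
    fix C
    have "sum_mset (image_mset (\<lambda>x. min x (j + 1)) (mset (map (row_alpha Z C) [0..<row_len Z C])))
        = sum_list (map (\<lambda>k. min (row_alpha Z C k) (j + 1)) [0..<row_len Z C])"
      by (simp only: sum_image_mset_mset map_map comp_def)
    also have "\<dots> = (\<Sum>k\<in>set [0..<row_len Z C]. min (row_alpha Z C k) (j + 1))"
      by (rule sum_set_upt_conv_sum_list_nat[symmetric])
    also have "\<dots> = (\<Sum>k<row_len Z C. min (row_alpha Z C k) (j + 1))" by (simp add: atLeast0LessThan)
    finally show "sum_mset (image_mset (\<lambda>x. min x (j + 1)) (mset (map (row_alpha Z C) [0..<row_len Z C])))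
        = (\<Sum>k<row_len Z C. min (row_alpha Z C k) (j + 1))" .
  qed
  finally show ?thesis .
qed

lemma row_alpha_zero:
  assumes "row_len Z C \<le> u"
  shows "row_alpha Z C u = 0"
  unfolding row_alpha_def
proof (rule sum.neutral, rule ballI)
  fix e assume e: "e \<in> row_entries Z C"
  have "pt_mult e \<le> row_len Z C"
    unfolding row_len_def by (rule Max_ge) (use e finite_row_entries[of Z C] in auto)
  then show "pt_mult e - u = 0" using assms by simp
qed

lemma hilb_eq_sum_min_alphaZ:
  fixes Z :: "'k::field fatpts"
  assumes Z: "fat_point_scheme Z"
  shows "hilb Z (length (alphaZ Z) - 1) j = sum_min (alphaZ Z) j"
proof -
  let ?m = "length (alphaZ Z)"
  have m: "?m = (\<Sum>C\<in>rows Z. row_len Z C)" by (rule length_alphaZ[OF Z])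
  have deg: "(\<Sum>C\<in>rows Z. row_len Z C) \<le> (?m - 1) + 1" using m by linarith
  have "hilb Z (?m - 1) j = (\<Sum>C\<in>rows Z. \<Sum>u\<le>?m - 1. min (row_alpha Z C u) (j + 1))"
    by (rule hilb_eq_sum_rows[OF Z deg])
  also have "\<dots> = (\<Sum>C\<in>rows Z. \<Sum>k<row_len Z C. min (row_alpha Z C k) (j + 1))"
  proof (rule sum.cong[OF refl])
    fix C assume C: "C \<in> rows Z"
    have "row_len Z C \<le> (\<Sum>C\<in>rows Z. row_len Z C)"
      by (rule member_le_sum) (use C finite_rows in auto)
    then have le: "row_len Z C \<le> ?m" using m by simp
    show "(\<Sum>u\<le>?m - 1. min (row_alpha Z C u) (j + 1))
        = (\<Sum>k<row_len Z C. min (row_alpha Z C k) (j + 1))"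
    proof (rule sum.mono_neutral_right)
      show "{..<row_len Z C} \<subseteq> {..?m - 1}" using le by auto
      show "\<forall>u\<in>{..?m - 1} - {..<row_len Z C}. min (row_alpha Z C u) (j + 1) = 0"
        by (auto simp: row_alpha_zero)
    qed simp
  qed
  also have "\<dots> = sum_min (alphaZ Z) j" by (rule sum_min_alphaZ[OF Z, symmetric])
  finally show ?thesis .
qed

lemma foldr_max_le: "(\<forall>x\<in>set xs. x \<le> n) \<Longrightarrow> foldr max xs (0::nat) \<le> n"
  by (induction xs) auto

lemma max_alphaZ_le_length_betaZ:
  assumes Z: "fat_point_scheme Z"
  shows "foldr max (alphaZ Z) 0 \<le> length (betaZ Z)"
proof (rule foldr_max_le, rule ballI)
  fix x assume "x \<in> set (alphaZ Z)"
  then have "x \<in># (\<Sum>C\<in>rows Z. mset (map (\<lambda>k. \<Sum>D\<in>cols Z. mult Z C D - k) [0..<Max (mult Z C ` cols Z)]))"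
    by (simp add: alphaZ_def set_desc_list)
  then obtain C k where C: "C \<in> rows Z" and x: "x = (\<Sum>D\<in>cols Z. mult Z C D - k)"
    using in_Sum_mset by fastforce
  have "x \<le> (\<Sum>D\<in>cols Z. mult Z C D)" unfolding x by (rule sum_mono) simp
  also have "\<dots> \<le> (\<Sum>D\<in>cols Z. Max ((\<lambda>C. mult Z C D) ` rows Z))"
    by (rule sum_mono) (use C finite_rows in \<open>auto intro: Max_ge\<close>)
  also have "\<dots> = length (betaZ Z)"
    by (simp add: betaZ_def length_desc_list size_Sum_mset)
  finally show "x \<le> length (betaZ Z)" .
qed

theorem Delta_hilb_eq_conjugate_alphaZ:
  fixes Z :: "'k::field fatpts"
  assumes Z: "fat_point_scheme Z"
  shows "Delta (map (\<lambda>j. int (hilb Z (length (alphaZ Z) - 1) j)) [0..<length (betaZ Z)])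
      = map int (pad0 (conjugate (alphaZ Z)) (length (betaZ Z)))"
proof -
  have e: "map (\<lambda>j. int (hilb Z (length (alphaZ Z) - 1) j)) [0..<length (betaZ Z)]
      = map (\<lambda>j. int (sum_min (alphaZ Z) j)) [0..<length (betaZ Z)]"
    using hilb_eq_sum_min_alphaZ[OF Z] by simp
  show ?thesis unfolding e by (rule Delta_sum_min_eq_conjugate[OF max_alphaZ_le_length_betaZ[OF Z]])
qed

section \<open>Exchanging the two factors\<close>

definition swap_var :: "nat \<Rightarrow> 'k::comm_ring_1 mpol" where
  "swap_var v = (if v = 0 then var 2 else if v = 1 then var 3 else if v = 2 then var 0 else if v = 3 then var 1 else var v)"

definition swap_xy :: "'k::comm_ring_1 mpol \<Rightarrow> 'k mpol" where
  "swap_xy F = poly_subst swap_var F"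

lemma swap_xy_swap_xy: "swap_xy (swap_xy F) = F"
proof -
  have "(\<lambda>v. poly_subst swap_var (swap_var v)) = (var :: nat \<Rightarrow> 'a mpol)"
    by (rule ext) (simp add: swap_var_def)
  then show ?thesis by (simp add: swap_xy_def poly_subst_poly_subst)
qed

lemma swap_xy_lin1: "swap_xy (lin1 a) = lin2 a"
  by (simp add: swap_xy_def lin1_def lin2_def poly_subst_diff poly_subst_mult swap_var_def)

lemma swap_xy_lin2: "swap_xy (lin2 b) = lin1 b"
  by (simp add: swap_xy_def lin1_def lin2_def poly_subst_diff poly_subst_mult swap_var_def)

lemma swap_xy_ringR: "F \<in> ringR \<Longrightarrow> swap_xy F \<in> (ringR :: 'k::field mpol set)"
  unfolding swap_xy_def by (rule poly_subst_ringR) (auto simp: swap_var_def intro: var_ringR)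

lemma swap_xy_bihom:
  fixes F :: "'k::field mpol"
  assumes "F \<in> bihom p q"
  shows "swap_xy F \<in> bihom q p"
  unfolding swap_xy_def
proof (rule poly_subst_bihom_weighted[where \<delta> = "\<lambda>v. prod.swap (var_bideg v)"])
  show "swap_var v \<in> bihom (fst (prod.swap (var_bideg v))) (snd (prod.swap (var_bideg v)))"
    if "v \<in> {0,1,2,3}" for v
    using that var_bihom by (auto simp: swap_var_def var_bideg_def)
qed (use assms in \<open>auto simp: monset_def bideg_def var_bideg_def\<close>)

lemma swap_xy_pt_ideal_pow:
  fixes a b :: "'k::field \<times> 'k"
  assumes F: "F \<in> pt_ideal_pow (a, b) \<mu>"
  shows "swap_xy F \<in> pt_ideal_pow (b, a) \<mu>"
proof -
  obtain g where g: "\<forall>k\<le>\<mu>. g k \<in> ringR" "F = (\<Sum>k\<le>\<mu>. g k * lin1 a ^ k * lin2 b ^ (\<mu> - k))"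
    using F by (auto simp: pt_ideal_pow_def)
  have e1: "swap_xy F = (\<Sum>k\<le>\<mu>. swap_xy (g k) * swap_xy (lin1 a) ^ k * swap_xy (lin2 b) ^ (\<mu> - k))"
    unfolding g(2) swap_xy_def by (simp only: poly_subst_sum poly_subst_mult poly_subst_power)
  have "swap_xy F = (\<Sum>k\<le>\<mu>. swap_xy (g k) * lin2 a ^ k * lin1 b ^ (\<mu> - k))"
    unfolding e1 by (simp only: swap_xy_lin1 swap_xy_lin2)
  also have "\<dots> = (\<Sum>k\<le>\<mu>. swap_xy (g (\<mu> - k)) * lin1 b ^ k * lin2 a ^ (\<mu> - k))"
  proof (rule sum.reindex_bij_witness[where i="\<lambda>k. \<mu> - k" and j="\<lambda>k. \<mu> - k"])
    fix k assume k: "k \<in> {..\<mu>}"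
    then have kk: "\<mu> - (\<mu> - k) = k" by simp
    show "swap_xy (g (\<mu> - (\<mu> - k))) * lin1 b ^ (\<mu> - k) * lin2 a ^ (\<mu> - (\<mu> - k))
        = swap_xy (g k) * lin2 a ^ k * lin1 b ^ (\<mu> - k)"
      unfolding kk by (simp only: mult.assoc mult.commute[of "lin1 b ^ (\<mu> - k)"])
  qed auto
  finally have "swap_xy F
      = (\<Sum>k\<le>\<mu>. swap_xy (g (\<mu> - k)) * lin1 (fst (b, a)) ^ k * lin2 (snd (b, a)) ^ (\<mu> - k))" by simp
  moreover have "\<forall>k\<le>\<mu>. swap_xy (g (\<mu> - k)) \<in> ringR"
  proof (intro allI impI)
    fix k assume "k \<le> \<mu>"
    have "\<mu> - k \<le> \<mu>" by simp
    then show "swap_xy (g (\<mu> - k)) \<in> ringR" using g(1) swap_xy_ringR by blast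
  qed
  ultimately show ?thesis unfolding pt_ideal_pow_def by auto
qed

definition swap_entry :: "(('k \<times> 'k) \<times> ('k \<times> 'k)) \<times> nat \<Rightarrow> (('k \<times> 'k) \<times> ('k \<times> 'k)) \<times> nat" where
  "swap_entry e = ((snd (fst e), fst (fst e)), snd e)"

definition swap_fatpts :: "'k fatpts \<Rightarrow> 'k fatpts" where
  "swap_fatpts Z = map swap_entry Z"

lemma swap_entry_swap_entry [simp]: "swap_entry (swap_entry e) = e"
  by (simp add: swap_entry_def)

lemma swap_fatpts_swap_fatpts [simp]: "swap_fatpts (swap_fatpts Z) = Z"
  by (simp add: swap_fatpts_def comp_def)

lemma fat_point_scheme_swap:
  assumes "fat_point_scheme Z"
  shows "fat_point_scheme (swap_fatpts Z)"
  using assms by (force simp: fat_point_scheme_def swap_fatpts_def swap_entry_def)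

lemma fat_ideal_mem: "F \<in> fat_ideal Z \<longleftrightarrow> F \<in> ringR \<and> (\<forall>e\<in>set Z. F \<in> pt_ideal_pow (fst e) (snd e))"
  by (auto simp: fat_ideal_def)

lemma swap_xy_fat_ideal:
  fixes Z :: "'k::field fatpts"
  assumes F: "F \<in> fat_ideal Z \<inter> bihom i j"
  shows "swap_xy F \<in> fat_ideal (swap_fatpts Z) \<inter> bihom j i"
proof -
  have "swap_xy F \<in> pt_ideal_pow (fst (swap_entry e)) (snd (swap_entry e))" if e: "e \<in> set Z" for e
  proof -
    have "F \<in> pt_ideal_pow (fst (fst e), snd (fst e)) (snd e)"
      using F e by (simp add: fat_ideal_mem)
    then have "swap_xy F \<in> pt_ideal_pow (snd (fst e), fst (fst e)) (snd e)"
      by (rule swap_xy_pt_ideal_pow)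
    then show ?thesis by (simp add: swap_entry_def)
  qed
  moreover have "swap_xy F \<in> ringR" using F swap_xy_ringR by (auto simp: fat_ideal_mem)
  moreover have "swap_xy F \<in> bihom j i" using F swap_xy_bihom by blast
  ultimately show ?thesis by (auto simp: fat_ideal_mem swap_fatpts_def)
qed

lemma swap_xy_image_fat_ideal:
  fixes Z :: "'k::field fatpts"
  shows "swap_xy ` (fat_ideal Z \<inter> bihom i j) = fat_ideal (swap_fatpts Z) \<inter> bihom j i"
proof
  show "swap_xy ` (fat_ideal Z \<inter> bihom i j) \<subseteq> fat_ideal (swap_fatpts Z) \<inter> bihom j i"
    using swap_xy_fat_ideal by blast
  show "fat_ideal (swap_fatpts Z) \<inter> bihom j i \<subseteq> swap_xy ` (fat_ideal Z \<inter> bihom i j)"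
    using swap_xy_fat_ideal[of _ "swap_fatpts Z" j i] swap_xy_swap_xy
      by (metis image_eqI subsetI swap_fatpts_swap_fatpts)
qed

lemma subspace_fat_ideal_bihom: "kv.subspace (fat_ideal Z \<inter> bihom i j :: 'k::field mpol set)"
proof -
  have "fat_ideal Z \<inter> bihom i j = bihom i j \<inter> (\<Inter>e\<in>set Z. pt_ideal_pow (fst e) (snd e))"
  proof (intro equalityI subsetI)
    fix F assume "F \<in> bihom i j \<inter> (\<Inter>e\<in>set Z. pt_ideal_pow (fst e) (snd e))"
    moreover have "F \<in> bihom i j \<Longrightarrow> F \<in> ringR" using bihom_ringR by blast
    ultimately show "F \<in> fat_ideal Z \<inter> bihom i j" unfolding fat_ideal_mem Int_iff INT_iff by blast
  qed (unfold fat_ideal_mem Int_iff INT_iff, blast)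
  then show ?thesis
    by (simp add: kv.subspace_inter subspace_bihom kv.subspace_Int subspace_pt_ideal_pow)
qed

lemma hilb_swap:
  fixes Z :: "'k::field fatpts"
  shows "hilb (swap_fatpts Z) j i = hilb Z i j"
proof -
  have "inj_on swap_xy (fat_ideal Z \<inter> bihom i j :: 'k mpol set)"
    by (rule inj_on_inverseI[where g = swap_xy]) (simp add: swap_xy_swap_xy)
  then have "kv.dim (swap_xy ` (fat_ideal Z \<inter> bihom i j)) = kv.dim (fat_ideal Z \<inter> bihom i j)"
    unfolding swap_xy_def
    by (rule dim_inj_image[OF linear_poly_subst subspace_fat_ideal_bihom[unfolded swap_xy_def]
          kv.fin_dim_subset[OF fin_dim_bihom Int_lower2]])
  then show ?thesis
    by (simp add: hilb_def kdim_eq dim_bihom swap_xy_image_fat_ideal mult.commute)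
qed

lemma rows_swap_fatpts: "rows (swap_fatpts Z) = cols Z"
  by (simp add: rows_eq cols_eq swap_fatpts_def image_image pt1_def pt2_def swap_entry_def)

lemma cols_swap_fatpts: "cols (swap_fatpts Z) = rows Z"
  by (simp add: rows_eq cols_eq swap_fatpts_def image_image pt1_def pt2_def swap_entry_def)

lemma mult_swap_fatpts: "mult (swap_fatpts Z) D C = mult Z C D"
proof -
  let ?P = "\<lambda>((a,b),m). proj_class a = D \<and> proj_class b = C"
  let ?Q = "\<lambda>((a,b),m). proj_class a = C \<and> proj_class b = D"
  have "filter ?P (map swap_entry Z) = map swap_entry (filter (?P \<circ> swap_entry) Z)"
    by (simp add: filter_map)
  moreover have "filter (?P \<circ> swap_entry) Z = filter ?Q Z"
    by (rule filter_cong[OF refl]) (auto simp: swap_entry_def split: prod.splits)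
  ultimately have "filter ?P (map swap_entry Z) = map swap_entry (filter ?Q Z)" by simp
  moreover have "snd \<circ> swap_entry = (snd :: (('a \<times> 'a) \<times> ('a \<times> 'a)) \<times> nat \<Rightarrow> nat)"
    by (rule ext) (simp add: swap_entry_def)
  ultimately show ?thesis by (simp add: mult_def swap_fatpts_def)
qed

lemma alphaZ_swap_fatpts: "alphaZ (swap_fatpts Z) = betaZ Z"
  by (simp add: alphaZ_def betaZ_def rows_swap_fatpts cols_swap_fatpts mult_swap_fatpts)

lemma betaZ_swap_fatpts: "betaZ (swap_fatpts Z) = alphaZ Z"
  by (simp add: alphaZ_def betaZ_def rows_swap_fatpts cols_swap_fatpts mult_swap_fatpts)

theorem corollary3p12:
  fixes Z :: "'k::alg_closed_field fatpts"
  assumes "fat_point_scheme Z"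
  defines "m \<equiv> length (alphaZ Z)" and "m' \<equiv> length (betaZ Z)"
  shows "Delta (map (\<lambda>j. int (hilb Z (m - 1) j)) [0..<m'])
           = map int (pad0 (conjugate (alphaZ Z)) m')
       \<and> Delta (map (\<lambda>i. int (hilb Z i (m' - 1))) [0..<m])
           = map int (pad0 (conjugate (betaZ Z)) m)"
proof
  show "Delta (map (\<lambda>j. int (hilb Z (m - 1) j)) [0..<m']) = map int (pad0 (conjugate (alphaZ Z)) m')"
    unfolding m_def m'_def by (rule Delta_hilb_eq_conjugate_alphaZ[OF assms(1)])
  have "Delta (map (\<lambda>i. int (hilb (swap_fatpts Z) (m' - 1) i)) [0..<m])
      = map int (pad0 (conjugate (betaZ Z)) m)"
    using Delta_hilb_eq_conjugate_alphaZ[OF fat_point_scheme_swap[OF assms(1)]]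
    unfolding alphaZ_swap_fatpts betaZ_swap_fatpts m_def m'_def .
  then show "Delta (map (\<lambda>i. int (hilb Z i (m' - 1))) [0..<m]) = map int (pad0 (conjugate (betaZ Z)) m)"
    unfolding hilb_swap .
qed

end
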